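(* Let $(C,\chi)$ be a Hopf heap and let $\mathrm{Tn}^r C\subseteq\mathrm{End}_{\mathbb{F}}(C)$ be the linear span of all right translations $\tau_a^b$, $a,b\in C$. (1) $\mathrm{Tn}^r C$ is a bialgebra with multiplication the opposite composition, i.e. $\tau_a^b\tau_c^d=\tau_c^d\circ\tau_a^b=\tau_a^{[b,c,d]}$, identity $\mathrm{id}_C$, and (well-defined) coproduct and counit $\Delta(\tau_a^b)=\sum\tau_{a_{(2)}}^{b_{(1)}}\otimes\tau_{a_{(1)}}^{b_{(2)}}$, $\varepsilon(\tau_a^b)=\varepsilon(a)\varepsilon(b)$. (2) If $(C,\chi)$ admits a Grunspan map $\vartheta$, then $\mathrm{Tn}^r C$ is a Hopf algebra with antipode $S(\tau_a^b)=\tau_b^{\vartheta(a)}$. (3) If $f:C\to D$ is a morphism of Hopf heaps, then $\mathrm{Tn}^r f:\mathrm{Tn}^r C\to\mathrm{Tn}^r D$, $\tau_a^b\mapsto\tau_{f(a)}^{f(b)}$, is a (well-defined) bialgebra map, and a Hopf algebra map when both have Grunspan maps. (4) $C\mapsto\mathrm{Tn}^r C$, $f\mapsto\mathrm{Tn}^r f$ is a functor from Hopf heaps to bialgebras (from Hopf heaps with Grunspan maps to Hopf algebras).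
   Context: Work over a field $\mathbb{F}$; coalgebras are coassociative, counital, nonzero, with Sweedler notation; $C^{\mathrm{co}}$ is the co-opposite coalgebra. A Hopf heap is a coalgebra $C$ with a coalgebra map $\chi:C\otimes C^{\mathrm{co}}\otimes C\to C$, $a\otimes b\otimes c\mapsto[a,b,c]$, such that $[[a,b,c],d,e]=[a,b,[c,d,e]]$ and $\sum[c_{(1)},c_{(2)},a]=\sum[a,c_{(1)},c_{(2)}]=\varepsilon(c)a$. A morphism of Hopf heaps is a coalgebra map $f$ with $f([a,b,c])=[f(a),f(b),f(c)]$. The right $(a,b)$-translation is $\tau_a^b:C\to C$, $c\mapsto[c,a,b]$. A Grunspan map is a coalgebra map $\vartheta:C\to C$ with $[[a,b,\vartheta(c)],d,e]=[a,[d,c,b],e]$ for all $a,b,c,d,e$. *)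

theory Defs
  imports Main "HOL-Library.Function_Algebras"
begin

text \<open>A vector space over the field 'k is realised as a subspace of the
function space 'z => 'k (pointwise operations, from Function_Algebras).
The tensor product of two such subspaces U, W is realised as the span of the
functions tens u w in ('z * 'y => 'k); the natural map from the abstract tensor
product into this function space is injective, so this is a faithful model.
An element t of U (x) W is handled through its representations
t = sum of tens u_i w_i with u_i in U, w_i in W (Sweedler notation).\<close>

definition sc :: "'k::field \<Rightarrow> ('z \<Rightarrow> 'k) \<Rightarrow> ('z \<Rightarrow> 'k)" where
  "sc c v = (\<lambda>x. c * v x)"

definition subspace :: "('z \<Rightarrow> 'k::field) set \<Rightarrow> bool" where
  "subspace V \<longleftrightarrow> 0 \<in> V \<and> (\<forall>u\<in>V. \<forall>w\<in>V. u + w \<in> V) \<and> (\<forall>c. \<forall>u\<in>V. sc c u \<in> V)"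

definition span :: "('z \<Rightarrow> 'k::field) set \<Rightarrow> ('z \<Rightarrow> 'k) set" where
  "span G = {v. \<exists>ps. set (map snd ps) \<subseteq> G \<and> v = sum_list (map (\<lambda>(c,g). sc c g) ps)}"

definition lin :: "('z \<Rightarrow> 'k::field) set \<Rightarrow> (('z \<Rightarrow> 'k) \<Rightarrow> ('y \<Rightarrow> 'k)) \<Rightarrow> bool" where
  "lin V f \<longleftrightarrow> (\<forall>u\<in>V. \<forall>w\<in>V. f (u + w) = f u + f w) \<and> (\<forall>c. \<forall>u\<in>V. f (sc c u) = sc c (f u))"

definition linf :: "('z \<Rightarrow> 'k::field) set \<Rightarrow> (('z \<Rightarrow> 'k) \<Rightarrow> 'k) \<Rightarrow> bool" where
  "linf V f \<longleftrightarrow> (\<forall>u\<in>V. \<forall>w\<in>V. f (u + w) = f u + f w) \<and> (\<forall>c. \<forall>u\<in>V. f (sc c u) = c * f u)"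

definition tens :: "('z \<Rightarrow> 'k::times) \<Rightarrow> ('y \<Rightarrow> 'k) \<Rightarrow> ('z \<times> 'y \<Rightarrow> 'k)" where
  "tens u w = (\<lambda>(x,y). u x * w y)"

definition trep :: "('z \<Rightarrow> 'k) set \<Rightarrow> ('y \<Rightarrow> 'k) set \<Rightarrow> ('z \<times> 'y \<Rightarrow> 'k::field)
    \<Rightarrow> (('z \<Rightarrow> 'k) \<times> ('y \<Rightarrow> 'k)) list \<Rightarrow> bool" where
  "trep U W t ps \<longleftrightarrow> set ps \<subseteq> U \<times> W \<and> t = sum_list (map (\<lambda>(u,w). tens u w) ps)"

definition reassoc :: "('x \<times> ('y \<times> 'z) \<Rightarrow> 'k) \<Rightarrow> (('x \<times> 'y) \<times> 'z \<Rightarrow> 'k)" where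
  "reassoc t = (\<lambda>((x,y),z). t (x,(y,z)))"

definition coalgebra :: "('z \<Rightarrow> 'k::field) set \<Rightarrow> (('z \<Rightarrow> 'k) \<Rightarrow> ('z \<times> 'z \<Rightarrow> 'k))
    \<Rightarrow> (('z \<Rightarrow> 'k) \<Rightarrow> 'k) \<Rightarrow> bool" where
  "coalgebra V Dl ep \<longleftrightarrow> subspace V \<and> V \<noteq> {0} \<and> lin V Dl \<and> linf V ep \<and>
    (\<forall>a\<in>V. \<exists>ps. trep V V (Dl a) ps) \<and>
    (\<forall>a\<in>V. \<forall>ps. trep V V (Dl a) ps \<longrightarrow>
        sum_list (map (\<lambda>(u,w). tens (Dl u) w) ps)
          = reassoc (sum_list (map (\<lambda>(u,w). tens u (Dl w)) ps))
      \<and> sum_list (map (\<lambda>(u,w). sc (ep u) w) ps) = a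
      \<and> sum_list (map (\<lambda>(u,w). sc (ep w) u) ps) = a)"

definition bialgebra :: "('z \<Rightarrow> 'k::field) set \<Rightarrow> (('z \<Rightarrow> 'k) \<Rightarrow> ('z \<Rightarrow> 'k) \<Rightarrow> ('z \<Rightarrow> 'k))
    \<Rightarrow> ('z \<Rightarrow> 'k) \<Rightarrow> (('z \<Rightarrow> 'k) \<Rightarrow> ('z \<times> 'z \<Rightarrow> 'k)) \<Rightarrow> (('z \<Rightarrow> 'k) \<Rightarrow> 'k) \<Rightarrow> bool" where
  "bialgebra A m u Dl ep \<longleftrightarrow> coalgebra A Dl ep \<and> u \<in> A \<and>
    (\<forall>a\<in>A. \<forall>b\<in>A. m a b \<in> A) \<and>
    (\<forall>b\<in>A. lin A (\<lambda>a. m a b)) \<and> (\<forall>a\<in>A. lin A (m a)) \<and>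
    (\<forall>a\<in>A. \<forall>b\<in>A. \<forall>c\<in>A. m (m a b) c = m a (m b c)) \<and>
    (\<forall>a\<in>A. m u a = a \<and> m a u = a) \<and>
    Dl u = tens u u \<and> ep u = 1 \<and>
    (\<forall>a\<in>A. \<forall>b\<in>A. ep (m a b) = ep a * ep b \<and>
       (\<forall>ps qs. trep A A (Dl a) ps \<longrightarrow> trep A A (Dl b) qs \<longrightarrow>
          Dl (m a b) = sum_list (map (\<lambda>(a1,a2). sum_list (map (\<lambda>(b1,b2).
                          tens (m a1 b1) (m a2 b2)) qs)) ps)))"

definition hopf_algebra :: "('z \<Rightarrow> 'k::field) set \<Rightarrow> (('z \<Rightarrow> 'k) \<Rightarrow> ('z \<Rightarrow> 'k) \<Rightarrow> ('z \<Rightarrow> 'k))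
    \<Rightarrow> ('z \<Rightarrow> 'k) \<Rightarrow> (('z \<Rightarrow> 'k) \<Rightarrow> ('z \<times> 'z \<Rightarrow> 'k)) \<Rightarrow> (('z \<Rightarrow> 'k) \<Rightarrow> 'k)
    \<Rightarrow> (('z \<Rightarrow> 'k) \<Rightarrow> ('z \<Rightarrow> 'k)) \<Rightarrow> bool" where
  "hopf_algebra A m u Dl ep S \<longleftrightarrow> bialgebra A m u Dl ep \<and> lin A S \<and> (\<forall>a\<in>A. S a \<in> A) \<and>
    (\<forall>a\<in>A. \<forall>ps. trep A A (Dl a) ps \<longrightarrow>
        sum_list (map (\<lambda>(x,y). m (S x) y) ps) = sc (ep a) u
      \<and> sum_list (map (\<lambda>(x,y). m x (S y)) ps) = sc (ep a) u)"

definition bialg_map :: "('z \<Rightarrow> 'k::field) set \<Rightarrow> (('z \<Rightarrow> 'k) \<Rightarrow> ('z \<Rightarrow> 'k) \<Rightarrow> ('z \<Rightarrow> 'k))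
    \<Rightarrow> ('z \<Rightarrow> 'k) \<Rightarrow> (('z \<Rightarrow> 'k) \<Rightarrow> ('z \<times> 'z \<Rightarrow> 'k)) \<Rightarrow> (('z \<Rightarrow> 'k) \<Rightarrow> 'k)
    \<Rightarrow> ('w \<Rightarrow> 'k) set \<Rightarrow> (('w \<Rightarrow> 'k) \<Rightarrow> ('w \<Rightarrow> 'k) \<Rightarrow> ('w \<Rightarrow> 'k))
    \<Rightarrow> ('w \<Rightarrow> 'k) \<Rightarrow> (('w \<Rightarrow> 'k) \<Rightarrow> ('w \<times> 'w \<Rightarrow> 'k)) \<Rightarrow> (('w \<Rightarrow> 'k) \<Rightarrow> 'k)
    \<Rightarrow> (('z \<Rightarrow> 'k) \<Rightarrow> ('w \<Rightarrow> 'k)) \<Rightarrow> bool" where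
  "bialg_map A m u Dl ep B m' u' Dl' ep' \<phi> \<longleftrightarrow> lin A \<phi> \<and> \<phi> ` A \<subseteq> B \<and>
    (\<forall>a\<in>A. \<forall>b\<in>A. \<phi> (m a b) = m' (\<phi> a) (\<phi> b)) \<and> \<phi> u = u' \<and>
    (\<forall>a\<in>A. ep' (\<phi> a) = ep a \<and>
       (\<forall>ps. trep A A (Dl a) ps \<longrightarrow> Dl' (\<phi> a) = sum_list (map (\<lambda>(x,y). tens (\<phi> x) (\<phi> y)) ps)))"

text \<open>The coalgebra C is modelled, via a chosen basis 'a, as the space FS of
finitely supported functions 'a => 'k.  The heap map chi is given by its
values [a,b,c] = br a b c on pure tensors (a trilinear map).\<close>

definition FS :: "('a \<Rightarrow> 'k::zero) set" where
  "FS = {v. finite {x. v x \<noteq> 0}}"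

definition hopf_heap :: "(('a \<Rightarrow> 'k::field) \<Rightarrow> ('a \<times> 'a \<Rightarrow> 'k)) \<Rightarrow> (('a \<Rightarrow> 'k) \<Rightarrow> 'k)
    \<Rightarrow> (('a \<Rightarrow> 'k) \<Rightarrow> ('a \<Rightarrow> 'k) \<Rightarrow> ('a \<Rightarrow> 'k) \<Rightarrow> ('a \<Rightarrow> 'k)) \<Rightarrow> bool" where
  "hopf_heap Dl ep br \<longleftrightarrow> coalgebra FS Dl ep \<and>
    (\<forall>a\<in>FS. \<forall>b\<in>FS. \<forall>c\<in>FS. br a b c \<in> FS) \<and>
    (\<forall>b\<in>FS. \<forall>c\<in>FS. lin FS (\<lambda>a. br a b c)) \<and>
    (\<forall>a\<in>FS. \<forall>c\<in>FS. lin FS (\<lambda>b. br a b c)) \<and>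
    (\<forall>a\<in>FS. \<forall>b\<in>FS. lin FS (\<lambda>c. br a b c)) \<and>
    (\<forall>a\<in>FS. \<forall>b\<in>FS. \<forall>c\<in>FS. ep (br a b c) = ep a * ep b * ep c \<and>
       (\<forall>ps qs rs. trep FS FS (Dl a) ps \<longrightarrow> trep FS FS (Dl b) qs \<longrightarrow> trep FS FS (Dl c) rs \<longrightarrow>
          Dl (br a b c) = sum_list (map (\<lambda>(a1,a2). sum_list (map (\<lambda>(b1,b2).
              sum_list (map (\<lambda>(c1,c2). tens (br a1 b2 c1) (br a2 b1 c2)) rs)) qs)) ps))) \<and>
    (\<forall>a\<in>FS. \<forall>b\<in>FS. \<forall>c\<in>FS. \<forall>d\<in>FS. \<forall>e\<in>FS. br (br a b c) d e = br a b (br c d e)) \<and>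
    (\<forall>a\<in>FS. \<forall>c\<in>FS. \<forall>ps. trep FS FS (Dl c) ps \<longrightarrow>
        sum_list (map (\<lambda>(c1,c2). br c1 c2 a) ps) = sc (ep c) a
      \<and> sum_list (map (\<lambda>(c1,c2). br a c1 c2) ps) = sc (ep c) a)"

definition coalg_map :: "(('a \<Rightarrow> 'k::field) \<Rightarrow> ('a \<times> 'a \<Rightarrow> 'k)) \<Rightarrow> (('a \<Rightarrow> 'k) \<Rightarrow> 'k)
    \<Rightarrow> (('b \<Rightarrow> 'k) \<Rightarrow> ('b \<times> 'b \<Rightarrow> 'k)) \<Rightarrow> (('b \<Rightarrow> 'k) \<Rightarrow> 'k)
    \<Rightarrow> (('a \<Rightarrow> 'k) \<Rightarrow> ('b \<Rightarrow> 'k)) \<Rightarrow> bool" where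
  "coalg_map Dl ep Dl' ep' f \<longleftrightarrow> lin FS f \<and> f ` FS \<subseteq> FS \<and>
    (\<forall>a\<in>FS. ep' (f a) = ep a \<and>
       (\<forall>ps. trep FS FS (Dl a) ps \<longrightarrow> Dl' (f a) = sum_list (map (\<lambda>(u,w). tens (f u) (f w)) ps)))"

definition heap_morph :: "(('a \<Rightarrow> 'k::field) \<Rightarrow> ('a \<times> 'a \<Rightarrow> 'k)) \<Rightarrow> (('a \<Rightarrow> 'k) \<Rightarrow> 'k)
    \<Rightarrow> (('a \<Rightarrow> 'k) \<Rightarrow> ('a \<Rightarrow> 'k) \<Rightarrow> ('a \<Rightarrow> 'k) \<Rightarrow> ('a \<Rightarrow> 'k))
    \<Rightarrow> (('b \<Rightarrow> 'k) \<Rightarrow> ('b \<times> 'b \<Rightarrow> 'k)) \<Rightarrow> (('b \<Rightarrow> 'k) \<Rightarrow> 'k)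
    \<Rightarrow> (('b \<Rightarrow> 'k) \<Rightarrow> ('b \<Rightarrow> 'k) \<Rightarrow> ('b \<Rightarrow> 'k) \<Rightarrow> ('b \<Rightarrow> 'k))
    \<Rightarrow> (('a \<Rightarrow> 'k) \<Rightarrow> ('b \<Rightarrow> 'k)) \<Rightarrow> bool" where
  "heap_morph Dl ep br Dl' ep' br' f \<longleftrightarrow> coalg_map Dl ep Dl' ep' f \<and>
    (\<forall>a\<in>FS. \<forall>b\<in>FS. \<forall>c\<in>FS. f (br a b c) = br' (f a) (f b) (f c))"

definition grunspan :: "(('a \<Rightarrow> 'k::field) \<Rightarrow> ('a \<times> 'a \<Rightarrow> 'k)) \<Rightarrow> (('a \<Rightarrow> 'k) \<Rightarrow> 'k)
    \<Rightarrow> (('a \<Rightarrow> 'k) \<Rightarrow> ('a \<Rightarrow> 'k) \<Rightarrow> ('a \<Rightarrow> 'k) \<Rightarrow> ('a \<Rightarrow> 'k))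
    \<Rightarrow> (('a \<Rightarrow> 'k) \<Rightarrow> ('a \<Rightarrow> 'k)) \<Rightarrow> bool" where
  "grunspan Dl ep br \<theta> \<longleftrightarrow> coalg_map Dl ep Dl ep \<theta> \<and>
    (\<forall>a\<in>FS. \<forall>b\<in>FS. \<forall>c\<in>FS. \<forall>d\<in>FS. \<forall>e\<in>FS. br (br a b (\<theta> c)) d e = br a (br d c b) e)"

text \<open>An endomorphism g of C is represented by the function (c,x) |-> (g c) x
for c in C, and 0 for c outside C.\<close>

definition end_of :: "(('a \<Rightarrow> 'k) \<Rightarrow> ('a \<Rightarrow> 'k)) \<Rightarrow> (('a \<Rightarrow> 'k) \<times> 'a \<Rightarrow> 'k::zero)" where
  "end_of g = (\<lambda>(c,x). if c \<in> FS then g c x else 0)"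

definition app :: "(('a \<Rightarrow> 'k) \<times> 'a \<Rightarrow> 'k) \<Rightarrow> ('a \<Rightarrow> 'k) \<Rightarrow> ('a \<Rightarrow> 'k)" where
  "app F c = (\<lambda>x. F (c,x))"

definition tau :: "(('a \<Rightarrow> 'k) \<Rightarrow> ('a \<Rightarrow> 'k) \<Rightarrow> ('a \<Rightarrow> 'k) \<Rightarrow> ('a \<Rightarrow> 'k))
    \<Rightarrow> ('a \<Rightarrow> 'k) \<Rightarrow> ('a \<Rightarrow> 'k) \<Rightarrow> (('a \<Rightarrow> 'k) \<times> 'a \<Rightarrow> 'k::zero)" where
  "tau br a b = end_of (\<lambda>c. br c a b)"

definition Tn :: "(('a \<Rightarrow> 'k) \<Rightarrow> ('a \<Rightarrow> 'k) \<Rightarrow> ('a \<Rightarrow> 'k) \<Rightarrow> ('a \<Rightarrow> 'k))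
    \<Rightarrow> (('a \<Rightarrow> 'k) \<times> 'a \<Rightarrow> 'k::field) set" where
  "Tn br = span {tau br a b | a b. a \<in> FS \<and> b \<in> FS}"

definition tn_mult :: "(('a \<Rightarrow> 'k) \<times> 'a \<Rightarrow> 'k::zero) \<Rightarrow> (('a \<Rightarrow> 'k) \<times> 'a \<Rightarrow> 'k)
    \<Rightarrow> (('a \<Rightarrow> 'k) \<times> 'a \<Rightarrow> 'k)" where
  "tn_mult F G = end_of (\<lambda>c. app G (app F c))"

definition tn_unit :: "(('a \<Rightarrow> 'k) \<times> 'a \<Rightarrow> 'k::zero)" where
  "tn_unit = end_of (\<lambda>c. c)"

definition tn_struct :: "(('a \<Rightarrow> 'k) \<Rightarrow> ('a \<Rightarrow> 'k) \<Rightarrow> ('a \<Rightarrow> 'k) \<Rightarrow> ('a \<Rightarrow> 'k))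
    \<Rightarrow> (('a \<Rightarrow> 'k::field) \<Rightarrow> ('a \<times> 'a \<Rightarrow> 'k)) \<Rightarrow> (('a \<Rightarrow> 'k) \<Rightarrow> 'k)
    \<Rightarrow> ((('a \<Rightarrow> 'k) \<times> 'a \<Rightarrow> 'k) \<Rightarrow> (((('a \<Rightarrow> 'k) \<times> 'a) \<times> (('a \<Rightarrow> 'k) \<times> 'a)) \<Rightarrow> 'k))
    \<Rightarrow> ((('a \<Rightarrow> 'k) \<times> 'a \<Rightarrow> 'k) \<Rightarrow> 'k) \<Rightarrow> bool" where
  "tn_struct br Dl ep DT eT \<longleftrightarrow> lin (Tn br) DT \<and> linf (Tn br) eT \<and>
    (\<forall>a\<in>FS. \<forall>b\<in>FS. eT (tau br a b) = ep a * ep b \<and>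
      (\<forall>ps qs. trep FS FS (Dl a) ps \<longrightarrow> trep FS FS (Dl b) qs \<longrightarrow>
         DT (tau br a b) = sum_list (map (\<lambda>(a1,a2). sum_list (map (\<lambda>(b1,b2).
              tens (tau br a2 b1) (tau br a1 b2)) qs)) ps)))"

definition tn_antipode :: "(('a \<Rightarrow> 'k) \<Rightarrow> ('a \<Rightarrow> 'k) \<Rightarrow> ('a \<Rightarrow> 'k) \<Rightarrow> ('a \<Rightarrow> 'k))
    \<Rightarrow> (('a \<Rightarrow> 'k) \<Rightarrow> ('a \<Rightarrow> 'k))
    \<Rightarrow> ((('a \<Rightarrow> 'k) \<times> 'a \<Rightarrow> 'k::field) \<Rightarrow> (('a \<Rightarrow> 'k) \<times> 'a \<Rightarrow> 'k)) \<Rightarrow> bool" where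
  "tn_antipode br \<theta> S \<longleftrightarrow> lin (Tn br) S \<and>
    (\<forall>a\<in>FS. \<forall>b\<in>FS. S (tau br a b) = tau br b (\<theta> a))"

definition tn_map :: "(('a \<Rightarrow> 'k) \<Rightarrow> ('a \<Rightarrow> 'k) \<Rightarrow> ('a \<Rightarrow> 'k) \<Rightarrow> ('a \<Rightarrow> 'k))
    \<Rightarrow> (('b \<Rightarrow> 'k) \<Rightarrow> ('b \<Rightarrow> 'k) \<Rightarrow> ('b \<Rightarrow> 'k) \<Rightarrow> ('b \<Rightarrow> 'k))
    \<Rightarrow> (('a \<Rightarrow> 'k) \<Rightarrow> ('b \<Rightarrow> 'k))
    \<Rightarrow> ((('a \<Rightarrow> 'k) \<times> 'a \<Rightarrow> 'k::field) \<Rightarrow> (('b \<Rightarrow> 'k) \<times> 'b \<Rightarrow> 'k)) \<Rightarrow> bool" where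
  "tn_map br br' f \<Phi> \<longleftrightarrow> lin (Tn br) \<Phi> \<and>
    (\<forall>a\<in>FS. \<forall>b\<in>FS. \<Phi> (tau br a b) = tau br' (f a) (f b))"

end

theory Submission
  imports Defs
begin

text \<open>The translations \<tau>_a^b span Tn^r C, and opposite composition of translations is again a
  translation, \<tau>_a^b \<tau>_c^d = \<tau>_a^[b,c,d], by heap associativity; this is the algebra structure.
  The coalgebra structure is prescribed on the spanning set only, so instead of proving that the
  prescription is well defined we write down linear maps on all endomorphisms that have the
  prescribed values. Fix k \<in> C with \<epsilon>(k) = 1. The heap counit law \<Sigma>[c, k1, k2] = c recovers
  every c from translations, and with coassociativity this gives, for every t,
    \<Delta>(t)(c \<otimes> d) = \<Sigma> [c, k2, t(k3)(1)] \<otimes> [d, k1, t(k3)(2)]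
  (summed over the iterated coproduct k1 \<otimes> k2 \<otimes> k3 of k and over \<Delta>(t(k3))), which on \<tau>_a^b is \<Sigma> \<tau>_a2^b1 \<otimes> \<tau>_a1^b2. In the same way S(t)(c) = \<Sigma>[c, t(k1), k2] is \<tau>_b^\<theta>(a)
  on \<tau>_a^b by the Grunspan identity, and Tn f (t)(d) = \<Sigma>[d, f(k1), f(t(k2))] sends \<tau>_a^b to
  \<tau>_f(a)^f(b). Since all maps involved are linear, each bialgebra or Hopf algebra axiom needs to
  be checked on translations only, where it reduces to the Hopf heap axioms.\<close>

section \<open>Linear algebra in function spaces\<close>

lemma sc_apply: "sc c v x = c * v x" by (simp add: sc_def)
lemma sum_list_map_apply: "sum_list (map g xs) x = sum_list (map (\<lambda>y. g y x) xs)"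
  by (induction xs) auto
lemma tens_apply[simp]: "tens u w (x,y) = u x * w y" by (simp add: tens_def)

lemma sum_list_cmult: "sum_list (map (\<lambda>x. c * f x) xs) = (c::'k::field) * sum_list (map f xs)"
  by (induction xs) (auto simp: algebra_simps)
lemma sum_list_multc: "sum_list (map (\<lambda>x. f x * c) xs) = sum_list (map f xs) * (c::'k::field)"
  by (induction xs) (auto simp: algebra_simps)
lemma sum_list_addf: "sum_list (map (\<lambda>x. f x + g x) xs) = sum_list (map f xs) + sum_list (map g xs)"
  for f g :: "_ \<Rightarrow> 'b::ab_group_add"
  by (induction xs) (auto simp: algebra_simps)
lemma sum_list_swap: "sum_list (map (\<lambda>x. sum_list (map (\<lambda>y. f x y) ys)) xs)
   = sum_list (map (\<lambda>y. sum_list (map (\<lambda>x. f x y) xs)) ys)"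
  for f :: "_ \<Rightarrow> _ \<Rightarrow> 'b::ab_group_add"
  by (induction xs) (auto simp: sum_list_addf)

lemma subspace_zero: "subspace V \<Longrightarrow> 0 \<in> V" by (simp add: subspace_def)
lemma subspace_add: "subspace V \<Longrightarrow> u \<in> V \<Longrightarrow> w \<in> V \<Longrightarrow> u + w \<in> V" by (simp add: subspace_def)
lemma subspace_sc: "subspace V \<Longrightarrow> u \<in> V \<Longrightarrow> sc c u \<in> V" by (simp add: subspace_def)
lemma sc_neg: "sc (- c) v = - sc c v" by (rule ext) (simp add: sc_apply)
lemma sc_minus_one: "sc (-1) u = - u" by (auto simp: sc_def)
lemma subspace_neg: "subspace V \<Longrightarrow> u \<in> V \<Longrightarrow> - u \<in> V"
  by (metis sc_minus_one subspace_sc)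
lemma subspace_sum_list: "subspace V \<Longrightarrow> (\<And>x. x \<in> set xs \<Longrightarrow> g x \<in> V) \<Longrightarrow> sum_list (map g xs) \<in> V"
  by (induction xs) (auto simp: subspace_zero subspace_add)

lemma lin_add: "lin V f \<Longrightarrow> u \<in> V \<Longrightarrow> w \<in> V \<Longrightarrow> f (u + w) = f u + f w" by (simp add: lin_def)
lemma lin_sc: "lin V f \<Longrightarrow> u \<in> V \<Longrightarrow> f (sc c u) = sc c (f u)" by (simp add: lin_def)
lemma lin_zero: "subspace V \<Longrightarrow> lin V f \<Longrightarrow> f 0 = 0"
proof -
  assume s: "subspace V" and l: "lin V f"
  have "f (sc 0 0) = sc 0 (f 0)" by (rule lin_sc[OF l subspace_zero[OF s]])
  moreover have "sc 0 (0::'a \<Rightarrow> 'b) = 0" by (rule ext) (simp add: sc_def)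
  moreover have "sc 0 (f 0) = 0" by (rule ext) (simp add: sc_def)
  ultimately show ?thesis by simp
qed
lemma lin_neg: "lin V f \<Longrightarrow> u \<in> V \<Longrightarrow> f (- u) = - f u"
  using lin_sc[of V f u "-1"] by (simp add: sc_minus_one)
lemma lin_sum_list: "subspace V \<Longrightarrow> lin V f \<Longrightarrow> (\<And>x. x \<in> set xs \<Longrightarrow> g x \<in> V)
   \<Longrightarrow> f (sum_list (map g xs)) = sum_list (map (\<lambda>x. f (g x)) xs)"
  by (induction xs) (auto simp: lin_zero lin_add subspace_sum_list)

lemma linf_add: "linf V f \<Longrightarrow> u \<in> V \<Longrightarrow> w \<in> V \<Longrightarrow> f (u + w) = f u + f w" by (simp add: linf_def)
lemma linf_sc: "linf V f \<Longrightarrow> u \<in> V \<Longrightarrow> f (sc c u) = c * f u" by (simp add: linf_def)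
lemma linf_zero: "subspace V \<Longrightarrow> linf V f \<Longrightarrow> f 0 = 0"
proof -
  assume s: "subspace V" and l: "linf V f"
  have "f (sc 0 0) = 0 * f 0" using l s by (simp add: linf_sc subspace_zero)
  moreover have "sc 0 (0::'a \<Rightarrow> 'b) = 0" by (rule ext) (simp add: sc_def)
  ultimately show ?thesis by simp
qed
definition bilinear :: "('z \<Rightarrow> 'k::field) set \<Rightarrow> ('y \<Rightarrow> 'k) set \<Rightarrow> (('z \<Rightarrow> 'k) \<Rightarrow> ('y \<Rightarrow> 'k) \<Rightarrow> ('v \<Rightarrow> 'k)) \<Rightarrow> bool"
  where "bilinear U W F \<longleftrightarrow> (\<forall>w\<in>W. lin U (\<lambda>u. F u w)) \<and> (\<forall>u\<in>U. lin W (\<lambda>w. F u w))"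

lemma tens_add_l: "tens (u + u') w = tens u w + tens u' w" for u :: "'z \<Rightarrow> 'k::field"
  by (rule ext) (auto simp: tens_def algebra_simps)
lemma tens_add_r: "tens u (w + w') = tens u w + tens u w'" for u :: "'z \<Rightarrow> 'k::field"
  by (rule ext) (auto simp: tens_def algebra_simps)
lemma tens_sc_l: "tens (sc c u) w = sc c (tens u w)" by (rule ext) (auto simp: tens_def sc_def)
lemma tens_sc_r: "tens u (sc c w) = sc c (tens u w)" by (rule ext) (auto simp: tens_def sc_def)
lemma tens_neg_r: "tens u (- w) = - tens u w" for u :: "'z \<Rightarrow> 'k::field"
  by (rule ext) (auto simp: tens_def)
lemma tens_zero_r: "tens u 0 = 0" for u :: "'z \<Rightarrow> 'k::field"
  by (rule ext) (auto simp: tens_def)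
lemma sc_sum_list: "sc c (sum_list (map f xs)) = sum_list (map (\<lambda>x. sc c (f x)) xs)"
  by (induction xs) (auto simp: sc_def fun_eq_iff algebra_simps)
lemma sc_add: "sc c (u + w) = sc c u + sc c w" by (rule ext) (simp add: sc_apply algebra_simps)
lemma sc_add_l: "sc (c + d) u = sc c u + sc d u" by (rule ext) (simp add: sc_apply algebra_simps)
lemma sc_sc: "sc c (sc d u) = sc (c * d) u" by (rule ext) (simp add: sc_apply algebra_simps)
lemma sc_one: "sc 1 u = u" by (rule ext) (simp add: sc_apply)
lemma sc_zero_l: "sc 0 u = 0" by (rule ext) (simp add: sc_apply)
lemma sc_zero_r: "sc c 0 = 0" by (rule ext) (simp add: sc_apply)

lemma sum_list_concat_map: "sum_list (map f (concat (map g xs))) = sum_list (map (\<lambda>x. sum_list (map f (g x))) xs)"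
  by (induction xs) auto

lemma sum_list_map_sc: "(\<And>x. x \<in> set xs \<Longrightarrow> g x = sc c (f x)) \<Longrightarrow> sum_list (map g xs) = sc c (sum_list (map f xs))"
  by (induction xs) (simp_all add: sc_add sc_zero_r)
lemma sum_list_map_neg: "(\<And>x. x \<in> set xs \<Longrightarrow> g x = - f x) \<Longrightarrow> sum_list (map g xs) = - sum_list (map f xs)"
  for f :: "_ \<Rightarrow> 'b::ab_group_add"
  by (induction xs) (simp_all add: algebra_simps)

lemma bilinearI: "(\<And>w. w \<in> W \<Longrightarrow> lin U (\<lambda>u. F u w)) \<Longrightarrow> (\<And>u. u \<in> U \<Longrightarrow> lin W (\<lambda>w. F u w)) \<Longrightarrow> bilinear U W F"
  by (auto simp: bilinear_def)
lemma bilinear_l: "bilinear U W F \<Longrightarrow> w \<in> W \<Longrightarrow> lin U (\<lambda>u. F u w)" by (auto simp: bilinear_def)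
lemma bilinear_r: "bilinear U W F \<Longrightarrow> u \<in> U \<Longrightarrow> lin W (\<lambda>w. F u w)" by (auto simp: bilinear_def)

lemma tens_sum_zero_solve:
  fixes w :: "'y \<Rightarrow> 'k::field"
  assumes sum: "tens u w + sum_list (map (\<lambda>(ui,wi). tens ui wi) rest) = 0" and y0: "w y0 \<noteq> 0"
  shows "u = - sum_list (map (\<lambda>(ui,wi). sc (wi y0 / w y0) ui) rest)"
proof
  fix x
  have "u x * w y0 = - sum_list (map (\<lambda>(ui,wi). ui x * wi y0) rest)"
    using fun_cong[OF sum, of "(x,y0)"]
    by (simp add: case_prod_unfold sum_list_map_apply eq_neg_iff_add_eq_0)
  also have "\<dots> = (- sum_list (map (\<lambda>(ui,wi). wi y0 / w y0 * ui x) rest)) * w y0"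
    using y0 by (induction rest) (auto simp: field_simps)
  finally have "u x = - sum_list (map (\<lambda>(ui,wi). wi y0 / w y0 * ui x) rest)"
    using y0 by (metis mult_cancel_right)
  then show "u x = (- sum_list (map (\<lambda>(ui,wi). sc (wi y0 / w y0) ui) rest)) x"
    by (simp add: case_prod_unfold sum_list_map_apply sc_apply)
qed

lemma bilinear_sum_shift:
  assumes sU: "subspace U" and sW: "subspace W" and b: "bilinear U W F"
    and w: "w \<in> W" and rest: "set rest \<subseteq> U \<times> W"
  shows "sum_list (map (\<lambda>(ui,wi). F ui (wi + sc (- c wi) w)) rest)
    = sum_list (map (\<lambda>(ui,wi). F ui wi) rest) + F (- sum_list (map (\<lambda>(ui,wi). sc (c wi) ui) rest)) w"
  using rest
proof (induction rest)
  case Nil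
  show ?case
    by (simp only: list.map sum_list.Nil minus_zero add_0 lin_zero[OF sU bilinear_l[OF b w]])
next
  case (Cons p rest)
  obtain ui wi where p: "p = (ui,wi)" by fastforce
  have ui: "ui \<in> U" and wi: "wi \<in> W" and rest: "set rest \<subseteq> U \<times> W" using Cons.prems p by auto
  define s where "s = sum_list (map (\<lambda>(ui,wi). sc (c wi) ui) rest)"
  have s: "s \<in> U" unfolding s_def
    by (rule subspace_sum_list[OF sU]) (use rest sU in \<open>auto simp: subspace_sc\<close>)
  have cu: "sc (c wi) ui \<in> U" by (rule subspace_sc[OF sU ui])
  have "F ui (wi + sc (- c wi) w) = F ui wi + sc (- c wi) (F ui w)"
    using lin_add[OF bilinear_r[OF b ui] wi subspace_sc[OF sW w]] lin_sc[OF bilinear_r[OF b ui] w] by simp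
  moreover have "F (- (sc (c wi) ui + s)) w = sc (- c wi) (F ui w) + F (- s) w"
    using lin_neg[OF bilinear_l[OF b w] subspace_add[OF sU cu s]] lin_add[OF bilinear_l[OF b w] cu s]
      lin_sc[OF bilinear_l[OF b w] ui] lin_neg[OF bilinear_l[OF b w] s] by (simp add: sc_neg)
  ultimately show ?case using Cons.IH[OF rest] p
    by (simp add: s_def algebra_simps del: plus_fun_apply minus_apply uminus_apply zero_fun_apply)
qed

lemma bilinear_tens_UNIV: "bilinear UNIV UNIV (\<lambda>u w. tens u (w :: 'y \<Rightarrow> 'k::field))"
  by (auto simp: bilinear_def lin_def tens_add_l tens_add_r tens_sc_l tens_sc_r)

lemma subspace_UNIV: "subspace (UNIV :: ('z \<Rightarrow> 'k::field) set)" by (simp add: subspace_def)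

text \<open>Induction on the number of terms: if the second factor w of the first term u \<otimes> w is nonzero,
  the zero relation expresses u through the other first factors, and substituting this expression
  yields a shorter representation of zero.\<close>

lemma bilinear_tens_sum_zero:
  fixes F :: "('z \<Rightarrow> 'k::field) \<Rightarrow> ('y \<Rightarrow> 'k) \<Rightarrow> ('v \<Rightarrow> 'k)"
  assumes sU: "subspace U" and sW: "subspace W" and b: "bilinear U W F"
  shows "set ps \<subseteq> U \<times> W \<Longrightarrow> sum_list (map (\<lambda>(u,w). tens u w) ps) = 0
     \<Longrightarrow> sum_list (map (\<lambda>(u,w). F u w) ps) = 0"
proof (induction "length ps" arbitrary: ps)
  case 0 then show ?case by simp
next
  case (Suc n)
  then obtain u w rest where ps: "ps = (u,w) # rest" and lr: "length rest = n"
    by (cases ps) auto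
  have u: "u \<in> U" and w: "w \<in> W" and rest: "set rest \<subseteq> U \<times> W" using Suc.prems ps by auto
  have tot: "tens u w + sum_list (map (\<lambda>(u,w). tens u w) rest) = 0"
    using Suc.prems(2) ps by simp
  show ?case
  proof (cases "w = 0")
    case True
    then have "sum_list (map (\<lambda>(u,w). tens u w) rest) = 0" using tot by (simp add: tens_zero_r)
    then show ?thesis using Suc.hyps lr rest ps True lin_zero[OF sW bilinear_r[OF b u]] by simp
  next
    case False
    then obtain y0 where y0: "w y0 \<noteq> 0" by (auto simp: fun_eq_iff)
    define c where "c = (\<lambda>wi::'y\<Rightarrow>'k. wi y0 / w y0)"
    define rest' where "rest' = map (\<lambda>(ui,wi). (ui, wi + sc (- c wi) w)) rest"
    have ueq: "u = - sum_list (map (\<lambda>(ui,wi). sc (c wi) ui) rest)"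
      unfolding c_def by (rule tens_sum_zero_solve[OF tot y0])
    have rest': "set rest' \<subseteq> U \<times> W" using rest w sW
      by (auto simp: rest'_def subspace_add subspace_sc)
    have tens0: "sum_list (map (\<lambda>(u,w). tens u w) rest') = 0"
      using bilinear_sum_shift[OF subspace_UNIV subspace_UNIV bilinear_tens_UNIV, of w rest c] tot ueq
      by (simp add: rest'_def case_prod_unfold o_def add.commute)
    have "sum_list (map (\<lambda>(u,w). F u w) rest') = 0"
      by (rule Suc.hyps(1)[OF _ rest' tens0]) (simp add: rest'_def lr)
    then show ?thesis
      using bilinear_sum_shift[OF sU sW b w rest, of c] ueq ps
      by (simp add: rest'_def case_prod_unfold o_def add.commute)
  qed
qed

lemma bilinear_tens_sum_eq:
  fixes F :: "('z \<Rightarrow> 'k::field) \<Rightarrow> ('y \<Rightarrow> 'k) \<Rightarrow> ('v \<Rightarrow> 'k)"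
  assumes sU: "subspace U" and sW: "subspace W" and b: "bilinear U W F"
    and ps: "set ps \<subseteq> U \<times> W" and qs: "set qs \<subseteq> U \<times> W"
    and eq: "sum_list (map (\<lambda>(u,w). tens u w) ps) = sum_list (map (\<lambda>(u,w). tens u w) qs)"
  shows "sum_list (map (\<lambda>(u,w). F u w) ps) = sum_list (map (\<lambda>(u,w). F u w) qs)"
proof -
  define qs' where "qs' = map (\<lambda>(u,w). (u, - w)) qs"
  have s1: "set (ps @ qs') \<subseteq> U \<times> W" using ps qs sW by (auto simp: qs'_def subspace_neg)
  have n1: "sum_list (map (\<lambda>(u,w). tens u w) qs') = - sum_list (map (\<lambda>(u,w). tens u w) qs)"
    unfolding qs'_def by (induction qs) (auto simp: tens_neg_r)
  have "sum_list (map (\<lambda>(u,w). tens u w) (ps @ qs')) = 0" using eq n1 by simp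
  then have z: "sum_list (map (\<lambda>(u,w). F u w) (ps @ qs')) = 0"
    using bilinear_tens_sum_zero[OF sU sW b s1] by blast
  have n2: "sum_list (map (\<lambda>(u,w). F u w) qs') = - sum_list (map (\<lambda>(u,w). F u w) qs)"
    unfolding qs'_def map_map
  proof (rule sum_list_map_neg)
    fix p assume p: "p \<in> set qs"
    obtain u w where pe: "p = (u,w)" by fastforce
    have "u \<in> U" "w \<in> W" using qs p pe by auto
    then have fe: "F u (- w) = - F u w" using lin_neg[OF bilinear_r[OF b]] by blast
    show "((\<lambda>(u,w). F u w) \<circ> (\<lambda>(u,w). (u, - w))) p = - (\<lambda>(u,w). F u w) p"
      unfolding pe comp_apply prod.case fe ..
  qed
  show ?thesis using z n2 by (simp add: algebra_simps)
qed

text \<open>The lift of a bilinear F along D evaluates F on an arbitrarily chosen representation of D a;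
  by bilinear_trep_eq the choice does not matter.\<close>

definition tensor_lift :: "('z \<Rightarrow> 'k::field) set \<Rightarrow> (('z \<Rightarrow> 'k) \<Rightarrow> ('z \<times> 'z \<Rightarrow> 'k))
   \<Rightarrow> (('z \<Rightarrow> 'k) \<Rightarrow> ('z \<Rightarrow> 'k) \<Rightarrow> ('v \<Rightarrow> 'k)) \<Rightarrow> ('z \<Rightarrow> 'k) \<Rightarrow> ('v \<Rightarrow> 'k)" where
  "tensor_lift V D F a = sum_list (map (\<lambda>(u,w). F u w) (SOME ps. trep V V (D a) ps))"

lemma bilinear_trep_eq:
  assumes "subspace V" "bilinear V V F" "trep V V t ps" "trep V V t qs"
  shows "sum_list (map (\<lambda>(u,w). F u w) ps) = sum_list (map (\<lambda>(u,w). F u w) qs)"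
  using assms bilinear_tens_sum_eq[of V V F ps qs] by (auto simp: trep_def)

lemma tensor_lift_rep:
  assumes "subspace V" "bilinear V V F" "trep V V (D a) ps"
  shows "tensor_lift V D F a = sum_list (map (\<lambda>(u,w). F u w) ps)"
proof -
  have "trep V V (D a) (SOME ps. trep V V (D a) ps)" using assms(3) by (rule someI)
  then show ?thesis unfolding tensor_lift_def using bilinear_trep_eq assms by blast
qed

lemma trep_append: "trep U W t ps \<Longrightarrow> trep U W t' qs \<Longrightarrow> trep U W (t + t') (ps @ qs)"
  by (auto simp: trep_def)
lemma trep_scale: "subspace U \<Longrightarrow> trep U W t ps \<Longrightarrow> trep U W (sc c t) (map (\<lambda>(u,w). (sc c u, w)) ps)"
  unfolding trep_def
proof (elim conjE, intro conjI)
  assume "subspace U" "set ps \<subseteq> U \<times> W" "t = sum_list (map (\<lambda>(u,w). tens u w) ps)"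
  then show "set (map (\<lambda>(u,w). (sc c u, w)) ps) \<subseteq> U \<times> W" by (auto simp: subspace_sc)
  show "sc c t = sum_list (map (\<lambda>(u,w). tens u w) (map (\<lambda>(u,w). (sc c u, w)) ps))"
    using \<open>t = _\<close> by (simp add: sc_sum_list o_def case_prod_unfold tens_sc_l)
qed

lemma bilinear_sum_scale_first:
  assumes b: "bilinear U W F" and ps: "set ps \<subseteq> U \<times> W"
  shows "sum_list (map (\<lambda>(u,w). F u w) (map (\<lambda>(u,w). (sc c u, w)) ps))
    = sc c (sum_list (map (\<lambda>(u,w). F u w) ps))"
  unfolding map_map
proof (rule sum_list_map_sc)
  fix p assume "p \<in> set ps"
  then show "((\<lambda>(u,w). F u w) \<circ> (\<lambda>(u,w). (sc c u, w))) p = sc c ((\<lambda>(u,w). F u w) p)"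
    using ps lin_sc[OF bilinear_l[OF b]] by (auto split: prod.splits)
qed

lemma tensor_lift_lin:
  assumes sV: "subspace V" and lD: "lin V D" and ex: "\<And>a. a \<in> V \<Longrightarrow> \<exists>ps. trep V V (D a) ps"
    and b: "bilinear V V F"
  shows "lin V (tensor_lift V D F)"
  unfolding lin_def
proof (intro conjI ballI allI)
  fix u w assume u: "u \<in> V" and w: "w \<in> V"
  obtain pu pw where pu: "trep V V (D u) pu" and pw: "trep V V (D w) pw" using ex u w by blast
  have "trep V V (D (u + w)) (pu @ pw)" using trep_append[OF pu pw] lin_add[OF lD u w] by simp
  then show "tensor_lift V D F (u + w) = tensor_lift V D F u + tensor_lift V D F w"
    using tensor_lift_rep[OF sV b] pu pw by simp
next
  fix c u assume u: "u \<in> V"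
  obtain pu where pu: "trep V V (D u) pu" using ex u by blast
  have r: "trep V V (D (sc c u)) (map (\<lambda>(u,w). (sc c u, w)) pu)"
    using trep_scale[OF sV pu] lin_sc[OF lD u] by simp
  show "tensor_lift V D F (sc c u) = sc c (tensor_lift V D F u)"
    using tensor_lift_rep[of V F D "sc c u", OF sV b r] tensor_lift_rep[of V F D u, OF sV b pu]
      bilinear_sum_scale_first[OF b] pu
    by (simp add: trep_def)
qed

lemma sum_list_zero: "sum_list (map (\<lambda>x. 0) xs) = (0::'b::monoid_add)"
  by (induction xs) auto

lemma lin_id: "lin V (\<lambda>x. x)" by (simp add: lin_def)

lemma reassoc_add: "reassoc (f + g) = reassoc f + reassoc g" by (rule ext) (auto simp: reassoc_def split: prod.splits)
lemma reassoc_zero: "reassoc 0 = 0" by (rule ext) (auto simp: reassoc_def split: prod.splits)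
lemma reassoc_sum: "reassoc (sum_list (map f xs)) = sum_list (map (\<lambda>x. reassoc (f x)) xs)"
  by (induction xs) (simp_all only: list.map sum_list.Nil sum_list.Cons reassoc_add reassoc_zero)
lemma reassoc_tens: "reassoc (tens u (tens v w)) = tens (tens u v) w"
  for u :: "'z \<Rightarrow> 'k::field"
  by (rule ext) (auto simp: reassoc_def tens_def mult.assoc split: prod.splits)
lemma tens_sum_r: "tens u (sum_list (map f xs)) = sum_list (map (\<lambda>x. tens u (f x)) xs)" for u :: "'z \<Rightarrow> 'k::field"
  by (induction xs) (simp_all only: list.map sum_list.Nil sum_list.Cons tens_add_r tens_zero_r)
definition trilinear :: "('z \<Rightarrow> 'k::field) set \<Rightarrow> (('z \<Rightarrow> 'k) \<Rightarrow> ('z \<Rightarrow> 'k) \<Rightarrow> ('z \<Rightarrow> 'k) \<Rightarrow> ('v \<Rightarrow> 'k)) \<Rightarrow> bool" where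
  "trilinear V G \<longleftrightarrow> (\<forall>y\<in>V. \<forall>z\<in>V. lin V (\<lambda>x. G x y z)) \<and> (\<forall>x\<in>V. \<forall>z\<in>V. lin V (\<lambda>y. G x y z))
     \<and> (\<forall>x\<in>V. \<forall>y\<in>V. lin V (\<lambda>z. G x y z))"

lemma trilinearI: "(\<And>y z. y \<in> V \<Longrightarrow> z \<in> V \<Longrightarrow> lin V (\<lambda>x. G x y z)) \<Longrightarrow> (\<And>x z. x \<in> V \<Longrightarrow> z \<in> V \<Longrightarrow> lin V (\<lambda>y. G x y z))
   \<Longrightarrow> (\<And>x y. x \<in> V \<Longrightarrow> y \<in> V \<Longrightarrow> lin V (\<lambda>z. G x y z)) \<Longrightarrow> trilinear V G"
  by (simp add: trilinear_def)

declare zero_fun_apply[simp del] plus_fun_apply[simp del] uminus_apply[simp del] minus_apply[simp del]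

lemma span_subspace: "subspace (span (G :: ('z \<Rightarrow> 'k::field) set))"
  unfolding subspace_def span_def
proof (intro conjI ballI allI; (elim CollectE exE conjE)?)
  show "0 \<in> {v. \<exists>ps. set (map snd ps) \<subseteq> G \<and> v = sum_list (map (\<lambda>(c, g). sc c g) ps)}"
    by (rule CollectI, rule exI[of _ "[]"]) simp
next
  fix u w :: "'z \<Rightarrow> 'k" and ps qs
  assume "set (map snd ps) \<subseteq> G" "u = sum_list (map (\<lambda>(c, g). sc c g) ps)"
    "set (map snd qs) \<subseteq> G" "w = sum_list (map (\<lambda>(c, g). sc c g) qs)"
  then show "u + w \<in> {v. \<exists>ps. set (map snd ps) \<subseteq> G \<and> v = sum_list (map (\<lambda>(c, g). sc c g) ps)}"
    by (intro CollectI exI[of _ "ps @ qs"]) auto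
next
  fix c and u :: "'z \<Rightarrow> 'k" and ps
  assume "set (map snd ps) \<subseteq> G" "u = sum_list (map (\<lambda>(c, g). sc c g) ps)"
  then show "sc c u \<in> {v. \<exists>ps. set (map snd ps) \<subseteq> G \<and> v = sum_list (map (\<lambda>(c, g). sc c g) ps)}"
    by (intro CollectI exI[of _ "map (\<lambda>(d,g). (c * d, g)) ps"])
      (auto simp: sc_sum_list o_def case_prod_unfold sc_sc)
qed

lemma span_gen: "g \<in> G \<Longrightarrow> g \<in> span G"
  unfolding span_def by (intro CollectI exI[of _ "[(1,g)]"]) (simp add: sc_one)

lemma span_induct[consumes 1, case_names zero step]:
  assumes t: "t \<in> span G" and z: "P 0"
    and s: "\<And>c g y. g \<in> G \<Longrightarrow> y \<in> span G \<Longrightarrow> P y \<Longrightarrow> P (sc c g + y)"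
  shows "P t"
proof -
  obtain ps where ps: "set (map snd ps) \<subseteq> G" and te: "t = sum_list (map (\<lambda>(c, g). sc c g) ps)"
    using t unfolding span_def by blast
  have "set (map snd ps) \<subseteq> G \<Longrightarrow> P (sum_list (map (\<lambda>(c, g). sc c g) ps)) \<and> sum_list (map (\<lambda>(c, g). sc c g) ps) \<in> span G"
  proof (induction ps)
    case Nil then show ?case using z subspace_zero[OF span_subspace] by simp
  next
    case (Cons p ps)
    obtain c g where p: "p = (c,g)" by fastforce
    have g: "g \<in> G" using Cons.prems p by auto
    have IH: "P (sum_list (map (\<lambda>(c, g). sc c g) ps)) \<and> sum_list (map (\<lambda>(c, g). sc c g) ps) \<in> span G"
      using Cons by auto
    have "sc c g \<in> span G" by (rule subspace_sc[OF span_subspace span_gen[OF g]])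
    then show ?case using s[OF g] IH p subspace_add[OF span_subspace] by auto
  qed
  then show ?thesis using ps te by blast
qed

lemma lin_eq_span:
  assumes f: "lin (span G) f" and g: "lin (span G) g" and e: "\<And>x. x \<in> G \<Longrightarrow> f x = g x"
    and t: "t \<in> span G"
  shows "f t = g t"
  using t
proof (induction rule: span_induct)
  case zero show ?case using lin_zero[OF span_subspace f] lin_zero[OF span_subspace g] by simp
next
  case (step c x y)
  have x: "sc c x \<in> span G" by (rule subspace_sc[OF span_subspace span_gen[OF step(1)]])
  show ?case using step lin_add[OF f x step(2)] lin_add[OF g x step(2)] lin_sc[OF f span_gen] lin_sc[OF g span_gen] e
    by simp
qed

lemma linf_eq_span:
  assumes f: "linf (span G) f" and g: "linf (span G) g" and e: "\<And>x. x \<in> G \<Longrightarrow> f x = g x"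
    and t: "t \<in> span G"
  shows "f t = g t"
  using t
proof (induction rule: span_induct)
  case zero show ?case using linf_zero[OF span_subspace f] linf_zero[OF span_subspace g] by simp
next
  case (step c x y)
  have x: "sc c x \<in> span G" by (rule subspace_sc[OF span_subspace span_gen[OF step(1)]])
  show ?case using step linf_add[OF f x step(2)] linf_add[OF g x step(2)] linf_sc[OF f span_gen] linf_sc[OF g span_gen] e
    by simp
qed

lemma lin_image_span:
  assumes f: "lin (span G) f" and W: "subspace W" and e: "\<And>x. x \<in> G \<Longrightarrow> f x \<in> W"
    and t: "t \<in> span G"
  shows "f t \<in> W"
  using t
proof (induction rule: span_induct)
  case zero show ?case using lin_zero[OF span_subspace f] subspace_zero[OF W] by simp
next
  case (step c x y)
  have x: "sc c x \<in> span G" by (rule subspace_sc[OF span_subspace span_gen[OF step(1)]])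
  show ?case using step lin_add[OF f x step(2)] lin_sc[OF f span_gen[OF step(1)]] e[OF step(1)] W
    by (simp add: subspace_add subspace_sc)
qed

lemma span_subset_subspace: "subspace W \<Longrightarrow> G \<subseteq> W \<Longrightarrow> span G \<subseteq> W"
  using lin_image_span[of G "\<lambda>x. x" W] lin_id by blast

lemma span_closure_induct[consumes 1, case_names zero gen add scl]:
  assumes t: "t \<in> span G" and z: "P 0" and e: "\<And>x. x \<in> G \<Longrightarrow> P x"
    and add: "\<And>x y. x \<in> span G \<Longrightarrow> y \<in> span G \<Longrightarrow> P x \<Longrightarrow> P y \<Longrightarrow> P (x + y)"
    and scl: "\<And>c x. x \<in> span G \<Longrightarrow> P x \<Longrightarrow> P (sc c x)"
  shows "P t"
  using t
proof (induction rule: span_induct)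
  case zero then show ?case using z by simp
next
  case (step c g y)
  have "sc c g \<in> span G" by (rule subspace_sc[OF span_subspace span_gen[OF step(1)]])
  then show ?case using step add scl e span_gen by blast
qed

lemma app_apply: "app F c x = F (c,x)" by (simp add: app_def)
lemma app_end_of: "c \<in> FS \<Longrightarrow> app (end_of g) c = g c" by (rule ext) (simp add: app_def end_of_def)
lemma end_of_out: "c \<notin> FS \<Longrightarrow> end_of g (c,x) = 0" by (simp add: end_of_def)
lemma app_add: "app (F + G) c = app F c + app G c" by (rule ext) (simp add: app_def plus_fun_apply)
lemma app_sc: "app (sc d F) c = sc d (app F c)" by (rule ext) (simp add: app_def sc_apply)
lemma app_zero: "app 0 c = 0" by (rule ext) (simp add: app_def zero_fun_apply)
lemma end_of_add: "end_of (\<lambda>c. g c + h c) = end_of g + end_of h" for g :: "('a \<Rightarrow> 'k::field) \<Rightarrow> 'a \<Rightarrow> 'k"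
  by (rule ext) (auto simp: end_of_def plus_fun_apply)
lemma end_of_sc: "end_of (\<lambda>c. sc d (g c)) = sc d (end_of g)" for g :: "('a \<Rightarrow> 'k::field) \<Rightarrow> 'a \<Rightarrow> 'k"
  by (rule ext) (auto simp: end_of_def sc_apply)
lemma end_of_cong: "(\<And>c. c \<in> FS \<Longrightarrow> g c = h c) \<Longrightarrow> end_of g = end_of h"
  by (rule ext) (auto simp: end_of_def)

lemma lin_compose: "lin V f \<Longrightarrow> (\<And>x. x \<in> V \<Longrightarrow> f x \<in> W) \<Longrightarrow> lin W g \<Longrightarrow> lin V (\<lambda>x. g (f x))"
  unfolding lin_def by (metis)

lemma lin_cong: "subspace V \<Longrightarrow> lin V f \<Longrightarrow> (\<And>x. x \<in> V \<Longrightarrow> f x = g x) \<Longrightarrow> lin V g"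
  unfolding lin_def by (simp add: subspace_add subspace_sc)

lemma lin_tens_l: "lin V f \<Longrightarrow> lin V (\<lambda>x. tens (f x) w)"
  unfolding lin_def by (simp add: tens_add_l tens_sc_l)
lemma lin_tens_r: "lin V f \<Longrightarrow> lin V (\<lambda>x. tens w (f x))"
  unfolding lin_def by (simp add: tens_add_r tens_sc_r)
lemma lin_addf: "lin V f \<Longrightarrow> lin V g \<Longrightarrow> lin V (\<lambda>x. f x + g x)"
  unfolding lin_def by (simp add: sc_add ac_simps)
lemma lin_scf: "lin V f \<Longrightarrow> lin V (\<lambda>x. sc c (f x))"
  unfolding lin_def by (simp add: sc_add sc_sc mult.commute)
lemma lin_sum_listf: "(\<And>i. i \<in> set xs \<Longrightarrow> lin V (\<lambda>x. f i x)) \<Longrightarrow> lin V (\<lambda>x. sum_list (map (\<lambda>i. f i x) xs))"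
proof (induction xs)
  case Nil then show ?case by (simp add: lin_def sc_zero_r)
next
  case (Cons a xs)
  then show ?case using lin_addf[of V "\<lambda>x. f a x" "\<lambda>x. sum_list (map (\<lambda>i. f i x) xs)"] by simp
qed

lemma reassoc_sc: "reassoc (sc c f) = sc c (reassoc f)"
  by (rule ext) (simp add: reassoc_def sc_apply split: prod.splits)
lemma lin_reassoc: "lin V f \<Longrightarrow> lin V (\<lambda>x. reassoc (f x))"
  unfolding lin_def by (simp add: reassoc_add reassoc_sc)

lemma lin_app: "lin V (\<lambda>F. app F c)"
  unfolding lin_def by (simp add: app_add app_sc)

lemma rep_sum_eq_of_gens:
  assumes V: "V = span G" and D: "lin V D" and ex: "\<And>t. t \<in> V \<Longrightarrow> \<exists>ps. trep V V (D t) ps"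
    and F: "bilinear V V F" and Q: "lin V Q" and e: "\<And>g. g \<in> G \<Longrightarrow> tensor_lift V D F g = Q g"
    and t: "t \<in> V" and ps: "trep V V (D t) ps"
  shows "sum_list (map (\<lambda>(u,w). F u w) ps) = Q t"
proof -
  have sV: "subspace V" using V span_subspace by simp
  have "sum_list (map (\<lambda>(u,w). F u w) ps) = tensor_lift V D F t" using tensor_lift_rep[of V F D t, OF sV F ps] by simp
  also have "\<dots> = Q t"
    using lin_eq_span[of G "tensor_lift V D F" Q t] tensor_lift_lin[OF sV D ex F] Q e t V by simp
  finally show ?thesis .
qed

lemma lin_sc_scalar: "linf V f \<Longrightarrow> lin V (\<lambda>x. sc (f x) w)"
  unfolding lin_def linf_def by (simp add: sc_add_l sc_sc)

lemma bilinear_eq_span: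
  assumes F1: "\<And>b. b \<in> span G \<Longrightarrow> lin (span G) (\<lambda>a. F a b)" and F2: "\<And>a. a \<in> span G \<Longrightarrow> lin (span G) (\<lambda>b. F a b)"
    and H1: "\<And>b. b \<in> span G \<Longrightarrow> lin (span G) (\<lambda>a. H a b)" and H2: "\<And>a. a \<in> span G \<Longrightarrow> lin (span G) (\<lambda>b. H a b)"
    and e: "\<And>g h. g \<in> G \<Longrightarrow> h \<in> G \<Longrightarrow> F g h = H g h"
    and a: "a \<in> span G" and b: "b \<in> span G"
  shows "F a b = H a b"
proof -
  have g: "F g b = H g b" if "g \<in> G" for g
    using lin_eq_span[OF F2[OF span_gen[OF that]] H2[OF span_gen[OF that]] e[OF that] b] .
  show ?thesis using lin_eq_span[OF F1[OF b] H1[OF b] g a] .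
qed

lemma bilinear_eq_spanf:
  assumes F1: "\<And>b. b \<in> span G \<Longrightarrow> linf (span G) (\<lambda>a. F a b)" and F2: "\<And>a. a \<in> span G \<Longrightarrow> linf (span G) (\<lambda>b. F a b)"
    and H1: "\<And>b. b \<in> span G \<Longrightarrow> linf (span G) (\<lambda>a. H a b)" and H2: "\<And>a. a \<in> span G \<Longrightarrow> linf (span G) (\<lambda>b. H a b)"
    and e: "\<And>g h. g \<in> G \<Longrightarrow> h \<in> G \<Longrightarrow> F g h = H g h"
    and a: "a \<in> span G" and b: "b \<in> span G"
  shows "F a b = H a b"
proof -
  have g: "F g b = H g b" if "g \<in> G" for g
    using linf_eq_span[OF F2[OF span_gen[OF that]] H2[OF span_gen[OF that]] e[OF that] b] .
  show ?thesis using linf_eq_span[OF F1[OF b] H1[OF b] g a] .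
qed

lemma linf_compose: "lin V f \<Longrightarrow> (\<And>x. x \<in> V \<Longrightarrow> f x \<in> W) \<Longrightarrow> linf W g \<Longrightarrow> linf V (\<lambda>x. g (f x))"
  unfolding lin_def linf_def by metis

lemma linf_mult_const: "linf V f \<Longrightarrow> linf V (\<lambda>x. f x * c)"
  unfolding linf_def by (simp add: algebra_simps)
lemma linf_const_mult: "linf V f \<Longrightarrow> linf V (\<lambda>x. c * f x)"
  unfolding linf_def by (simp add: algebra_simps)

lemma sum_pairs_cong: "(\<And>u w. (u,w) \<in> set ps \<Longrightarrow> f u w = g u w) \<Longrightarrow>
  sum_list (map (\<lambda>(u,w). f u w) ps) = sum_list (map (\<lambda>(u,w). g u w) ps)"
  by (rule arg_cong[where f=sum_list], rule map_cong[OF refl]) auto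

lemma coalgebra_cong:
  assumes C: "coalgebra V D1 e1" and D: "\<And>t. t \<in> V \<Longrightarrow> D1 t = D2 t" and E: "\<And>t. t \<in> V \<Longrightarrow> e1 t = e2 t"
  shows "coalgebra V D2 e2"
proof -
  have sV: "subspace V" and nz: "V \<noteq> {0}" and l: "lin V D1" and lf: "linf V e1"
    and ex: "\<And>a. a \<in> V \<Longrightarrow> \<exists>ps. trep V V (D1 a) ps"
    and ax: "\<And>a ps. a \<in> V \<Longrightarrow> trep V V (D1 a) ps \<Longrightarrow>
        sum_list (map (\<lambda>(u,w). tens (D1 u) w) ps) = reassoc (sum_list (map (\<lambda>(u,w). tens u (D1 w)) ps))
      \<and> sum_list (map (\<lambda>(u,w). sc (e1 u) w) ps) = a
      \<and> sum_list (map (\<lambda>(u,w). sc (e1 w) u) ps) = a"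
    using C unfolding coalgebra_def by blast+
  show ?thesis unfolding coalgebra_def
  proof (intro conjI ballI allI impI)
    show "subspace V" "V \<noteq> {0}" by fact+
    show "lin V D2" using l sV unfolding lin_def by (simp add: D[symmetric] subspace_add subspace_sc)
    show "linf V e2" using lf sV unfolding linf_def by (simp add: E[symmetric] subspace_add subspace_sc)
    fix a assume a: "a \<in> V"
    show "\<exists>ps. trep V V (D2 a) ps" using ex[OF a] D[OF a] by simp
    fix ps assume ps: "trep V V (D2 a) ps"
    then have ps1: "trep V V (D1 a) ps" using D[OF a] by simp
    have psV: "\<And>u w. (u,w) \<in> set ps \<Longrightarrow> u \<in> V \<and> w \<in> V" using ps by (auto simp: trep_def)
    note ax = ax[OF a ps1]
    show "sum_list (map (\<lambda>(u,w). tens (D2 u) w) ps) = reassoc (sum_list (map (\<lambda>(u,w). tens u (D2 w)) ps))"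
      using ax sum_pairs_cong[of ps "\<lambda>u w. tens (D1 u) w" "\<lambda>u w. tens (D2 u) w"]
        sum_pairs_cong[of ps "\<lambda>u w. tens u (D1 w)" "\<lambda>u w. tens u (D2 w)"] psV D by auto
    show "sum_list (map (\<lambda>(u,w). sc (e2 u) w) ps) = a"
      using ax sum_pairs_cong[of ps "\<lambda>u w. sc (e1 u) w" "\<lambda>u w. sc (e2 u) w"] psV E by auto
    show "sum_list (map (\<lambda>(u,w). sc (e2 w) u) ps) = a"
      using ax sum_pairs_cong[of ps "\<lambda>u w. sc (e1 w) u" "\<lambda>u w. sc (e2 w) u"] psV E by auto
  qed
qed

lemma bialgebra_cong:
  assumes B: "bialgebra A m u D1 e1" and D: "\<And>t. t \<in> A \<Longrightarrow> D1 t = D2 t" and E: "\<And>t. t \<in> A \<Longrightarrow> e1 t = e2 t"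
  shows "bialgebra A m u D2 e2"
proof -
  have C: "coalgebra A D1 e1" and u: "u \<in> A" and cl: "\<And>a b. a \<in> A \<Longrightarrow> b \<in> A \<Longrightarrow> m a b \<in> A"
    and r: "\<forall>b\<in>A. lin A (\<lambda>a. m a b)" "\<forall>a\<in>A. lin A (m a)"
    and as: "\<forall>a\<in>A. \<forall>b\<in>A. \<forall>c\<in>A. m (m a b) c = m a (m b c)"
    and un: "\<forall>a\<in>A. m u a = a \<and> m a u = a"
    and du: "D1 u = tens u u" and eu: "e1 u = 1"
    and mu: "\<And>a b. a \<in> A \<Longrightarrow> b \<in> A \<Longrightarrow> e1 (m a b) = e1 a * e1 b \<and>
       (\<forall>ps qs. trep A A (D1 a) ps \<longrightarrow> trep A A (D1 b) qs \<longrightarrow>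
          D1 (m a b) = sum_list (map (\<lambda>(a1,a2). sum_list (map (\<lambda>(b1,b2).
                          tens (m a1 b1) (m a2 b2)) qs)) ps))"
    using B unfolding bialgebra_def by blast+
  show ?thesis unfolding bialgebra_def
  proof (intro conjI ballI allI impI)
    show "coalgebra A D2 e2" by (rule coalgebra_cong[OF C D E])
    show "u \<in> A" by fact
    show "D2 u = tens u u" using du D[OF u] by simp
    show "e2 u = 1" using eu E[OF u] by simp
    fix a assume a: "a \<in> A"
    show "lin A (\<lambda>x. m x a)" "lin A (m a)" using r a by blast+
    show "m u a = a" "m a u = a" using un a by blast+
    fix b assume b: "b \<in> A"
    show "m a b \<in> A" by (rule cl[OF a b])
    show "e2 (m a b) = e2 a * e2 b" using mu[OF a b] E a b cl[OF a b] by simp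
    { fix c assume "c \<in> A"
      then show "m (m a b) c = m a (m b c)" using as a b by blast }
    fix ps qs assume ps: "trep A A (D2 a) ps" and qs: "trep A A (D2 b) qs"
    then show "D2 (m a b) = sum_list (map (\<lambda>(a1,a2). sum_list (map (\<lambda>(b1,b2).
                          tens (m a1 b1) (m a2 b2)) qs)) ps)"
      using mu[OF a b] D a b cl[OF a b] by simp
  qed
qed

lemma hopf_algebra_cong:
  assumes Hp: "hopf_algebra A m u D1 e1 S" and D: "\<And>t. t \<in> A \<Longrightarrow> D1 t = D2 t" and E: "\<And>t. t \<in> A \<Longrightarrow> e1 t = e2 t"
  shows "hopf_algebra A m u D2 e2 S"
proof -
  have B: "bialgebra A m u D1 e1" and l: "lin A S" and SA: "\<forall>a\<in>A. S a \<in> A"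
    and ax: "\<And>a ps. a \<in> A \<Longrightarrow> trep A A (D1 a) ps \<Longrightarrow>
        sum_list (map (\<lambda>(x,y). m (S x) y) ps) = sc (e1 a) u
      \<and> sum_list (map (\<lambda>(x,y). m x (S y)) ps) = sc (e1 a) u"
    using Hp unfolding hopf_algebra_def by blast+
  show ?thesis unfolding hopf_algebra_def
  proof (intro conjI ballI allI impI)
    show "bialgebra A m u D2 e2" by (rule bialgebra_cong[OF B D E])
    show "lin A S" by fact
    fix a assume a: "a \<in> A"
    show "S a \<in> A" using SA a by blast
    fix ps assume "trep A A (D2 a) ps"
    then have ps: "trep A A (D1 a) ps" using D[OF a] by simp
    show "sum_list (map (\<lambda>(x,y). m (S x) y) ps) = sc (e2 a) u" using ax[OF a ps] E[OF a] by simp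
    show "sum_list (map (\<lambda>(x,y). m x (S y)) ps) = sc (e2 a) u" using ax[OF a ps] E[OF a] by simp
  qed
qed

lemma lin_end_of: "(\<And>c. c \<in> FS \<Longrightarrow> lin V (\<lambda>t. F t c)) \<Longrightarrow> lin V (\<lambda>t. end_of (F t))"
  unfolding lin_def
proof (intro conjI ballI allI)
  fix u w assume h: "\<And>c. c \<in> FS \<Longrightarrow> (\<forall>u\<in>V. \<forall>w\<in>V. F (u + w) c = F u c + F w c) \<and> (\<forall>d. \<forall>u\<in>V. F (sc d u) c = sc d (F u c))"
    and u: "u \<in> V" and w: "w \<in> V"
  show "end_of (F (u + w)) = end_of (F u) + end_of (F w)"
    unfolding end_of_add[symmetric] by (rule end_of_cong) (use h u w in blast)
next
  fix d u assume h: "\<And>c. c \<in> FS \<Longrightarrow> (\<forall>u\<in>V. \<forall>w\<in>V. F (u + w) c = F u c + F w c) \<and> (\<forall>d. \<forall>u\<in>V. F (sc d u) c = sc d (F u c))"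
    and u: "u \<in> V"
  show "end_of (F (sc d u)) = sc d (end_of (F u))"
    unfolding end_of_sc[symmetric] by (rule end_of_cong) (use h u in blast)
qed

lemma bialg_map_cong:
  assumes BM: "bialg_map A m u D1 e1 B m' u' D1' e1' \<phi>"
    and D: "\<And>t. t \<in> A \<Longrightarrow> D1 t = D2 t" and E: "\<And>t. t \<in> A \<Longrightarrow> e1 t = e2 t"
    and D': "\<And>t. t \<in> B \<Longrightarrow> D1' t = D2' t" and E': "\<And>t. t \<in> B \<Longrightarrow> e1' t = e2' t"
  shows "bialg_map A m u D2 e2 B m' u' D2' e2' \<phi>"
proof -
  have l: "lin A \<phi>" and im: "\<phi> ` A \<subseteq> B" and mm: "\<forall>a\<in>A. \<forall>b\<in>A. \<phi> (m a b) = m' (\<phi> a) (\<phi> b)"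
    and un: "\<phi> u = u'"
    and r: "\<And>a. a \<in> A \<Longrightarrow> e1' (\<phi> a) = e1 a \<and>
       (\<forall>ps. trep A A (D1 a) ps \<longrightarrow> D1' (\<phi> a) = sum_list (map (\<lambda>(x,y). tens (\<phi> x) (\<phi> y)) ps))"
    using BM unfolding bialg_map_def by blast+
  show ?thesis unfolding bialg_map_def
  proof (intro conjI ballI allI impI)
    show "lin A \<phi>" "\<phi> ` A \<subseteq> B" "\<phi> u = u'" by fact+
    fix a assume a: "a \<in> A"
    have pa: "\<phi> a \<in> B" using im a by blast
    show "e2' (\<phi> a) = e2 a" using r[OF a] E[OF a] E'[OF pa] by simp
    { fix b assume "b \<in> A" then show "\<phi> (m a b) = m' (\<phi> a) (\<phi> b)" using mm a by blast }
    fix ps assume "trep A A (D2 a) ps"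
    then have "trep A A (D1 a) ps" using D[OF a] by simp
    then show "D2' (\<phi> a) = sum_list (map (\<lambda>(x,y). tens (\<phi> x) (\<phi> y)) ps)" using r[OF a] D'[OF pa] by simp
  qed
qed

section \<open>Sweedler calculus in a Hopf heap\<close>

locale hheap =
  fixes Dl :: "('a \<Rightarrow> 'k::field) \<Rightarrow> ('a \<times> 'a \<Rightarrow> 'k)" and ep :: "('a \<Rightarrow> 'k) \<Rightarrow> 'k"
    and br :: "('a \<Rightarrow> 'k) \<Rightarrow> ('a \<Rightarrow> 'k) \<Rightarrow> ('a \<Rightarrow> 'k) \<Rightarrow> ('a \<Rightarrow> 'k)"
  assumes H: "hopf_heap Dl ep br"
begin

lemma coalgebra_FS: "coalgebra FS Dl ep" using H by (simp add: hopf_heap_def)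
lemma subspace_FS: "subspace (FS :: ('a \<Rightarrow> 'k) set)" using coalgebra_FS by (simp add: coalgebra_def)
lemma FS_nz: "(FS :: ('a \<Rightarrow> 'k) set) \<noteq> {0}" using coalgebra_FS by (simp add: coalgebra_def)
lemma lin_Dl: "lin FS Dl" using coalgebra_FS by (simp add: coalgebra_def)
lemma linf_ep: "linf FS ep" using coalgebra_FS by (simp add: coalgebra_def)
lemma ex_Dl_rep: "a \<in> FS \<Longrightarrow> \<exists>ps. trep FS FS (Dl a) ps" using coalgebra_FS by (simp add: coalgebra_def)
lemma coassoc_ax: "a \<in> FS \<Longrightarrow> trep FS FS (Dl a) ps \<Longrightarrow>
   sum_list (map (\<lambda>(u,w). tens (Dl u) w) ps) = reassoc (sum_list (map (\<lambda>(u,w). tens u (Dl w)) ps))"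
  using coalgebra_FS by (simp add: coalgebra_def)
lemma counit_ax: "a \<in> FS \<Longrightarrow> trep FS FS (Dl a) ps \<Longrightarrow>
   sum_list (map (\<lambda>(u,w). sc (ep u) w) ps) = a \<and> sum_list (map (\<lambda>(u,w). sc (ep w) u) ps) = a"
  using coalgebra_FS by (simp add: coalgebra_def)
lemma br_FS: "a \<in> FS \<Longrightarrow> b \<in> FS \<Longrightarrow> c \<in> FS \<Longrightarrow> br a b c \<in> FS"
  using H by (simp add: hopf_heap_def)
lemma br_lin1: "b \<in> FS \<Longrightarrow> c \<in> FS \<Longrightarrow> lin FS (\<lambda>a. br a b c)"
  using H by (simp add: hopf_heap_def)
lemma br_lin2: "a \<in> FS \<Longrightarrow> c \<in> FS \<Longrightarrow> lin FS (\<lambda>b. br a b c)"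
  using H by (simp add: hopf_heap_def)
lemma br_lin3: "a \<in> FS \<Longrightarrow> b \<in> FS \<Longrightarrow> lin FS (\<lambda>c. br a b c)"
  using H by (simp add: hopf_heap_def)
lemma ep_br: "a \<in> FS \<Longrightarrow> b \<in> FS \<Longrightarrow> c \<in> FS \<Longrightarrow> ep (br a b c) = ep a * ep b * ep c"
  using H by (simp add: hopf_heap_def)
lemma Dl_br: "a \<in> FS \<Longrightarrow> b \<in> FS \<Longrightarrow> c \<in> FS \<Longrightarrow> trep FS FS (Dl a) ps \<Longrightarrow> trep FS FS (Dl b) qs
   \<Longrightarrow> trep FS FS (Dl c) rs \<Longrightarrow>
   Dl (br a b c) = sum_list (map (\<lambda>(a1,a2). sum_list (map (\<lambda>(b1,b2).
              sum_list (map (\<lambda>(c1,c2). tens (br a1 b2 c1) (br a2 b1 c2)) rs)) qs)) ps)"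
  using H by (simp add: hopf_heap_def)
lemma br_assoc: "a \<in> FS \<Longrightarrow> b \<in> FS \<Longrightarrow> c \<in> FS \<Longrightarrow> d \<in> FS \<Longrightarrow> e \<in> FS \<Longrightarrow>
   br (br a b c) d e = br a b (br c d e)"
  using H by (simp add: hopf_heap_def)
lemma hcounit_ax: "a \<in> FS \<Longrightarrow> c \<in> FS \<Longrightarrow> trep FS FS (Dl c) ps \<Longrightarrow>
        sum_list (map (\<lambda>(c1,c2). br c1 c2 a) ps) = sc (ep c) a
      \<and> sum_list (map (\<lambda>(c1,c2). br a c1 c2) ps) = sc (ep c) a"
  using H by (simp add: hopf_heap_def)

definition sweedler_rep :: "('a \<Rightarrow> 'k) \<Rightarrow> (('a \<Rightarrow> 'k) \<times> ('a \<Rightarrow> 'k)) list" where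
  "sweedler_rep a = (SOME ps. trep FS FS (Dl a) ps)"

definition sweedler :: "('a \<Rightarrow> 'k) \<Rightarrow> (('a \<Rightarrow> 'k) \<Rightarrow> ('a \<Rightarrow> 'k) \<Rightarrow> ('v \<Rightarrow> 'k)) \<Rightarrow> ('v \<Rightarrow> 'k)" where
  "sweedler a F = sum_list (map (\<lambda>(u,w). F u w) (sweedler_rep a))"

lemma sweedler_rep_trep: "a \<in> FS \<Longrightarrow> trep FS FS (Dl a) (sweedler_rep a)"
  unfolding sweedler_rep_def using ex_Dl_rep by (metis someI)
lemma sweedler_rep_FS: "a \<in> FS \<Longrightarrow> p \<in> set (sweedler_rep a) \<Longrightarrow> fst p \<in> FS \<and> snd p \<in> FS"
  using sweedler_rep_trep by (fastforce simp: trep_def)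
lemma sweedler_eq_tensor_lift: "sweedler a F = tensor_lift FS Dl F a" by (simp add: sweedler_def tensor_lift_def sweedler_rep_def)

lemma sweedler_eq_rep: "bilinear FS FS F \<Longrightarrow> trep FS FS (Dl a) ps \<Longrightarrow> sweedler a F = sum_list (map (\<lambda>(u,w). F u w) ps)"
  unfolding sweedler_eq_tensor_lift by (rule tensor_lift_rep[OF subspace_FS])

lemma lin_sweedler_arg: "bilinear FS FS F \<Longrightarrow> lin FS (\<lambda>a. sweedler a F)"
  unfolding sweedler_eq_tensor_lift using tensor_lift_lin[OF subspace_FS lin_Dl ex_Dl_rep] by blast

lemma sweedler_cong: assumes a: "a \<in> FS" and e: "\<And>u w. u \<in> FS \<Longrightarrow> w \<in> FS \<Longrightarrow> F u w = G u w"
  shows "sweedler a F = sweedler a G"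
  unfolding sweedler_def
proof (rule arg_cong[where f=sum_list], rule map_cong[OF refl])
  fix p assume "p \<in> set (sweedler_rep a)"
  then show "(\<lambda>(u,w). F u w) p = (\<lambda>(u,w). G u w) p" using sweedler_rep_FS[OF a] e by (auto split: prod.splits)
qed

lemma sweedler_zero: "sweedler a (\<lambda>u w. 0) = 0"
  unfolding sweedler_def case_prod_unfold by (rule sum_list_zero)

lemma sweedler_sc: "sweedler a (\<lambda>u w. sc c (F u w)) = sc c (sweedler a F)"
  unfolding sweedler_def by (rule sum_list_map_sc) (auto split: prod.splits)

lemma sweedler_swap: "sweedler a (\<lambda>u w. sweedler b (\<lambda>x y. F u w x y)) = sweedler b (\<lambda>x y. sweedler a (\<lambda>u w. F u w x y))"
  unfolding sweedler_def case_prod_unfold by (rule sum_list_swap)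

lemma sweedler_mem: "subspace V \<Longrightarrow> a \<in> FS \<Longrightarrow> (\<And>u w. u \<in> FS \<Longrightarrow> w \<in> FS \<Longrightarrow> F u w \<in> V) \<Longrightarrow> sweedler a F \<in> V"
  unfolding sweedler_def by (rule subspace_sum_list) (auto dest: sweedler_rep_FS split: prod.splits)

lemma sweedler_map: "subspace V \<Longrightarrow> lin V L \<Longrightarrow> a \<in> FS \<Longrightarrow> (\<And>u w. u \<in> FS \<Longrightarrow> w \<in> FS \<Longrightarrow> F u w \<in> V) \<Longrightarrow>
   L (sweedler a F) = sweedler a (\<lambda>u w. L (F u w))"
  unfolding sweedler_def by (subst lin_sum_list[of V L]) (auto dest: sweedler_rep_FS simp: case_prod_unfold)

lemma sweedler_counit_l: "a \<in> FS \<Longrightarrow> lin FS H \<Longrightarrow> sweedler a (\<lambda>u w. sc (ep u) (H w)) = H a"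
proof -
  assume a: "a \<in> FS" and H: "lin FS H"
  have "H a = H (sweedler a (\<lambda>u w. sc (ep u) w))"
    using counit_ax[OF a sweedler_rep_trep[OF a]] by (simp add: sweedler_def)
  also have "\<dots> = sweedler a (\<lambda>u w. H (sc (ep u) w))"
    by (rule sweedler_map[OF subspace_FS H a]) (simp add: subspace_sc[OF subspace_FS])
  also have "\<dots> = sweedler a (\<lambda>u w. sc (ep u) (H w))"
    by (rule sweedler_cong[OF a]) (simp add: lin_sc[OF H])
  finally show ?thesis by simp
qed

lemma sweedler_counit_r: "a \<in> FS \<Longrightarrow> lin FS H \<Longrightarrow> sweedler a (\<lambda>u w. sc (ep w) (H u)) = H a"
proof -
  assume a: "a \<in> FS" and H: "lin FS H"
  have "H a = H (sweedler a (\<lambda>u w. sc (ep w) u))"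
    using counit_ax[OF a sweedler_rep_trep[OF a]] by (simp add: sweedler_def)
  also have "\<dots> = sweedler a (\<lambda>u w. H (sc (ep w) u))"
    by (rule sweedler_map[OF subspace_FS H a]) (simp add: subspace_sc[OF subspace_FS])
  also have "\<dots> = sweedler a (\<lambda>u w. sc (ep w) (H u))"
    by (rule sweedler_cong[OF a]) (simp add: lin_sc[OF H])
  finally show ?thesis by simp
qed

lemma sweedler_heap_counit_l: "a \<in> FS \<Longrightarrow> c \<in> FS \<Longrightarrow> lin FS H \<Longrightarrow> sweedler c (\<lambda>c1 c2. H (br c1 c2 a)) = sc (ep c) (H a)"
proof -
  assume a: "a \<in> FS" and c: "c \<in> FS" and H: "lin FS H"
  have "sc (ep c) (H a) = H (sc (ep c) a)" by (simp add: lin_sc[OF H a])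
  also have "sc (ep c) a = sweedler c (\<lambda>c1 c2. br c1 c2 a)"
    using hcounit_ax[OF a c sweedler_rep_trep[OF c]] by (simp add: sweedler_def)
  also have "H \<dots> = sweedler c (\<lambda>c1 c2. H (br c1 c2 a))"
    by (rule sweedler_map[OF subspace_FS H c]) (simp add: br_FS a)
  finally show ?thesis by simp
qed

lemma sweedler_heap_counit_r: "a \<in> FS \<Longrightarrow> c \<in> FS \<Longrightarrow> lin FS H \<Longrightarrow> sweedler c (\<lambda>c1 c2. H (br a c1 c2)) = sc (ep c) (H a)"
proof -
  assume a: "a \<in> FS" and c: "c \<in> FS" and H: "lin FS H"
  have "sc (ep c) (H a) = H (sc (ep c) a)" by (simp add: lin_sc[OF H a])
  also have "sc (ep c) a = sweedler c (\<lambda>c1 c2. br a c1 c2)"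
    using hcounit_ax[OF a c sweedler_rep_trep[OF c]] by (simp add: sweedler_def)
  also have "H \<dots> = sweedler c (\<lambda>c1 c2. H (br a c1 c2))"
    by (rule sweedler_map[OF subspace_FS H c]) (simp add: br_FS a)
  finally show ?thesis by simp
qed

definition br_rep_list :: "('a \<Rightarrow> 'k) \<Rightarrow> ('a \<Rightarrow> 'k) \<Rightarrow> ('a \<Rightarrow> 'k) \<Rightarrow> (('a \<Rightarrow> 'k) \<times> ('a \<Rightarrow> 'k)) list" where
  "br_rep_list a b c = concat (map (\<lambda>(a1,a2). concat (map (\<lambda>(b1,b2).
     map (\<lambda>(c1,c2). (br a1 b2 c1, br a2 b1 c2)) (sweedler_rep c)) (sweedler_rep b))) (sweedler_rep a))"

lemma br_rep: assumes a: "a \<in> FS" and b: "b \<in> FS" and c: "c \<in> FS"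
  shows "trep FS FS (Dl (br a b c)) (br_rep_list a b c)"
  unfolding trep_def
proof
  show "set (br_rep_list a b c) \<subseteq> FS \<times> FS"
  proof
    fix p assume "p \<in> set (br_rep_list a b c)"
    then obtain a1 a2 b1 b2 c1 c2 where "(a1,a2) \<in> set (sweedler_rep a)" "(b1,b2) \<in> set (sweedler_rep b)" "(c1,c2) \<in> set (sweedler_rep c)"
      and p: "p = (br a1 b2 c1, br a2 b1 c2)" unfolding br_rep_list_def by auto
    then show "p \<in> FS \<times> FS" using sweedler_rep_FS[OF a] sweedler_rep_FS[OF b] sweedler_rep_FS[OF c] by (force intro!: br_FS)
  qed
  show "Dl (br a b c) = sum_list (map (\<lambda>(u,w). tens u w) (br_rep_list a b c))"
    unfolding Dl_br[OF a b c sweedler_rep_trep[OF a] sweedler_rep_trep[OF b] sweedler_rep_trep[OF c]] br_rep_list_def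
    by (simp add: sum_list_concat_map case_prod_unfold o_def)
qed

lemma sweedler_br: "bilinear FS FS F \<Longrightarrow> a \<in> FS \<Longrightarrow> b \<in> FS \<Longrightarrow> c \<in> FS \<Longrightarrow>
  sweedler (br a b c) F = sweedler a (\<lambda>a1 a2. sweedler b (\<lambda>b1 b2. sweedler c (\<lambda>c1 c2. F (br a1 b2 c1) (br a2 b1 c2))))"
  by (subst sweedler_eq_rep[OF _ br_rep]) (simp_all add: br_rep_list_def sweedler_def sum_list_concat_map case_prod_unfold o_def)

definition FS_tensors :: "('a \<times> 'a \<Rightarrow> 'k) set" where "FS_tensors = {t. \<exists>ps. trep FS FS t ps}"

lemma subspace_FS_tensors: "subspace FS_tensors"
  unfolding subspace_def FS_tensors_def
proof (intro conjI ballI allI; (elim CollectE exE)?)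
  show "0 \<in> {t. \<exists>ps. trep FS FS t ps}" by (rule CollectI, rule exI[of _ "[]"]) (simp add: trep_def)
next
  fix u w :: "'a \<times> 'a \<Rightarrow> 'k" and ps qs assume "trep FS FS u ps" "trep FS FS w qs"
  then show "u + w \<in> {t. \<exists>ps. trep FS FS t ps}" using trep_append by blast
next
  fix c and u :: "'a \<times> 'a \<Rightarrow> 'k" and ps assume "trep FS FS u ps"
  then show "sc c u \<in> {t. \<exists>ps. trep FS FS t ps}" using trep_scale[OF subspace_FS] by blast
qed

definition tensor_lift_first :: "(('a \<Rightarrow> 'k) \<Rightarrow> ('a \<Rightarrow> 'k) \<Rightarrow> ('a \<Rightarrow> 'k) \<Rightarrow> ('v \<Rightarrow> 'k)) \<Rightarrow> ('a \<times> 'a \<Rightarrow> 'k) \<Rightarrow> ('a \<Rightarrow> 'k) \<Rightarrow> ('v \<Rightarrow> 'k)" where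
  "tensor_lift_first G t w = sum_list (map (\<lambda>(u1,u2). G u1 u2 w) (SOME ps. trep FS FS t ps))"

lemma tensor_lift_first_rep: assumes G: "trilinear FS G" and w: "w \<in> FS" and ps: "trep FS FS t ps"
  shows "tensor_lift_first G t w = sum_list (map (\<lambda>(u1,u2). G u1 u2 w) ps)"
proof -
  have b: "bilinear FS FS (\<lambda>u1 u2. G u1 u2 w)" using G w by (auto simp: trilinear_def bilinear_def)
  have "trep FS FS t (SOME ps. trep FS FS t ps)" using ps by (rule someI)
  then show ?thesis unfolding tensor_lift_first_def using bilinear_trep_eq[OF subspace_FS b _ ps] by blast
qed

lemma bilinear_fix_third: "trilinear FS G \<Longrightarrow> w \<in> FS \<Longrightarrow> bilinear FS FS (\<lambda>u1 u2. G u1 u2 w)"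
  by (auto simp: trilinear_def bilinear_def)

lemma lin_tensor_lift_first_l:
  assumes G: "trilinear FS G" and w: "w \<in> FS"
  shows "lin FS_tensors (\<lambda>t. tensor_lift_first G t w)"
  unfolding lin_def
proof (intro conjI ballI allI)
  fix t t' :: "'a \<times> 'a \<Rightarrow> 'k" assume "t \<in> FS_tensors" "t' \<in> FS_tensors"
  then obtain ps qs where ps: "trep FS FS t ps" and qs: "trep FS FS t' qs" by (auto simp: FS_tensors_def)
  show "tensor_lift_first G (t + t') w = tensor_lift_first G t w + tensor_lift_first G t' w"
    using tensor_lift_first_rep[OF G w trep_append[OF ps qs]] tensor_lift_first_rep[OF G w ps]
      tensor_lift_first_rep[OF G w qs] by simp
next
  fix c and t :: "'a \<times> 'a \<Rightarrow> 'k" assume "t \<in> FS_tensors"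
  then obtain ps where ps: "trep FS FS t ps" by (auto simp: FS_tensors_def)
  show "tensor_lift_first G (sc c t) w = sc c (tensor_lift_first G t w)"
    using tensor_lift_first_rep[OF G w trep_scale[OF subspace_FS ps]] tensor_lift_first_rep[OF G w ps]
      bilinear_sum_scale_first[OF bilinear_fix_third[OF G w]] ps by (simp add: trep_def)
qed

lemma lin_tensor_lift_first_r:
  assumes G: "trilinear FS G" and t: "t \<in> FS_tensors"
  shows "lin FS (tensor_lift_first G t)"
proof -
  obtain ps where ps: "trep FS FS t ps" using t by (auto simp: FS_tensors_def)
  have "lin FS (\<lambda>w. sum_list (map (\<lambda>p. G (fst p) (snd p) w) ps))"
    by (rule lin_sum_listf) (use ps G in \<open>auto simp: trep_def trilinear_def\<close>)
  then show ?thesis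
    by (rule lin_cong[OF subspace_FS]) (simp add: tensor_lift_first_rep[OF G _ ps] case_prod_unfold)
qed

lemma bilinear_tensor_lift_first: "trilinear FS G \<Longrightarrow> bilinear FS_tensors FS (tensor_lift_first G)"
  by (rule bilinearI) (simp_all add: lin_tensor_lift_first_l lin_tensor_lift_first_r)

lemma tensor_lift_first_tens:
  "trilinear FS G \<Longrightarrow> u \<in> FS \<Longrightarrow> w1 \<in> FS \<Longrightarrow> w2 \<in> FS \<Longrightarrow> tensor_lift_first G (tens u w1) w2 = G u w1 w2"
  using tensor_lift_first_rep[of G w2 "tens u w1" "[(u,w1)]"] by (simp add: trep_def)

lemma coassoc_tens:
  assumes a: "a \<in> FS"
  shows "sum_list (map (\<lambda>(u,w). tens (Dl u) w) (sweedler_rep a))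
    = sweedler a (\<lambda>u w. sweedler w (\<lambda>w1 w2. tens (tens u w1) w2))"
proof -
  have "sweedler a (\<lambda>u w. sweedler w (\<lambda>w1 w2. tens (tens u w1) w2))
      = sweedler a (\<lambda>u w. reassoc (tens u (Dl w)))"
  proof (rule sweedler_cong[OF a])
    fix u w :: "'a \<Rightarrow> 'k" assume "w \<in> FS"
    then show "sweedler w (\<lambda>w1 w2. tens (tens u w1) w2) = reassoc (tens u (Dl w))"
      using sweedler_rep_trep
      by (simp add: trep_def sweedler_def tens_sum_r reassoc_sum case_prod_unfold reassoc_tens)
  qed
  then show ?thesis
    using coassoc_ax[OF a sweedler_rep_trep[OF a]] by (simp add: sweedler_def reassoc_sum case_prod_unfold)
qed

text \<open>Both sides are the image of the same element of
  (C \<otimes> C) \<otimes> C under the lift of G, represented once through Dl a1 \<otimes> a2 and once through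
  (a1 \<otimes> a21) \<otimes> a22.\<close>

lemma coassoc:
  assumes a: "a \<in> FS" and G: "trilinear FS G"
  shows "sweedler a (\<lambda>u w. sweedler u (\<lambda>u1 u2. G u1 u2 w)) = sweedler a (\<lambda>u w. sweedler w (\<lambda>w1 w2. G u w1 w2))"
proof -
  define H where "H = tensor_lift_first G"
  define l1 where "l1 = map (\<lambda>(u,w). (Dl u, w)) (sweedler_rep a)"
  define l2 where "l2 = concat (map (\<lambda>(u,w). map (\<lambda>(w1,w2). (tens u w1, w2)) (sweedler_rep w)) (sweedler_rep a))"
  have s1: "set l1 \<subseteq> FS_tensors \<times> FS"
    unfolding l1_def FS_tensors_def using sweedler_rep_FS[OF a] sweedler_rep_trep by fastforce
  have s2: "set l2 \<subseteq> FS_tensors \<times> FS"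
  proof
    fix p assume "p \<in> set l2"
    then obtain u w w1 w2 where uw: "(u,w) \<in> set (sweedler_rep a)" and w12: "(w1,w2) \<in> set (sweedler_rep w)"
      and p: "p = (tens u w1, w2)" unfolding l2_def by auto
    have "u \<in> FS" "w \<in> FS" using sweedler_rep_FS[OF a uw] by auto
    moreover have "w1 \<in> FS" "w2 \<in> FS" using sweedler_rep_FS[OF \<open>w \<in> FS\<close> w12] by auto
    ultimately have "trep FS FS (tens u w1) [(u,w1)]" by (simp add: trep_def)
    then show "p \<in> FS_tensors \<times> FS" using p \<open>w2 \<in> FS\<close> by (auto simp: FS_tensors_def)
  qed
  have "sum_list (map (\<lambda>(t,w). tens t w) l1) = sum_list (map (\<lambda>(t,w). tens t w) l2)"
    using coassoc_tens[OF a] by (simp add: l1_def l2_def sweedler_def sum_list_concat_map case_prod_unfold o_def)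
  then have eq: "sum_list (map (\<lambda>(t,w). H t w) l1) = sum_list (map (\<lambda>(t,w). H t w) l2)"
    unfolding H_def by (rule bilinear_tens_sum_eq[OF subspace_FS_tensors subspace_FS bilinear_tensor_lift_first[OF G] s1 s2])
  have "sum_list (map (\<lambda>(t,w). H t w) l1) = sweedler a (\<lambda>u w. H (Dl u) w)"
    by (simp add: l1_def sweedler_def case_prod_unfold o_def)
  also have "\<dots> = sweedler a (\<lambda>u w. sweedler u (\<lambda>u1 u2. G u1 u2 w))"
    by (rule sweedler_cong[OF a]) (simp add: H_def tensor_lift_first_rep[OF G _ sweedler_rep_trep] sweedler_def)
  finally have L: "sum_list (map (\<lambda>(t,w). H t w) l1) = sweedler a (\<lambda>u w. sweedler u (\<lambda>u1 u2. G u1 u2 w))" .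
  have "sum_list (map (\<lambda>(t,w). H t w) l2) = sweedler a (\<lambda>u w. sweedler w (\<lambda>w1 w2. H (tens u w1) w2))"
    by (simp add: l2_def sweedler_def sum_list_concat_map case_prod_unfold o_def)
  also have "\<dots> = sweedler a (\<lambda>u w. sweedler w (\<lambda>w1 w2. G u w1 w2))"
    by (intro sweedler_cong[OF a] sweedler_cong) (simp_all add: H_def tensor_lift_first_tens[OF G])
  finally show ?thesis using eq L by simp
qed

section \<open>The algebra of right translations\<close>

abbreviation TN :: "(('a \<Rightarrow> 'k) \<times> 'a \<Rightarrow> 'k) set" where "TN \<equiv> Tn br"
abbreviation tau_gens :: "(('a \<Rightarrow> 'k) \<times> 'a \<Rightarrow> 'k) set" where "tau_gens \<equiv> {tau br a b | a b. a \<in> FS \<and> b \<in> FS}"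

lemma TN_span: "TN = span tau_gens" by (simp add: Tn_def)
lemma subspace_TN: "subspace TN" by (simp add: Tn_def span_subspace)
lemma tau_TN: "a \<in> FS \<Longrightarrow> b \<in> FS \<Longrightarrow> tau br a b \<in> TN"
  unfolding Tn_def by (rule span_gen) blast

lemma tau_app: "c \<in> FS \<Longrightarrow> app (tau br a b) c = br c a b"
  by (simp add: tau_def app_end_of)
lemma tau_out: "c \<notin> FS \<Longrightarrow> tau br a b (c,x) = 0"
  by (simp add: tau_def end_of_out)

definition FS_endos :: "(('a \<Rightarrow> 'k) \<times> 'a \<Rightarrow> 'k) set" where
  "FS_endos = {t. end_of (app t) = t \<and> (\<forall>c\<in>FS. app t c \<in> FS) \<and> lin FS (app t)}"

lemma subspace_FS_endos: "subspace FS_endos"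
  unfolding subspace_def
proof (intro conjI ballI allI)
  have "end_of (app 0) = (0 :: ('a \<Rightarrow> 'k) \<times> 'a \<Rightarrow> 'k)"
    by (rule ext) (simp add: end_of_def app_zero zero_fun_apply split: prod.splits)
  then show "0 \<in> FS_endos"
    by (simp add: FS_endos_def app_zero subspace_zero[OF subspace_FS] lin_def sc_zero_r)
next
  fix x y assume "x \<in> FS_endos" "y \<in> FS_endos"
  then have x: "end_of (app x) = x" "\<forall>c\<in>FS. app x c \<in> FS" "lin FS (app x)"
    and y: "end_of (app y) = y" "\<forall>c\<in>FS. app y c \<in> FS" "lin FS (app y)" by (auto simp: FS_endos_def)
  have xy: "app (x + y) = (\<lambda>c. app x c + app y c)" by (rule ext) (rule app_add)
  show "x + y \<in> FS_endos"
    unfolding FS_endos_def mem_Collect_eq xy using x y lin_addf[OF x(3) y(3)]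
    by (simp add: end_of_add subspace_add[OF subspace_FS])
next
  fix c x assume "x \<in> FS_endos"
  then have x: "end_of (app x) = x" "\<forall>c\<in>FS. app x c \<in> FS" "lin FS (app x)" by (auto simp: FS_endos_def)
  have cx: "app (sc c x) = (\<lambda>d. sc c (app x d))" by (rule ext) (rule app_sc)
  show "sc c x \<in> FS_endos"
    unfolding FS_endos_def mem_Collect_eq cx using x lin_scf[OF x(3)]
    by (simp add: end_of_sc subspace_sc[OF subspace_FS])
qed

lemma tau_FS_endos: "a \<in> FS \<Longrightarrow> b \<in> FS \<Longrightarrow> tau br a b \<in> FS_endos"
  unfolding FS_endos_def using br_lin1[of a b]
  by (auto simp: tau_app br_FS tau_def app_end_of intro: end_of_cong lin_cong[OF subspace_FS])

lemma TN_FS_endos: "TN \<subseteq> FS_endos"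
  unfolding TN_span by (rule span_subset_subspace[OF subspace_FS_endos]) (auto intro: tau_FS_endos)

lemma TN_end_of: "t \<in> TN \<Longrightarrow> end_of (app t) = t" using TN_FS_endos by (auto simp: FS_endos_def)
lemma TN_app_FS: "t \<in> TN \<Longrightarrow> c \<in> FS \<Longrightarrow> app t c \<in> FS" using TN_FS_endos by (auto simp: FS_endos_def)
lemma TN_app_lin: "t \<in> TN \<Longrightarrow> lin FS (app t)" using TN_FS_endos by (auto simp: FS_endos_def)
lemma TN_eqI: "s \<in> TN \<Longrightarrow> t \<in> TN \<Longrightarrow> (\<And>c. c \<in> FS \<Longrightarrow> app s c = app t c) \<Longrightarrow> s = t"
  by (metis TN_end_of end_of_cong)

lemma tau_lin1: "b \<in> FS \<Longrightarrow> lin FS (\<lambda>a. tau br a b)"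
  unfolding lin_def
proof (intro conjI ballI allI)
  fix u w :: "'a \<Rightarrow> 'k" assume b: "b \<in> FS" and u: "u \<in> FS" and w: "w \<in> FS"
  have "tau br (u + w) b = end_of (\<lambda>c. br c u b + br c w b)"
    unfolding tau_def by (rule end_of_cong) (simp add: lin_add[OF br_lin2[OF _ b] u w])
  then show "tau br (u + w) b = tau br u b + tau br w b" by (simp add: end_of_add tau_def)
next
  fix c and u :: "'a \<Rightarrow> 'k" assume b: "b \<in> FS" and u: "u \<in> FS"
  have "tau br (sc c u) b = end_of (\<lambda>d. sc c (br d u b))"
    unfolding tau_def by (rule end_of_cong) (simp add: lin_sc[OF br_lin2[OF _ b] u])
  then show "tau br (sc c u) b = sc c (tau br u b)" by (simp add: end_of_sc tau_def)
qed

lemma tau_lin2: "a \<in> FS \<Longrightarrow> lin FS (\<lambda>b. tau br a b)"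
  unfolding lin_def
proof (intro conjI ballI allI)
  fix u w :: "'a \<Rightarrow> 'k" assume a: "a \<in> FS" and u: "u \<in> FS" and w: "w \<in> FS"
  have "tau br a (u + w) = end_of (\<lambda>c. br c a u + br c a w)"
    unfolding tau_def by (rule end_of_cong) (simp add: lin_add[OF br_lin3[OF _ a] u w])
  then show "tau br a (u + w) = tau br a u + tau br a w" by (simp add: end_of_add tau_def)
next
  fix c and u :: "'a \<Rightarrow> 'k" assume a: "a \<in> FS" and u: "u \<in> FS"
  have "tau br a (sc c u) = end_of (\<lambda>d. sc c (br d a u))"
    unfolding tau_def by (rule end_of_cong) (simp add: lin_sc[OF br_lin3[OF _ a] u])
  then show "tau br a (sc c u) = sc c (tau br a u)" by (simp add: end_of_sc tau_def)
qed

lemma tn_mult_tau: "a \<in> FS \<Longrightarrow> b \<in> FS \<Longrightarrow> c \<in> FS \<Longrightarrow> d \<in> FS \<Longrightarrow>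
   tn_mult (tau br a b) (tau br c d) = tau br a (br b c d)"
  unfolding tn_mult_def tau_def
  by (rule end_of_cong) (simp add: app_end_of br_FS br_assoc)

lemma lin_sweedler: "(\<And>u w. u \<in> FS \<Longrightarrow> w \<in> FS \<Longrightarrow> lin V (\<lambda>x. F x u w)) \<Longrightarrow> a \<in> FS \<Longrightarrow> lin V (\<lambda>x. sweedler a (F x))"
  unfolding sweedler_def case_prod_unfold by (rule lin_sum_listf) (auto dest: sweedler_rep_FS)

lemma lin_br1: "lin V f \<Longrightarrow> (\<And>x. x \<in> V \<Longrightarrow> f x \<in> FS) \<Longrightarrow> b \<in> FS \<Longrightarrow> c \<in> FS \<Longrightarrow> lin V (\<lambda>x. br (f x) b c)"
  by (rule lin_compose[OF _ _ br_lin1])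
lemma lin_br2: "lin V f \<Longrightarrow> (\<And>x. x \<in> V \<Longrightarrow> f x \<in> FS) \<Longrightarrow> a \<in> FS \<Longrightarrow> c \<in> FS \<Longrightarrow> lin V (\<lambda>x. br a (f x) c)"
  by (rule lin_compose[OF _ _ br_lin2])
lemma lin_br3: "lin V f \<Longrightarrow> (\<And>x. x \<in> V \<Longrightarrow> f x \<in> FS) \<Longrightarrow> a \<in> FS \<Longrightarrow> b \<in> FS \<Longrightarrow> lin V (\<lambda>x. br a b (f x))"
  by (rule lin_compose[OF _ _ br_lin3])

section \<open>Coproduct and counit\<close>

lemma ex_ep_one: "\<exists>k. k \<in> FS \<and> ep k = 1"
proof -
  obtain a :: "'a \<Rightarrow> 'k" where a: "a \<in> FS" "a \<noteq> 0" using FS_nz subspace_zero[OF subspace_FS] by blast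
  have "\<exists>u\<in>FS. ep u \<noteq> 0"
  proof (rule ccontr)
    assume "\<not> ?thesis"
    then have "\<And>u. u \<in> FS \<Longrightarrow> ep u = 0" by blast
    then have e1: "sweedler a (\<lambda>u w. sc (ep u) w) = sweedler a (\<lambda>u w. 0)"
      by (intro sweedler_cong[OF a(1)]) (simp add: sc_zero_l)
    have e2: "sweedler a (\<lambda>u w. sc (ep u) w) = a" using counit_ax[OF a(1) sweedler_rep_trep[OF a(1)]] by (simp add: sweedler_def)
    have "a = 0" using e1 e2 sweedler_zero[of a] by metis
    then show False using a(2) by simp
  qed
  then obtain u where u: "u \<in> FS" "ep u \<noteq> 0" by blast
  have "ep (sc (1 / ep u) u) = 1" using linf_sc[OF linf_ep u(1)] u(2) by simp
  then show ?thesis using subspace_sc[OF subspace_FS u(1)] by blast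
qed

definition ep_one :: "'a \<Rightarrow> 'k" where "ep_one = (SOME k. k \<in> FS \<and> ep k = 1)"
lemma ep_one: "ep_one \<in> FS" "ep ep_one = 1" using someI_ex[OF ex_ep_one] by (auto simp: ep_one_def)

lemma trilinear_bilinear_br:
  assumes c: "c \<in> FS" and d: "d \<in> FS" and k: "k \<in> FS" and P: "bilinear FS FS Phi"
  shows "trilinear FS (\<lambda>x y z. Phi (br c x y) (br d k z))"
proof (rule trilinearI)
  fix y z :: "'a \<Rightarrow> 'k" assume "y \<in> FS" "z \<in> FS"
  then show "lin FS (\<lambda>x. Phi (br c x y) (br d k z))"
    using c d k by (intro lin_compose[OF lin_br2[OF lin_id] _ bilinear_l[OF P]]) (auto intro: br_FS)
next
  fix x z :: "'a \<Rightarrow> 'k" assume "x \<in> FS" "z \<in> FS"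
  then show "lin FS (\<lambda>y. Phi (br c x y) (br d k z))"
    using c d k by (intro lin_compose[OF lin_br3[OF lin_id] _ bilinear_l[OF P]]) (auto intro: br_FS)
next
  fix x y :: "'a \<Rightarrow> 'k" assume "x \<in> FS" "y \<in> FS"
  then show "lin FS (\<lambda>z. Phi (br c x y) (br d k z))"
    using c d k by (intro lin_compose[OF lin_br3[OF lin_id] _ bilinear_r[OF P]]) (auto intro: br_FS)
qed

lemma sweedler_contract_second:
  assumes c: "c \<in> FS" and d: "d \<in> FS" and k1: "k1 \<in> FS" and k: "k \<in> FS" and P: "bilinear FS FS Phi"
  shows "sweedler k (\<lambda>k2 k3. sweedler k3 (\<lambda>m1 m2. Phi (br c k2 m1) (br d k1 m2))) = Phi c (br d k1 k)"
proof -
  note G = trilinear_bilinear_br[OF c d k1 P]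
  have "sweedler k (\<lambda>k2 k3. sweedler k3 (\<lambda>m1 m2. Phi (br c k2 m1) (br d k1 m2)))
      = sweedler k (\<lambda>u w. sweedler u (\<lambda>u1 u2. Phi (br c u1 u2) (br d k1 w)))"
    by (rule coassoc[OF k G, symmetric])
  also have "\<dots> = sweedler k (\<lambda>n m2. sc (ep n) (Phi c (br d k1 m2)))"
    by (rule sweedler_cong[OF k])
      (rule sweedler_heap_counit_r[OF c _ bilinear_l[OF P]], auto intro: br_FS d k1)
  also have "\<dots> = Phi c (br d k1 k)"
    by (rule sweedler_counit_l[OF k lin_compose[OF lin_br3[OF lin_id _ d k1] _ bilinear_r[OF P c]]])
      (auto intro: br_FS d k1)
  finally show ?thesis .
qed

text \<open>This identity is what lets the coproduct of an arbitrary endomorphism be written in terms of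
  its values (see tn_coprod_at below).\<close>

lemma ep_one_contract:
  assumes c: "c \<in> FS" and d: "d \<in> FS" and P: "bilinear FS FS Phi"
  shows "sweedler ep_one (\<lambda>k1 k'. sweedler k' (\<lambda>k2 k3. sweedler k3 (\<lambda>m1 m2. Phi (br c k2 m1) (br d k1 m2)))) = Phi c d"
proof -
  have "sweedler ep_one (\<lambda>k1 k'. sweedler k' (\<lambda>k2 k3. sweedler k3 (\<lambda>m1 m2. Phi (br c k2 m1) (br d k1 m2))))
     = sweedler ep_one (\<lambda>k1 k'. Phi c (br d k1 k'))"
    by (rule sweedler_cong[OF ep_one(1)]) (rule sweedler_contract_second[OF c d _ _ P])
  also have "\<dots> = sc (ep ep_one) (Phi c d)" by (rule sweedler_heap_counit_r[OF d ep_one(1) bilinear_r[OF P c]])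
  finally show ?thesis by (simp add: ep_one(2) sc_one)
qed

lemma sweedler_apply: "sweedler a F p = sum_list (map (\<lambda>(u,w). F u w p) (sweedler_rep a))"
  unfolding sweedler_def by (simp add: sum_list_map_apply case_prod_unfold)

definition tn_coprod_at :: "(('a \<Rightarrow> 'k) \<times> 'a \<Rightarrow> 'k) \<Rightarrow> ('a \<Rightarrow> 'k) \<Rightarrow> ('a \<Rightarrow> 'k) \<Rightarrow> ('a \<times> 'a \<Rightarrow> 'k)" where
  "tn_coprod_at t c d = sweedler ep_one (\<lambda>k1 k'. sweedler k' (\<lambda>k2 k3. sweedler (app t k3) (\<lambda>v1 v2. tens (br c k2 v1) (br d k1 v2))))"

definition tn_coprod :: "(('a \<Rightarrow> 'k) \<times> 'a \<Rightarrow> 'k) \<Rightarrow> ((('a \<Rightarrow> 'k) \<times> 'a) \<times> (('a \<Rightarrow> 'k) \<times> 'a) \<Rightarrow> 'k)" where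
  "tn_coprod t = (\<lambda>((c,x),(d,y)). if c \<in> FS \<and> d \<in> FS then tn_coprod_at t c d (x,y) else 0)"

definition tn_counit :: "(('a \<Rightarrow> 'k) \<times> 'a \<Rightarrow> 'k) \<Rightarrow> 'k" where
  "tn_counit t = ep (app t ep_one)"

lemma bilinear_tens_br: "c \<in> FS \<Longrightarrow> d \<in> FS \<Longrightarrow> k1 \<in> FS \<Longrightarrow> k2 \<in> FS \<Longrightarrow>
   bilinear FS FS (\<lambda>v1 v2. tens (br c k2 v1) (br d k1 v2))"
  by (rule bilinearI) (auto intro!: lin_tens_l lin_tens_r lin_br3 lin_id)

lemma bilinear_sweedler_tens_br: "a \<in> FS \<Longrightarrow> b \<in> FS \<Longrightarrow>
   bilinear FS FS (\<lambda>X Y. sweedler a (\<lambda>a1 a2. sweedler b (\<lambda>b1 b2. tens (br X a2 b1) (br Y a1 b2))))"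
  by (rule bilinearI) (auto intro!: lin_sweedler lin_tens_l lin_tens_r lin_br1 lin_id)

lemma bilinear_tens: "bilinear FS FS (\<lambda>X Y. tens X Y)"
  by (rule bilinearI) (auto intro!: lin_tens_l lin_tens_r lin_id)

lemma tn_coprod_at_tau:
  assumes a: "a \<in> FS" and b: "b \<in> FS" and c: "c \<in> FS" and d: "d \<in> FS"
  shows "tn_coprod_at (tau br a b) c d = sweedler a (\<lambda>a1 a2. sweedler b (\<lambda>b1 b2. tens (br c a2 b1) (br d a1 b2)))"
proof -
  define Phi where "Phi = (\<lambda>X Y. sweedler a (\<lambda>a1 a2. sweedler b (\<lambda>b1 b2. tens (br X a2 b1) (br Y a1 b2))))"
  have "tn_coprod_at (tau br a b) c d = sweedler ep_one (\<lambda>k1 k'. sweedler k' (\<lambda>k2 k3. sweedler k3 (\<lambda>m1 m2. Phi (br c k2 m1) (br d k1 m2))))"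
    unfolding tn_coprod_at_def
  proof (rule sweedler_cong[OF ep_one(1)], rule sweedler_cong)
    fix k1 k' k2 k3 :: "'a \<Rightarrow> 'k" assume k1: "k1 \<in> FS" and k': "k' \<in> FS" and k2: "k2 \<in> FS" and k3: "k3 \<in> FS"
    show "k' \<in> FS" by fact
    have "sweedler (app (tau br a b) k3) (\<lambda>v1 v2. tens (br c k2 v1) (br d k1 v2))
        = sweedler (br k3 a b) (\<lambda>v1 v2. tens (br c k2 v1) (br d k1 v2))" by (simp add: tau_app k3)
    also have "\<dots> = sweedler k3 (\<lambda>m1 m2. sweedler a (\<lambda>a1 a2. sweedler b (\<lambda>b1 b2.
          tens (br c k2 (br m1 a2 b1)) (br d k1 (br m2 a1 b2)))))"
      by (rule sweedler_br[OF bilinear_tens_br[OF c d k1 k2] k3 a b])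
    also have "\<dots> = sweedler k3 (\<lambda>m1 m2. Phi (br c k2 m1) (br d k1 m2))"
      unfolding Phi_def
      by (intro sweedler_cong[OF k3] sweedler_cong[OF a] sweedler_cong[OF b]) (simp add: br_assoc c d k1 k2)
    finally show "sweedler (app (tau br a b) k3) (\<lambda>v1 v2. tens (br c k2 v1) (br d k1 v2))
        = sweedler k3 (\<lambda>m1 m2. Phi (br c k2 m1) (br d k1 m2))" .
  qed
  also have "\<dots> = Phi c d" by (rule ep_one_contract[OF c d]) (unfold Phi_def, rule bilinear_sweedler_tens_br[OF a b])
  finally show ?thesis by (simp add: Phi_def)
qed

lemma trep_FS: "trep FS FS t ps \<Longrightarrow> p \<in> set ps \<Longrightarrow> fst p \<in> FS \<and> snd p \<in> FS"
  by (auto simp: trep_def)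

lemma bilinear_sum_list: "(\<And>p. p \<in> set qs \<Longrightarrow> bilinear U W (\<lambda>u w. G u w p)) \<Longrightarrow>
    bilinear U W (\<lambda>u w. sum_list (map (\<lambda>p. G u w p) qs))"
  by (rule bilinearI) (auto intro!: lin_sum_listf dest: bilinear_l bilinear_r)

lemma sweedler2_rep:
  assumes a: "a \<in> FS" and b: "b \<in> FS" and ps: "trep FS FS (Dl a) ps" and qs: "trep FS FS (Dl b) qs"
    and G1: "\<And>b1 b2. b1 \<in> FS \<Longrightarrow> b2 \<in> FS \<Longrightarrow> bilinear FS FS (\<lambda>a1 a2. G a1 a2 b1 b2)"
    and G2: "\<And>a1 a2. a1 \<in> FS \<Longrightarrow> a2 \<in> FS \<Longrightarrow> bilinear FS FS (\<lambda>b1 b2. G a1 a2 b1 b2)"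
  shows "sweedler a (\<lambda>a1 a2. sweedler b (\<lambda>b1 b2. G a1 a2 b1 b2))
     = sum_list (map (\<lambda>(a1,a2). sum_list (map (\<lambda>(b1,b2). G a1 a2 b1 b2) qs)) ps)"
proof -
  have "sweedler a (\<lambda>a1 a2. sweedler b (\<lambda>b1 b2. G a1 a2 b1 b2))
      = sweedler a (\<lambda>a1 a2. sum_list (map (\<lambda>(b1,b2). G a1 a2 b1 b2) qs))"
    by (rule sweedler_cong[OF a]) (rule sweedler_eq_rep[OF G2 qs])
  also have "\<dots> = sum_list (map (\<lambda>(a1,a2). sum_list (map (\<lambda>(b1,b2). G a1 a2 b1 b2) qs)) ps)"
  proof (rule sweedler_eq_rep[OF _ ps])
    show "bilinear FS FS (\<lambda>a1 a2. sum_list (map (\<lambda>(b1,b2). G a1 a2 b1 b2) qs))"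
      unfolding case_prod_unfold
      by (rule bilinear_sum_list) (use G1 trep_FS[OF qs] in blast)
  qed
  finally show ?thesis .
qed

lemma tn_coprod_tau:
  assumes a: "a \<in> FS" and b: "b \<in> FS" and ps: "trep FS FS (Dl a) ps" and qs: "trep FS FS (Dl b) qs"
  shows "tn_coprod (tau br a b) = sum_list (map (\<lambda>(a1,a2). sum_list (map (\<lambda>(b1,b2).
              tens (tau br a2 b1) (tau br a1 b2)) qs)) ps)"
proof (rule ext, clarify)
  fix c x d y
  have rhs: "sum_list (map (\<lambda>(a1,a2). sum_list (map (\<lambda>(b1,b2).
              tens (tau br a2 b1) (tau br a1 b2)) qs)) ps) ((c,x),(d,y))
     = sum_list (map (\<lambda>(a1,a2). sum_list (map (\<lambda>(b1,b2).
              tau br a2 b1 (c,x) * tau br a1 b2 (d,y)) qs)) ps)"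
    by (simp add: sum_list_map_apply case_prod_unfold)
  show "tn_coprod (tau br a b) ((c,x),(d,y)) = sum_list (map (\<lambda>(a1,a2). sum_list (map (\<lambda>(b1,b2).
              tens (tau br a2 b1) (tau br a1 b2)) qs)) ps) ((c,x),(d,y))"
  proof (cases "c \<in> FS \<and> d \<in> FS")
    case True
    then have c: "c \<in> FS" and d: "d \<in> FS" by auto
    have "tn_coprod (tau br a b) ((c,x),(d,y)) = tn_coprod_at (tau br a b) c d (x,y)" using True by (simp add: tn_coprod_def)
    also have "tn_coprod_at (tau br a b) c d = sum_list (map (\<lambda>(a1,a2). sum_list (map (\<lambda>(b1,b2).
              tens (br c a2 b1) (br d a1 b2)) qs)) ps)"
      unfolding tn_coprod_at_tau[OF a b c d]
      by (rule sweedler2_rep[OF a b ps qs]) (auto intro!: bilinearI lin_tens_l lin_tens_r lin_br2 lin_br3 lin_id c d)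
    finally show ?thesis unfolding rhs
      by (simp add: sum_list_map_apply case_prod_unfold tau_def end_of_def c d app_def)
  next
    case False
    then have "tn_coprod (tau br a b) ((c,x),(d,y)) = 0" by (auto simp: tn_coprod_def)
    moreover have "sum_list (map (\<lambda>(a1,a2). sum_list (map (\<lambda>(b1,b2).
              tau br a2 b1 (c,x) * tau br a1 b2 (d,y)) qs)) ps) = 0"
      using False by (induction ps) (auto simp: tau_out sum_list_zero case_prod_unfold)
    ultimately show ?thesis using rhs by simp
  qed
qed

lemma lin_tn_coprod_at: "c \<in> FS \<Longrightarrow> d \<in> FS \<Longrightarrow> lin TN (\<lambda>t. tn_coprod_at t c d)"
  unfolding tn_coprod_at_def
proof (intro lin_sweedler ep_one(1))
  fix k1 k' k2 k3 :: "'a \<Rightarrow> 'k"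
  assume c: "c \<in> FS" and d: "d \<in> FS" and k1: "k1 \<in> FS" and k': "k' \<in> FS" and k2: "k2 \<in> FS" and k3: "k3 \<in> FS"
  show "lin TN (\<lambda>t. sweedler (app t k3) (\<lambda>v1 v2. tens (br c k2 v1) (br d k1 v2)))"
    by (rule lin_compose[OF lin_app _ lin_sweedler_arg[OF bilinear_tens_br[OF c d k1 k2]]]) (rule TN_app_FS[OF _ k3])
qed

lemma lin_tn_coprod: "lin TN tn_coprod"
  unfolding lin_def
proof (intro conjI ballI allI)
  fix t t' assume t: "t \<in> TN" and t': "t' \<in> TN"
  show "tn_coprod (t + t') = tn_coprod t + tn_coprod t'"
    by (rule ext) (auto simp: tn_coprod_def plus_fun_apply lin_add[OF lin_tn_coprod_at t t'] zero_fun_apply)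
next
  fix e t assume t: "t \<in> TN"
  show "tn_coprod (sc e t) = sc e (tn_coprod t)"
    by (rule ext) (auto simp: tn_coprod_def sc_apply lin_sc[OF lin_tn_coprod_at t])
qed

lemma linf_tn_counit: "linf TN tn_counit"
  unfolding linf_def tn_counit_def
  by (simp add: app_add app_sc linf_add[OF linf_ep] linf_sc[OF linf_ep] TN_app_FS ep_one(1))

lemma tn_counit_tau: "a \<in> FS \<Longrightarrow> b \<in> FS \<Longrightarrow> tn_counit (tau br a b) = ep a * ep b"
  by (simp add: tn_counit_def tau_app ep_one ep_br)

lemma tn_unit_sweedler: "tn_unit = sweedler ep_one (\<lambda>k1 k2. tau br k1 k2)"
proof (rule ext, clarify)
  fix c x
  show "tn_unit (c,x) = sweedler ep_one (\<lambda>k1 k2. tau br k1 k2) (c,x)"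
  proof (cases "c \<in> FS")
    case True
    have "sweedler ep_one (\<lambda>k1 k2. tau br k1 k2) (c,x) = sweedler ep_one (\<lambda>k1 k2. br c k1 k2) x"
      unfolding sweedler_apply using True by (simp add: tau_def end_of_def)
    also have "sweedler ep_one (\<lambda>k1 k2. br c k1 k2) = sc (ep ep_one) c"
      using sweedler_heap_counit_r[OF True ep_one(1) lin_id] by simp
    finally show ?thesis using True by (simp add: tn_unit_def end_of_def ep_one sc_apply)
  next
    case False
    then show ?thesis unfolding sweedler_apply
      by (simp add: tn_unit_def end_of_def tau_out sum_list_zero case_prod_unfold)
  qed
qed

lemma tn_unit_TN: "tn_unit \<in> TN"
  unfolding tn_unit_sweedler by (rule sweedler_mem[OF subspace_TN ep_one(1)]) (rule tau_TN)

lemma tn_coprod_unit: "tn_coprod tn_unit = tens tn_unit tn_unit"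
proof (rule ext, clarify)
  fix c x d y
  show "tn_coprod tn_unit ((c,x),(d,y)) = tens tn_unit tn_unit ((c,x),(d,y))"
  proof (cases "c \<in> FS \<and> d \<in> FS")
    case True
    then have c: "c \<in> FS" and d: "d \<in> FS" by auto
    have "tn_coprod_at tn_unit c d = sweedler ep_one (\<lambda>k1 k'. sweedler k' (\<lambda>k2 k3. sweedler k3 (\<lambda>m1 m2. tens (br c k2 m1) (br d k1 m2))))"
      unfolding tn_coprod_at_def
      by (intro sweedler_cong[OF ep_one(1)] sweedler_cong) (simp_all add: tn_unit_def app_end_of)
    also have "\<dots> = tens c d" by (rule ep_one_contract[OF c d bilinear_tens])
    finally show ?thesis using True by (simp add: tn_coprod_def tn_unit_def end_of_def)
  next
    case False
    then show ?thesis by (auto simp: tn_coprod_def tn_unit_def end_of_def)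
  qed
qed

lemma tn_counit_unit: "tn_counit tn_unit = 1"
  by (simp add: tn_counit_def tn_unit_def app_end_of ep_one)

lemma tn_coprod_tau_rep: "a \<in> FS \<Longrightarrow> b \<in> FS \<Longrightarrow> trep TN TN (tn_coprod (tau br a b))
   (concat (map (\<lambda>(a1,a2). map (\<lambda>(b1,b2). (tau br a2 b1, tau br a1 b2)) (sweedler_rep b)) (sweedler_rep a)))"
  unfolding trep_def
proof
  assume a: "a \<in> FS" and b: "b \<in> FS"
  show "set (concat (map (\<lambda>(a1,a2). map (\<lambda>(b1,b2). (tau br a2 b1, tau br a1 b2)) (sweedler_rep b)) (sweedler_rep a))) \<subseteq> TN \<times> TN"
    using sweedler_rep_FS[OF a] sweedler_rep_FS[OF b] by (fastforce intro!: tau_TN)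
  show "tn_coprod (tau br a b) = sum_list (map (\<lambda>(u,w). tens u w)
      (concat (map (\<lambda>(a1,a2). map (\<lambda>(b1,b2). (tau br a2 b1, tau br a1 b2)) (sweedler_rep b)) (sweedler_rep a))))"
    unfolding tn_coprod_tau[OF a b sweedler_rep_trep[OF a] sweedler_rep_trep[OF b]]
    by (simp add: sum_list_concat_map case_prod_unfold o_def)
qed

lemma tensor_lift_tau: "a \<in> FS \<Longrightarrow> b \<in> FS \<Longrightarrow> bilinear TN TN F \<Longrightarrow>
   tensor_lift TN tn_coprod F (tau br a b) = sweedler a (\<lambda>a1 a2. sweedler b (\<lambda>b1 b2. F (tau br a2 b1) (tau br a1 b2)))"
proof -
  assume a: "a \<in> FS" and b: "b \<in> FS" and F: "bilinear TN TN F"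
  show ?thesis
    using tensor_lift_rep[of TN F tn_coprod "tau br a b", OF subspace_TN F tn_coprod_tau_rep[OF a b]] by (simp add: sum_list_concat_map case_prod_unfold o_def sweedler_def)
qed

lemma ex_tn_coprod_rep: assumes "t \<in> TN" shows "\<exists>ps. trep TN TN (tn_coprod t) ps"
proof -
  have "t \<in> span tau_gens" using assms TN_span by simp
  then show ?thesis
proof (induction t rule: span_closure_induct)
  case zero
  have "tn_coprod 0 = 0" using lin_zero[OF subspace_TN lin_tn_coprod] .
  then show ?case by (intro exI[of _ "[]"]) (simp add: trep_def)
next
  case (gen x)
  then obtain a b where "x = tau br a b" "a \<in> FS" "b \<in> FS" by blast
  then show ?case using tn_coprod_tau_rep by blast
next
  case (add x y)
  then obtain ps qs where "trep TN TN (tn_coprod x) ps" "trep TN TN (tn_coprod y) qs" by blast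
  moreover have "x \<in> TN" "y \<in> TN" using add.hyps TN_span by simp_all
  ultimately have "trep TN TN (tn_coprod (x + y)) (ps @ qs)" using trep_append lin_add[OF lin_tn_coprod] by simp
  then show ?case by blast
next
  case (scl c x)
  then obtain ps where "trep TN TN (tn_coprod x) ps" by blast
  moreover have "x \<in> TN" using scl.hyps TN_span by simp
  ultimately have "trep TN TN (tn_coprod (sc c x)) (map (\<lambda>(u,w). (sc c u, w)) ps)" using trep_scale[OF subspace_TN] lin_sc[OF lin_tn_coprod] by simp
  then show ?case by blast
qed
qed

lemma tn_unit_nonzero: "(tn_unit :: ('a \<Rightarrow> 'k) \<times> 'a \<Rightarrow> 'k) \<noteq> 0"
proof
  assume z: "(tn_unit :: ('a \<Rightarrow> 'k) \<times> 'a \<Rightarrow> 'k) = 0"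
  obtain a :: "'a \<Rightarrow> 'k" where a: "a \<in> FS" "a \<noteq> 0" using FS_nz subspace_zero[OF subspace_FS] by blast
  then obtain x where "a x \<noteq> 0" by (auto simp: fun_eq_iff zero_fun_apply)
  moreover have "tn_unit (a,x) = a x" using a by (simp add: tn_unit_def end_of_def)
  moreover have "tn_unit (a,x) = 0" unfolding z by (simp add: zero_fun_apply)
  ultimately show False by simp
qed

lemma TN_nonzero: "TN \<noteq> {0}" using tn_unit_TN tn_unit_nonzero by blast

lemma sweedler_cong_apply: "a \<in> FS \<Longrightarrow> (\<And>u w. u \<in> FS \<Longrightarrow> w \<in> FS \<Longrightarrow> F u w p = G u w q) \<Longrightarrow> sweedler a F p = sweedler a G q"
  unfolding sweedler_apply
  by (rule arg_cong[where f=sum_list], rule map_cong[OF refl]) (auto dest: sweedler_rep_FS split: prod.splits)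

lemma tens_sweedler_r: "tens w (sweedler a F) = sweedler a (\<lambda>u v. tens w (F u v))"
  unfolding sweedler_def by (simp add: tens_sum_r case_prod_unfold)

lemma sweedler_coassoc_swap:
  assumes a: "a \<in> FS" and b: "b \<in> FS" and c: "c \<in> FS" and d: "d \<in> FS" and e: "e \<in> FS"
  shows "sweedler a (\<lambda>a1 a2. sweedler b (\<lambda>b1 b2. sweedler a2 (\<lambda>a21 a22. sweedler b1 (\<lambda>b11 b12.
            tens (tens (br c a22 b11) (br d a21 b12)) (br e a1 b2)))))
       = sweedler a (\<lambda>a1 a2. sweedler b (\<lambda>b1 b2. sweedler a1 (\<lambda>a11 a12. sweedler b2 (\<lambda>b21 b22.
            tens (tens (br c a2 b1) (br d a12 b21)) (br e a11 b22)))))"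
proof -
  define T where "T = (\<lambda>x1 x2 x3 y1 y2 y3. tens (tens (br c x3 y1) (br d x2 y2)) (br e x1 y3))"
  define Psi where "Psi = (\<lambda>x1 x2 x3. sweedler b (\<lambda>b1 b2. sweedler b1 (\<lambda>b11 b12. T x1 x2 x3 b11 b12 b2)))"
  define Psi' where "Psi' = (\<lambda>x1 x2 x3. sweedler b (\<lambda>b1 b2. sweedler b2 (\<lambda>b21 b22. T x1 x2 x3 b1 b21 b22)))"
  have trT: "trilinear FS (\<lambda>y1 y2 y3. T x1 x2 x3 y1 y2 y3)" if "x1 \<in> FS" "x2 \<in> FS" "x3 \<in> FS" for x1 x2 x3
    unfolding T_def using that c d e
    by (intro trilinearI) (auto intro!: lin_tens_l lin_tens_r lin_br3 lin_id br_FS)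
  have PP: "Psi x1 x2 x3 = Psi' x1 x2 x3" if "x1 \<in> FS" "x2 \<in> FS" "x3 \<in> FS" for x1 x2 x3
    unfolding Psi_def Psi'_def using coassoc[OF b trT[OF that]] by simp
  have trPsi: "trilinear FS Psi" unfolding Psi_def T_def using b c d e
    by (intro trilinearI) (auto intro!: lin_sweedler lin_tens_l lin_tens_r lin_br2 lin_id br_FS)
  have "sweedler a (\<lambda>a1 a2. sweedler b (\<lambda>b1 b2. sweedler a2 (\<lambda>a21 a22. sweedler b1 (\<lambda>b11 b12.
            tens (tens (br c a22 b11) (br d a21 b12)) (br e a1 b2)))))
      = sweedler a (\<lambda>a1 a2. sweedler a2 (\<lambda>a21 a22. Psi a1 a21 a22))"
    unfolding Psi_def T_def by (rule sweedler_cong[OF a]) (rule sweedler_swap)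
  also have "\<dots> = sweedler a (\<lambda>u w. sweedler u (\<lambda>u1 u2. Psi u1 u2 w))"
    by (rule coassoc[OF a trPsi, symmetric])
  also have "\<dots> = sweedler a (\<lambda>u w. sweedler u (\<lambda>u1 u2. Psi' u1 u2 w))"
    by (intro sweedler_cong[OF a] sweedler_cong) (auto simp: PP)
  also have "\<dots> = sweedler a (\<lambda>a1 a2. sweedler b (\<lambda>b1 b2. sweedler a1 (\<lambda>a11 a12. sweedler b2 (\<lambda>b21 b22.
            tens (tens (br c a2 b1) (br d a12 b21)) (br e a11 b22)))))"
    unfolding Psi'_def T_def by (rule sweedler_cong[OF a]) (rule sweedler_swap[symmetric])
  finally show ?thesis .
qed

lemma tn_coprod_tau_apply: "a \<in> FS \<Longrightarrow> b \<in> FS \<Longrightarrow> c \<in> FS \<Longrightarrow> d \<in> FS \<Longrightarrow>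
  tn_coprod (tau br a b) ((c,x),(d,y)) = sweedler a (\<lambda>a1 a2. sweedler b (\<lambda>b1 b2. tens (br c a2 b1) (br d a1 b2))) (x,y)"
  by (simp add: tn_coprod_def tn_coprod_at_tau)

lemma tau_apply: "c \<in> FS \<Longrightarrow> tau br a b (c,x) = br c a b x"
  by (simp add: tau_def end_of_def)

lemma tn_coprod_coassoc_tau_apply:
  assumes a: "a \<in> FS" and b: "b \<in> FS" and c: "c \<in> FS" and d: "d \<in> FS" and e: "e \<in> FS"
  shows "sweedler a (\<lambda>a1 a2. sweedler b (\<lambda>b1 b2. tens (tn_coprod (tau br a2 b1)) (tau br a1 b2))) (((c,x),(d,y)),(e,z))
     = reassoc (sweedler a (\<lambda>a1 a2. sweedler b (\<lambda>b1 b2. tens (tau br a2 b1) (tn_coprod (tau br a1 b2))))) (((c,x),(d,y)),(e,z))"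
proof -
  have "sweedler a (\<lambda>a1 a2. sweedler b (\<lambda>b1 b2. tens (tn_coprod (tau br a2 b1)) (tau br a1 b2))) (((c,x),(d,y)),(e,z))
    = sweedler a (\<lambda>a1 a2. sweedler b (\<lambda>b1 b2. sweedler a2 (\<lambda>a21 a22. sweedler b1 (\<lambda>b11 b12.
          tens (tens (br c a22 b11) (br d a21 b12)) (br e a1 b2))))) ((x,y),z)"
  proof (intro sweedler_cong_apply[OF a] sweedler_cong_apply[OF b])
    fix a1 a2 b1 b2 :: "'a \<Rightarrow> 'k" assume "a1 \<in> FS" "a2 \<in> FS" "b1 \<in> FS" "b2 \<in> FS"
    then show "tens (tn_coprod (tau br a2 b1)) (tau br a1 b2) (((c,x),(d,y)),(e,z))
       = sweedler a2 (\<lambda>a21 a22. sweedler b1 (\<lambda>b11 b12. tens (tens (br c a22 b11) (br d a21 b12)) (br e a1 b2))) ((x,y),z)"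
      using c d e by (simp add: tn_coprod_tau_apply tau_apply sweedler_apply sum_list_map_apply case_prod_unfold sum_list_multc)
  qed
  also have "\<dots> = sweedler a (\<lambda>a1 a2. sweedler b (\<lambda>b1 b2. sweedler a1 (\<lambda>a11 a12. sweedler b2 (\<lambda>b21 b22.
          tens (tens (br c a2 b1) (br d a12 b21)) (br e a11 b22))))) ((x,y),z)"
    by (simp add: sweedler_coassoc_swap[OF a b c d e])
  also have "\<dots> = reassoc (sweedler a (\<lambda>a1 a2. sweedler b (\<lambda>b1 b2. tens (tau br a2 b1) (tn_coprod (tau br a1 b2))))) (((c,x),(d,y)),(e,z))"
    unfolding reassoc_def prod.case
  proof (intro sweedler_cong_apply[OF a] sweedler_cong_apply[OF b])
    fix a1 a2 b1 b2 :: "'a \<Rightarrow> 'k" assume "a1 \<in> FS" "a2 \<in> FS" "b1 \<in> FS" "b2 \<in> FS"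
    then show "sweedler a1 (\<lambda>a11 a12. sweedler b2 (\<lambda>b21 b22. tens (tens (br c a2 b1) (br d a12 b21)) (br e a11 b22))) ((x,y),z)
       = tens (tau br a2 b1) (tn_coprod (tau br a1 b2)) ((c,x),((d,y),(e,z)))"
      using c d e
      by (simp add: tn_coprod_tau_apply tau_apply tens_sweedler_r sweedler_apply sum_list_map_apply case_prod_unfold
          sum_list_cmult mult.assoc)
  qed
  finally show ?thesis .
qed

lemma tn_coprod_coassoc_tau:
  assumes a: "a \<in> FS" and b: "b \<in> FS"
  shows "sweedler a (\<lambda>a1 a2. sweedler b (\<lambda>b1 b2. tens (tn_coprod (tau br a2 b1)) (tau br a1 b2)))
     = reassoc (sweedler a (\<lambda>a1 a2. sweedler b (\<lambda>b1 b2. tens (tau br a2 b1) (tn_coprod (tau br a1 b2)))))"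
    (is "?L = ?R")
proof (rule ext, clarify)
  fix c x d y e z
  show "?L (((c,x),(d,y)),(e,z)) = ?R (((c,x),(d,y)),(e,z))"
  proof (cases "c \<in> FS \<and> d \<in> FS \<and> e \<in> FS")
    case True
    then show ?thesis using tn_coprod_coassoc_tau_apply[OF a b] by blast
  next
    case False
    have "?L (((c,x),(d,y)),(e,z)) = sweedler a (\<lambda>a1 a2. sweedler b (\<lambda>b1 b2. \<lambda>_. 0)) x"
      by (intro sweedler_cong_apply[OF a] sweedler_cong_apply[OF b]) (use False in \<open>auto simp: tn_coprod_def tau_out\<close>)
    moreover have "?R (((c,x),(d,y)),(e,z)) = sweedler a (\<lambda>a1 a2. sweedler b (\<lambda>b1 b2. \<lambda>_. 0)) x"
      unfolding reassoc_def prod.case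
      by (intro sweedler_cong_apply[OF a] sweedler_cong_apply[OF b]) (use False in \<open>auto simp: tn_coprod_def tau_out\<close>)
    ultimately show ?thesis by simp
  qed
qed

lemma tensor_lift_lin_TN: "bilinear TN TN F \<Longrightarrow> lin TN (tensor_lift TN tn_coprod F)"
  by (rule tensor_lift_lin[OF subspace_TN lin_tn_coprod ex_tn_coprod_rep])

lemma tensor_lift_rep_TN: "bilinear TN TN F \<Longrightarrow> trep TN TN (tn_coprod t) ps \<Longrightarrow> tensor_lift TN tn_coprod F t = sum_list (map (\<lambda>(u,w). F u w) ps)"
  by (rule tensor_lift_rep[of TN F tn_coprod t, OF subspace_TN])

lemma rep_sum_eq_of_tau: "bilinear TN TN F \<Longrightarrow> lin TN Q \<Longrightarrow>
   (\<And>a b. a \<in> FS \<Longrightarrow> b \<in> FS \<Longrightarrow> sweedler a (\<lambda>a1 a2. sweedler b (\<lambda>b1 b2. F (tau br a2 b1) (tau br a1 b2))) = Q (tau br a b))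
   \<Longrightarrow> t \<in> TN \<Longrightarrow> trep TN TN (tn_coprod t) ps \<Longrightarrow> sum_list (map (\<lambda>(u,w). F u w) ps) = Q t"
  by (rule rep_sum_eq_of_gens[OF TN_span lin_tn_coprod ex_tn_coprod_rep]) (auto simp: tensor_lift_tau)

lemma tn_counit_tau_l:
  fixes a b :: "'a \<Rightarrow> 'k" assumes a: "a \<in> FS" and b: "b \<in> FS"
  shows "sweedler a (\<lambda>a1 a2. sweedler b (\<lambda>b1 b2. sc (tn_counit (tau br a2 b1)) (tau br a1 b2))) = tau br a b"
proof -
  have "sweedler a (\<lambda>a1 a2. sweedler b (\<lambda>b1 b2. sc (tn_counit (tau br a2 b1)) (tau br a1 b2)))
     = sweedler a (\<lambda>a1 a2. sc (ep a2) (sweedler b (\<lambda>b1 b2. sc (ep b1) (tau br a1 b2))))"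
  proof (rule sweedler_cong[OF a])
    fix a1 a2 :: "'a \<Rightarrow> 'k" assume a1: "a1 \<in> FS" and a2: "a2 \<in> FS"
    have "sweedler b (\<lambda>b1 b2. sc (tn_counit (tau br a2 b1)) (tau br a1 b2)) = sweedler b (\<lambda>b1 b2. sc (ep a2) (sc (ep b1) (tau br a1 b2)))"
      by (rule sweedler_cong[OF b]) (simp add: tn_counit_tau a2 sc_sc)
    also have "\<dots> = sc (ep a2) (sweedler b (\<lambda>b1 b2. sc (ep b1) (tau br a1 b2)))" by (rule sweedler_sc)
    finally show "sweedler b (\<lambda>b1 b2. sc (tn_counit (tau br a2 b1)) (tau br a1 b2)) = sc (ep a2) (sweedler b (\<lambda>b1 b2. sc (ep b1) (tau br a1 b2)))" .
  qed
  also have "\<dots> = sweedler a (\<lambda>a1 a2. sc (ep a2) (tau br a1 b))"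
    by (rule sweedler_cong[OF a]) (simp add: sweedler_counit_l[OF b tau_lin2])
  also have "\<dots> = tau br a b" by (rule sweedler_counit_r[OF a tau_lin1[OF b]])
  finally show ?thesis .
qed

lemma tn_counit_tau_r:
  fixes a b :: "'a \<Rightarrow> 'k" assumes a: "a \<in> FS" and b: "b \<in> FS"
  shows "sweedler a (\<lambda>a1 a2. sweedler b (\<lambda>b1 b2. sc (tn_counit (tau br a1 b2)) (tau br a2 b1))) = tau br a b"
proof -
  have "sweedler a (\<lambda>a1 a2. sweedler b (\<lambda>b1 b2. sc (tn_counit (tau br a1 b2)) (tau br a2 b1)))
     = sweedler a (\<lambda>a1 a2. sc (ep a1) (sweedler b (\<lambda>b1 b2. sc (ep b2) (tau br a2 b1))))"
  proof (rule sweedler_cong[OF a])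
    fix a1 a2 :: "'a \<Rightarrow> 'k" assume a1: "a1 \<in> FS" and a2: "a2 \<in> FS"
    have "sweedler b (\<lambda>b1 b2. sc (tn_counit (tau br a1 b2)) (tau br a2 b1)) = sweedler b (\<lambda>b1 b2. sc (ep a1) (sc (ep b2) (tau br a2 b1)))"
      by (rule sweedler_cong[OF b]) (simp add: tn_counit_tau a1 sc_sc)
    also have "\<dots> = sc (ep a1) (sweedler b (\<lambda>b1 b2. sc (ep b2) (tau br a2 b1)))" by (rule sweedler_sc)
    finally show "sweedler b (\<lambda>b1 b2. sc (tn_counit (tau br a1 b2)) (tau br a2 b1)) = sc (ep a1) (sweedler b (\<lambda>b1 b2. sc (ep b2) (tau br a2 b1)))" .
  qed
  also have "\<dots> = sweedler a (\<lambda>a1 a2. sc (ep a1) (tau br a2 b))"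
    by (rule sweedler_cong[OF a]) (simp add: sweedler_counit_r[OF b tau_lin2])
  also have "\<dots> = tau br a b" by (rule sweedler_counit_l[OF a tau_lin1[OF b]])
  finally show ?thesis .
qed

lemma coalgebra_TN: "coalgebra TN tn_coprod tn_counit"
  unfolding coalgebra_def
proof (intro conjI ballI allI impI)
  show "subspace TN" by (rule subspace_TN)
  show "TN \<noteq> {0}" by (rule TN_nonzero)
  show "lin TN tn_coprod" by (rule lin_tn_coprod)
  show "linf TN tn_counit" by (rule linf_tn_counit)
  fix t assume t: "t \<in> TN"
  show "\<exists>ps. trep TN TN (tn_coprod t) ps" using ex_tn_coprod_rep[OF t] .
  fix ps assume ps: "trep TN TN (tn_coprod t) ps"
  have b1: "bilinear TN TN (\<lambda>u w. tens (tn_coprod u) w)" by (intro bilinearI lin_tens_l lin_tens_r lin_tn_coprod lin_id)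
  have b2: "bilinear TN TN (\<lambda>u w. tens u (tn_coprod w))" by (intro bilinearI lin_tens_l lin_tens_r lin_tn_coprod lin_id)
  have b3: "bilinear TN TN (\<lambda>u w. sc (tn_counit u) w)" by (intro bilinearI lin_sc_scalar linf_tn_counit lin_scf lin_id)
  have b4: "bilinear TN TN (\<lambda>u w. sc (tn_counit w) u)" by (intro bilinearI lin_sc_scalar linf_tn_counit lin_scf lin_id)
  have "sum_list (map (\<lambda>(u,w). tens (tn_coprod u) w) ps) = reassoc (tensor_lift TN tn_coprod (\<lambda>u w. tens u (tn_coprod w)) t)"
  proof (rule rep_sum_eq_of_tau[OF b1 lin_reassoc[OF tensor_lift_lin_TN[OF b2]] _ t ps])
    fix a b :: "'a \<Rightarrow> 'k" assume a: "a \<in> FS" and b: "b \<in> FS"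
    show "sweedler a (\<lambda>a1 a2. sweedler b (\<lambda>b1 b2. tens (tn_coprod (tau br a2 b1)) (tau br a1 b2)))
       = reassoc (tensor_lift TN tn_coprod (\<lambda>u w. tens u (tn_coprod w)) (tau br a b))"
      by (simp add: tensor_lift_tau[OF a b b2] tn_coprod_coassoc_tau[OF a b])
  qed
  also have "tensor_lift TN tn_coprod (\<lambda>u w. tens u (tn_coprod w)) t = sum_list (map (\<lambda>(u,w). tens u (tn_coprod w)) ps)"
    by (rule tensor_lift_rep_TN[OF b2 ps])
  finally show "sum_list (map (\<lambda>(u,w). tens (tn_coprod u) w) ps) = reassoc (sum_list (map (\<lambda>(u,w). tens u (tn_coprod w)) ps))" .
  show "sum_list (map (\<lambda>(u,w). sc (tn_counit u) w) ps) = t"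
    by (rule rep_sum_eq_of_tau[OF b3 lin_id _ t ps]) (rule tn_counit_tau_l)
  show "sum_list (map (\<lambda>(u,w). sc (tn_counit w) u) ps) = t"
    by (rule rep_sum_eq_of_tau[OF b4 lin_id _ t ps]) (rule tn_counit_tau_r)
qed

lemma tn_mult_lin_l: "b \<in> TN \<Longrightarrow> lin TN (\<lambda>a. tn_mult a b)"
  unfolding lin_def
proof (intro conjI ballI allI)
  fix a a' assume b: "b \<in> TN" and a: "a \<in> TN" and a': "a' \<in> TN"
  show "tn_mult (a + a') b = tn_mult a b + tn_mult a' b"
    unfolding tn_mult_def end_of_add[symmetric]
    by (rule end_of_cong) (simp add: app_add lin_add[OF TN_app_lin[OF b]] TN_app_FS a a')
next
  fix c a assume b: "b \<in> TN" and a: "a \<in> TN"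
  show "tn_mult (sc c a) b = sc c (tn_mult a b)"
    unfolding tn_mult_def end_of_sc[symmetric]
    by (rule end_of_cong) (simp add: app_sc lin_sc[OF TN_app_lin[OF b]] TN_app_FS a)
qed

lemma tn_mult_lin_r: "lin TN (\<lambda>b. tn_mult a b)"
  unfolding lin_def tn_mult_def end_of_add[symmetric] end_of_sc[symmetric]
  by (simp add: app_add app_sc)

lemma tn_mult_TN: "a \<in> TN \<Longrightarrow> b \<in> TN \<Longrightarrow> tn_mult a b \<in> TN"
proof -
  assume a: "a \<in> TN" and b: "b \<in> TN"
  have g: "tn_mult g b \<in> TN" if "g \<in> tau_gens" for g
  proof -
    obtain p q where g: "g = tau br p q" "p \<in> FS" "q \<in> FS" using \<open>g \<in> tau_gens\<close> by blast
    have "tn_mult (tau br p q) b \<in> span tau_gens"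
    proof (rule lin_image_span[of tau_gens "tn_mult (tau br p q)" "span tau_gens" b, OF _ span_subspace])
      show "lin (span tau_gens) (tn_mult (tau br p q))" using tn_mult_lin_r TN_span by simp
      show "b \<in> span tau_gens" using b TN_span by simp
      fix h assume "h \<in> tau_gens"
      then obtain r s where h: "h = tau br r s" "r \<in> FS" "s \<in> FS" by blast
      have "tn_mult (tau br p q) h = tau br p (br q r s)" using h g tn_mult_tau by simp
      moreover have "tau br p (br q r s) \<in> TN" using h g by (simp add: tau_TN br_FS)
      ultimately show "tn_mult (tau br p q) h \<in> span tau_gens" using TN_span by simp
    qed
    then show ?thesis using g TN_span by simp
  qed
  have "tn_mult a b \<in> span tau_gens"
    by (rule lin_image_span[of tau_gens "\<lambda>a. tn_mult a b" "span tau_gens" a, OF _ span_subspace])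
      (use tn_mult_lin_l[OF b] TN_span g a in simp_all)
  then show ?thesis using TN_span by simp
qed

lemma tn_mult_assoc: "a \<in> TN \<Longrightarrow> b \<in> TN \<Longrightarrow> c \<in> TN \<Longrightarrow> tn_mult (tn_mult a b) c = tn_mult a (tn_mult b c)"
  unfolding tn_mult_def
  by (rule end_of_cong) (simp add: app_end_of TN_app_FS)

lemma tn_mult_unit_l: "a \<in> TN \<Longrightarrow> tn_mult tn_unit a = a"
  unfolding tn_mult_def tn_unit_def
  by (subst TN_end_of[symmetric], assumption, rule end_of_cong) (simp add: app_end_of)

lemma tn_mult_unit_r: "a \<in> TN \<Longrightarrow> tn_mult a tn_unit = a"
  unfolding tn_mult_def tn_unit_def
  by (subst TN_end_of[symmetric], assumption, rule end_of_cong) (simp add: app_end_of TN_app_FS)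

lemma tn_counit_mult: "a \<in> TN \<Longrightarrow> b \<in> TN \<Longrightarrow> tn_counit (tn_mult a b) = tn_counit a * tn_counit b"
proof -
  assume a: "a \<in> TN" and b: "b \<in> TN"
  show ?thesis
  proof (rule bilinear_eq_spanf[of tau_gens "\<lambda>a b. tn_counit (tn_mult a b)" "\<lambda>a b. tn_counit a * tn_counit b", folded TN_span, OF _ _ _ _ _ a b])
    fix b assume bb: "b \<in> TN"
    show "linf TN (\<lambda>a. tn_counit (tn_mult a b))" by (rule linf_compose[OF tn_mult_lin_l[OF bb] _ linf_tn_counit]) (rule tn_mult_TN[OF _ bb])
    show "linf TN (\<lambda>a. tn_counit a * tn_counit b)" by (rule linf_mult_const[OF linf_tn_counit])
  next
    fix a assume "a \<in> TN"
    then show "linf TN (\<lambda>b. tn_counit (tn_mult a b))" by (intro linf_compose[OF tn_mult_lin_r _ linf_tn_counit] tn_mult_TN)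
    show "linf TN (\<lambda>b. tn_counit a * tn_counit b)" by (rule linf_const_mult[OF linf_tn_counit])
  next
    fix g h assume "g \<in> tau_gens" "h \<in> tau_gens"
    then obtain p q r s where "g = tau br p q" "h = tau br r s" "p \<in> FS" "q \<in> FS" "r \<in> FS" "s \<in> FS" by blast
    then show "tn_counit (tn_mult g h) = tn_counit g * tn_counit h"
      by (simp add: tn_mult_tau tn_counit_tau br_FS ep_br mult.assoc)
  qed
qed

lemma tn_coprod_some_rep: "b \<in> TN \<Longrightarrow> trep TN TN (tn_coprod b) (SOME ps. trep TN TN (tn_coprod b) ps)"
  using ex_tn_coprod_rep by (metis someI_ex)

lemma tensor_lift_param_lin:
  assumes G: "\<And>u w. u \<in> TN \<Longrightarrow> w \<in> TN \<Longrightarrow> lin W (\<lambda>x. G x u w)" and b: "b \<in> TN"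
  shows "lin W (\<lambda>x. tensor_lift TN tn_coprod (G x) b)"
proof -
  define L where "L = (SOME ps. trep TN TN (tn_coprod b) ps)"
  have "trep TN TN (tn_coprod b) L" using tn_coprod_some_rep[OF b] unfolding L_def .
  then have L: "set L \<subseteq> TN \<times> TN" by (simp add: trep_def)
  show ?thesis
    unfolding tensor_lift_def L_def[symmetric] case_prod_unfold
    by (rule lin_sum_listf) (use L G in auto)
qed

definition mult_tens :: "(('a \<Rightarrow> 'k) \<times> 'a \<Rightarrow> 'k) \<Rightarrow> (('a \<Rightarrow> 'k) \<times> 'a \<Rightarrow> 'k) \<Rightarrow> (('a \<Rightarrow> 'k) \<times> 'a \<Rightarrow> 'k) \<Rightarrow> (('a \<Rightarrow> 'k) \<times> 'a \<Rightarrow> 'k) \<Rightarrow> ((('a \<Rightarrow> 'k) \<times> 'a) \<times> (('a \<Rightarrow> 'k) \<times> 'a) \<Rightarrow> 'k)" where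
  "mult_tens a1 a2 = (\<lambda>b1 b2. tens (tn_mult a1 b1) (tn_mult a2 b2))"
definition coprod_mult :: "(('a \<Rightarrow> 'k) \<times> 'a \<Rightarrow> 'k) \<Rightarrow> (('a \<Rightarrow> 'k) \<times> 'a \<Rightarrow> 'k) \<Rightarrow> ((('a \<Rightarrow> 'k) \<times> 'a) \<times> (('a \<Rightarrow> 'k) \<times> 'a) \<Rightarrow> 'k)" where
  "coprod_mult a b = tensor_lift TN tn_coprod (\<lambda>a1 a2. tensor_lift TN tn_coprod (mult_tens a1 a2) b) a"

lemma bilinear_mult_tens: "a1 \<in> TN \<Longrightarrow> a2 \<in> TN \<Longrightarrow> bilinear TN TN (mult_tens a1 a2)"
  unfolding mult_tens_def by (intro bilinearI lin_tens_l lin_tens_r tn_mult_lin_r)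

lemma bilinear_coprod_mult_inner: "b \<in> TN \<Longrightarrow> bilinear TN TN (\<lambda>a1 a2. tensor_lift TN tn_coprod (mult_tens a1 a2) b)"
proof (rule bilinearI)
  fix w assume b: "b \<in> TN" and w: "w \<in> TN"
  show "lin TN (\<lambda>u. tensor_lift TN tn_coprod (mult_tens u w) b)"
    by (rule tensor_lift_param_lin[OF _ b]) (unfold mult_tens_def, intro lin_tens_l tn_mult_lin_l)
next
  fix u assume b: "b \<in> TN" and u: "u \<in> TN"
  show "lin TN (\<lambda>w. tensor_lift TN tn_coprod (mult_tens u w) b)"
    by (rule tensor_lift_param_lin[OF _ b]) (unfold mult_tens_def, intro lin_tens_r tn_mult_lin_l)
qed

lemma tn_coprod_mult: "a \<in> TN \<Longrightarrow> b \<in> TN \<Longrightarrow> tn_coprod (tn_mult a b) = coprod_mult a b"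
proof -
  assume a: "a \<in> TN" and b: "b \<in> TN"
  show ?thesis
  proof (rule bilinear_eq_span[of tau_gens "\<lambda>a b. tn_coprod (tn_mult a b)" coprod_mult, folded TN_span, OF _ _ _ _ _ a b])
    fix b assume bb: "b \<in> TN"
    show "lin TN (\<lambda>a. tn_coprod (tn_mult a b))" by (rule lin_compose[OF tn_mult_lin_l[OF bb] _ lin_tn_coprod]) (rule tn_mult_TN[OF _ bb])
    show "lin TN (\<lambda>a. coprod_mult a b)" unfolding coprod_mult_def by (rule tensor_lift_lin_TN[OF bilinear_coprod_mult_inner[OF bb]])
  next
    fix a assume aa: "a \<in> TN"
    show "lin TN (\<lambda>b. tn_coprod (tn_mult a b))" by (rule lin_compose[OF tn_mult_lin_r _ lin_tn_coprod]) (rule tn_mult_TN[OF aa])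
    show "lin TN (\<lambda>b. coprod_mult a b)" unfolding coprod_mult_def
      by (rule tensor_lift_param_lin[OF _ aa]) (rule tensor_lift_lin_TN[OF bilinear_mult_tens])
  next
    fix g h assume "g \<in> tau_gens" "h \<in> tau_gens"
    then obtain p q r s where gh: "g = tau br p q" "h = tau br r s" and
      p: "p \<in> FS" and q: "q \<in> FS" and r: "r \<in> FS" and s: "s \<in> FS" by blast
    have "tn_coprod (tn_mult g h) = tn_coprod (tau br p (br q r s))" using gh tn_mult_tau p q r s by simp
    also have "\<dots> = sweedler p (\<lambda>p1 p2. sweedler q (\<lambda>q1 q2. sweedler r (\<lambda>r1 r2. sweedler s (\<lambda>s1 s2.
        tens (tau br p2 (br q1 r2 s1)) (tau br p1 (br q2 r1 s2))))))"
      unfolding tn_coprod_tau[OF p br_FS[OF q r s] sweedler_rep_trep[OF p] br_rep[OF q r s]]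
      by (simp add: br_rep_list_def sweedler_def sum_list_concat_map case_prod_unfold o_def)
    also have "\<dots> = coprod_mult g h"
      unfolding coprod_mult_def gh
    proof (subst tensor_lift_tau[OF p q bilinear_coprod_mult_inner[OF tau_TN[OF r s]]], intro sweedler_cong[OF p] sweedler_cong[OF q])
      fix p1 p2 q1 q2 :: "'a \<Rightarrow> 'k" assume p1: "p1 \<in> FS" and p2: "p2 \<in> FS" and q1: "q1 \<in> FS" and q2: "q2 \<in> FS"
      show "sweedler r (\<lambda>r1 r2. sweedler s (\<lambda>s1 s2. tens (tau br p2 (br q1 r2 s1)) (tau br p1 (br q2 r1 s2))))
         = tensor_lift TN tn_coprod (mult_tens (tau br p2 q1) (tau br p1 q2)) (tau br r s)"
        unfolding tensor_lift_tau[OF r s bilinear_mult_tens[OF tau_TN[OF p2 q1] tau_TN[OF p1 q2]]]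
        unfolding mult_tens_def
        by (intro sweedler_cong[OF r] sweedler_cong[OF s]) (simp add: tn_mult_tau p1 p2 q1 q2)
    qed
    finally show "tn_coprod (tn_mult g h) = coprod_mult g h" .
  qed
qed

lemma rep_sum_coprod_mult: "a \<in> TN \<Longrightarrow> b \<in> TN \<Longrightarrow> trep TN TN (tn_coprod a) ps \<Longrightarrow> trep TN TN (tn_coprod b) qs \<Longrightarrow>
   sum_list (map (\<lambda>(a1,a2). sum_list (map (\<lambda>(b1,b2). tens (tn_mult a1 b1) (tn_mult a2 b2)) qs)) ps) = coprod_mult a b"
proof -
  assume a: "a \<in> TN" and b: "b \<in> TN" and ps: "trep TN TN (tn_coprod a) ps" and qs: "trep TN TN (tn_coprod b) qs"
  have "sum_list (map (\<lambda>(a1,a2). sum_list (map (\<lambda>(b1,b2). tens (tn_mult a1 b1) (tn_mult a2 b2)) qs)) ps)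
      = sum_list (map (\<lambda>(a1,a2). tensor_lift TN tn_coprod (mult_tens a1 a2) b) ps)"
  proof (rule arg_cong[where f=sum_list], rule map_cong[OF refl])
    fix p assume p: "p \<in> set ps"
    obtain a1 a2 where pe: "p = (a1,a2)" by fastforce
    have "a1 \<in> TN" "a2 \<in> TN" using ps p pe by (auto simp: trep_def)
    then have "tensor_lift TN tn_coprod (mult_tens a1 a2) b = sum_list (map (\<lambda>(b1,b2). mult_tens a1 a2 b1 b2) qs)"
      by (intro tensor_lift_rep_TN[OF bilinear_mult_tens qs])
    then show "(\<lambda>(a1,a2). sum_list (map (\<lambda>(b1,b2). tens (tn_mult a1 b1) (tn_mult a2 b2)) qs)) p
       = (\<lambda>(a1,a2). tensor_lift TN tn_coprod (mult_tens a1 a2) b) p" using pe by (simp add: mult_tens_def)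
  qed
  also have "\<dots> = coprod_mult a b" unfolding coprod_mult_def by (rule tensor_lift_rep_TN[OF bilinear_coprod_mult_inner[OF b] ps, symmetric])
  finally show ?thesis .
qed

lemma bialgebra_TN: "bialgebra TN tn_mult tn_unit tn_coprod tn_counit"
  unfolding bialgebra_def
proof (intro conjI ballI allI impI)
  show "coalgebra TN tn_coprod tn_counit" by (rule coalgebra_TN)
  show "tn_unit \<in> TN" by (rule tn_unit_TN)
  show "tn_coprod tn_unit = tens tn_unit tn_unit" by (rule tn_coprod_unit)
  show "tn_counit tn_unit = 1" by (rule tn_counit_unit)
  fix a assume a: "a \<in> TN"
  show "lin TN (\<lambda>x. tn_mult x a)" by (rule tn_mult_lin_l[OF a])
  show "lin TN (tn_mult a)" using tn_mult_lin_r by simp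
  show "tn_mult tn_unit a = a" by (rule tn_mult_unit_l[OF a])
  show "tn_mult a tn_unit = a" by (rule tn_mult_unit_r[OF a])
  fix b assume b: "b \<in> TN"
  show "tn_mult a b \<in> TN" by (rule tn_mult_TN[OF a b])
  show "tn_counit (tn_mult a b) = tn_counit a * tn_counit b" by (rule tn_counit_mult[OF a b])
  fix c assume c: "c \<in> TN"
  show "tn_mult (tn_mult a b) c = tn_mult a (tn_mult b c)" by (rule tn_mult_assoc[OF a b c])
next
  fix a b ps qs assume a: "a \<in> TN" and b: "b \<in> TN" and ps: "trep TN TN (tn_coprod a) ps" and qs: "trep TN TN (tn_coprod b) qs"
  show "tn_coprod (tn_mult a b) = sum_list (map (\<lambda>(a1,a2). sum_list (map (\<lambda>(b1,b2).
                          tens (tn_mult a1 b1) (tn_mult a2 b2)) qs)) ps)"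
    using tn_coprod_mult[OF a b] rep_sum_coprod_mult[OF a b ps qs] by simp
qed

lemma tn_struct_canonical: "tn_struct br Dl ep tn_coprod tn_counit"
  unfolding tn_struct_def using lin_tn_coprod linf_tn_counit tn_counit_tau tn_coprod_tau by blast

lemma tn_struct_unique:
  assumes T: "tn_struct br Dl ep DT eT" and t: "t \<in> TN"
  shows "DT t = tn_coprod t" "eT t = tn_counit t"
proof -
  have l: "lin TN DT" and lf: "linf TN eT"
    and g: "\<And>a b. a \<in> FS \<Longrightarrow> b \<in> FS \<Longrightarrow> eT (tau br a b) = ep a * ep b \<and>
      (\<forall>ps qs. trep FS FS (Dl a) ps \<longrightarrow> trep FS FS (Dl b) qs \<longrightarrow>
         DT (tau br a b) = sum_list (map (\<lambda>(a1,a2). sum_list (map (\<lambda>(b1,b2).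
              tens (tau br a2 b1) (tau br a1 b2)) qs)) ps))"
    using T unfolding tn_struct_def by blast+
  have tt: "t \<in> span tau_gens" using t TN_span by simp
  show "DT t = tn_coprod t"
  proof (rule lin_eq_span[of tau_gens DT tn_coprod t, folded TN_span, OF l lin_tn_coprod _ t])
    fix x assume "x \<in> tau_gens"
    then obtain a b where x: "x = tau br a b" "a \<in> FS" "b \<in> FS" by blast
    then show "DT x = tn_coprod x" using g[OF x(2,3)] tn_coprod_tau[OF x(2,3) sweedler_rep_trep[OF x(2)] sweedler_rep_trep[OF x(3)]] sweedler_rep_trep by simp
  qed
  show "eT t = tn_counit t"
  proof (rule linf_eq_span[of tau_gens eT tn_counit t, folded TN_span, OF lf linf_tn_counit _ t])
    fix x assume "x \<in> tau_gens"
    then obtain a b where x: "x = tau br a b" "a \<in> FS" "b \<in> FS" by blast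
    then show "eT x = tn_counit x" using g[OF x(2,3)] tn_counit_tau[OF x(2,3)] by simp
  qed
qed

lemma bialgebra_of_tn_struct: "tn_struct br Dl ep DT eT \<Longrightarrow> bialgebra TN tn_mult tn_unit DT eT"
  by (rule bialgebra_cong[OF bialgebra_TN]) (simp_all add: tn_struct_unique)

section \<open>Antipode\<close>

definition tn_antip :: "(('a \<Rightarrow> 'k) \<times> 'a \<Rightarrow> 'k) \<Rightarrow> (('a \<Rightarrow> 'k) \<times> 'a \<Rightarrow> 'k)" where
  "tn_antip t = end_of (\<lambda>c. sweedler ep_one (\<lambda>g1 g2. br c (app t g1) g2))"

lemma lin_tn_antip: "lin TN tn_antip"
  unfolding tn_antip_def
  by (rule lin_end_of, rule lin_sweedler[OF _ ep_one(1)], rule lin_br2[OF lin_app])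
     (auto intro: TN_app_FS)

lemma app_sweedler: "app (sweedler a F) c = sweedler a (\<lambda>u w. app (F u w) c)"
  by (rule ext) (simp add: app_apply sweedler_apply)

lemma heap_ep_one_right: "c \<in> FS \<Longrightarrow> sweedler ep_one (\<lambda>k1 k2. br c k1 k2) = c"
  using sweedler_heap_counit_r[OF _ ep_one(1) lin_id, of c] by (simp add: ep_one sc_one)

context
  fixes \<theta> assumes G: "grunspan Dl ep br \<theta>"
begin

lemma grunspan_coalg_map: "coalg_map Dl ep Dl ep \<theta>" using G unfolding grunspan_def by (rule conjunct1)
lemma grunspan_FS: "a \<in> FS \<Longrightarrow> \<theta> a \<in> FS" using grunspan_coalg_map unfolding coalg_map_def by blast
lemma grunspan_eq: "a \<in> FS \<Longrightarrow> b \<in> FS \<Longrightarrow> c \<in> FS \<Longrightarrow> d \<in> FS \<Longrightarrow> e \<in> FS \<Longrightarrow>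
     br (br a b (\<theta> c)) d e = br a (br d c b) e"
  using G unfolding grunspan_def by blast

lemma grunspan_expand:
  "a \<in> FS \<Longrightarrow> b \<in> FS \<Longrightarrow> c \<in> FS \<Longrightarrow> br c b (\<theta> a) = sweedler ep_one (\<lambda>k1 k2. br c (br k1 a b) k2)"
  using heap_ep_one_right[of "br c b (\<theta> a)"] sweedler_cong[OF ep_one(1), of "\<lambda>k1 k2. br (br c b (\<theta> a)) k1 k2"]
  by (simp add: br_FS grunspan_FS grunspan_eq)

lemma tn_antip_tau: "a \<in> FS \<Longrightarrow> b \<in> FS \<Longrightarrow> tn_antip (tau br a b) = tau br b (\<theta> a)"
  unfolding tn_antip_def tau_def
proof (rule end_of_cong)
  fix c :: "'a \<Rightarrow> 'k" assume a: "a \<in> FS" and b: "b \<in> FS" and c: "c \<in> FS"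
  have "sweedler ep_one (\<lambda>g1 g2. br c (app (end_of (\<lambda>c. br c a b)) g1) g2) = sweedler ep_one (\<lambda>g1 g2. br (br c b (\<theta> a)) g1 g2)"
    by (rule sweedler_cong[OF ep_one(1)]) (simp add: app_end_of grunspan_eq a b c)
  also have "\<dots> = br c b (\<theta> a)" by (rule heap_ep_one_right) (simp add: br_FS a b c grunspan_FS)
  finally show "sweedler ep_one (\<lambda>g1 g2. br c (app (end_of (\<lambda>c. br c a b)) g1) g2) = br c b (\<theta> a)" .
qed

lemma tn_antip_TN: "t \<in> TN \<Longrightarrow> tn_antip t \<in> TN"
proof -
  assume t: "t \<in> TN"
  have "tn_antip t \<in> span tau_gens"
  proof (rule lin_image_span[of tau_gens tn_antip "span tau_gens" t, OF _ span_subspace])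
    show "lin (span tau_gens) tn_antip" using lin_tn_antip TN_span by simp
    show "t \<in> span tau_gens" using t TN_span by simp
    fix x assume "x \<in> tau_gens"
    then obtain a b where x: "x = tau br a b" "a \<in> FS" "b \<in> FS" by blast
    then have "tn_antip x \<in> TN" by (simp add: tn_antip_tau tau_TN grunspan_FS)
    then show "tn_antip x \<in> span tau_gens" using TN_span by simp
  qed
  then show ?thesis using TN_span by simp
qed

lemma tn_antip_tau_l:
  assumes a: "a \<in> FS" and b: "b \<in> FS"
  shows "sweedler a (\<lambda>a1 a2. sweedler b (\<lambda>b1 b2. tn_mult (tn_antip (tau br a2 b1)) (tau br a1 b2))) = sc (ep a * ep b) tn_unit"
proof -
  have L: "sweedler a (\<lambda>a1 a2. sweedler b (\<lambda>b1 b2. tn_mult (tn_antip (tau br a2 b1)) (tau br a1 b2)))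
     = sweedler a (\<lambda>a1 a2. sweedler b (\<lambda>b1 b2. tau br b1 (br (\<theta> a2) a1 b2)))"
    by (intro sweedler_cong[OF a] sweedler_cong[OF b]) (simp add: tn_antip_tau tn_mult_tau grunspan_FS)
  have mem: "sweedler a (\<lambda>a1 a2. sweedler b (\<lambda>b1 b2. tau br b1 (br (\<theta> a2) a1 b2))) \<in> TN"
    by (intro sweedler_mem[OF subspace_TN a] sweedler_mem[OF subspace_TN b] tau_TN br_FS grunspan_FS)
  have mem2: "sc (ep a * ep b) tn_unit \<in> TN" by (rule subspace_sc[OF subspace_TN tn_unit_TN])
  show ?thesis unfolding L
  proof (rule TN_eqI[OF mem mem2])
    fix c :: "'a \<Rightarrow> 'k" assume c: "c \<in> FS"
    have "app (sweedler a (\<lambda>a1 a2. sweedler b (\<lambda>b1 b2. tau br b1 (br (\<theta> a2) a1 b2)))) c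
       = sweedler a (\<lambda>a1 a2. sweedler b (\<lambda>b1 b2. br c (br a1 a2 b1) b2))"
      unfolding app_sweedler
      by (intro sweedler_cong[OF a] sweedler_cong[OF b]) (simp add: tau_app c br_assoc[symmetric] grunspan_eq grunspan_FS br_FS)
    also have "\<dots> = sweedler b (\<lambda>b1 b2. sweedler a (\<lambda>a1 a2. br c (br a1 a2 b1) b2))" by (rule sweedler_swap)
    also have "\<dots> = sweedler b (\<lambda>b1 b2. sc (ep a) (br c b1 b2))"
      by (intro sweedler_cong[OF b]) (rule sweedler_heap_counit_l[OF _ a br_lin2], auto intro: c)
    also have "\<dots> = sc (ep a) (sc (ep b) c)" by (simp add: sweedler_sc sweedler_heap_counit_r[OF c b lin_id])
    also have "\<dots> = app (sc (ep a * ep b) tn_unit) c" by (simp add: app_sc tn_unit_def app_end_of c sc_sc)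
    finally show "app (sweedler a (\<lambda>a1 a2. sweedler b (\<lambda>b1 b2. tau br b1 (br (\<theta> a2) a1 b2)))) c = app (sc (ep a * ep b) tn_unit) c" .
  qed
qed

lemma tn_antip_tau_r:
  assumes a: "a \<in> FS" and b: "b \<in> FS"
  shows "sweedler a (\<lambda>a1 a2. sweedler b (\<lambda>b1 b2. tn_mult (tau br a2 b1) (tn_antip (tau br a1 b2)))) = sc (ep a * ep b) tn_unit"
proof -
  have L: "sweedler a (\<lambda>a1 a2. sweedler b (\<lambda>b1 b2. tn_mult (tau br a2 b1) (tn_antip (tau br a1 b2))))
     = sweedler a (\<lambda>a1 a2. sweedler b (\<lambda>b1 b2. tau br a2 (br b1 b2 (\<theta> a1))))"
    by (intro sweedler_cong[OF a] sweedler_cong[OF b]) (simp add: tn_antip_tau tn_mult_tau grunspan_FS)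
  have mem: "sweedler a (\<lambda>a1 a2. sweedler b (\<lambda>b1 b2. tau br a2 (br b1 b2 (\<theta> a1)))) \<in> TN"
    by (intro sweedler_mem[OF subspace_TN a] sweedler_mem[OF subspace_TN b] tau_TN br_FS grunspan_FS)
  have mem2: "sc (ep a * ep b) tn_unit \<in> TN" by (rule subspace_sc[OF subspace_TN tn_unit_TN])
  show ?thesis unfolding L
  proof (rule TN_eqI[OF mem mem2])
    fix c :: "'a \<Rightarrow> 'k" assume c: "c \<in> FS"
    have "app (sweedler a (\<lambda>a1 a2. sweedler b (\<lambda>b1 b2. tau br a2 (br b1 b2 (\<theta> a1))))) c
       = sweedler a (\<lambda>a1 a2. sweedler b (\<lambda>b1 b2. br c a2 (br b1 b2 (\<theta> a1))))"
      unfolding app_sweedler by (intro sweedler_cong[OF a] sweedler_cong[OF b]) (simp add: tau_app c)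
    also have "\<dots> = sweedler a (\<lambda>a1 a2. sc (ep b) (br c a2 (\<theta> a1)))"
      by (intro sweedler_cong[OF a]) (rule sweedler_heap_counit_l[OF _ b br_lin3], auto intro: c grunspan_FS)
    also have "\<dots> = sc (ep b) (sweedler a (\<lambda>a1 a2. br c a2 (\<theta> a1)))" by (rule sweedler_sc)
    also have "sweedler a (\<lambda>a1 a2. br c a2 (\<theta> a1)) = sweedler a (\<lambda>a1 a2. sweedler ep_one (\<lambda>k1 k2. br c (br k1 a1 a2) k2))"
      by (rule sweedler_cong[OF a]) (simp add: grunspan_expand c)
    also have "\<dots> = sweedler ep_one (\<lambda>k1 k2. sweedler a (\<lambda>a1 a2. br c (br k1 a1 a2) k2))" by (rule sweedler_swap)
    also have "\<dots> = sweedler ep_one (\<lambda>k1 k2. sc (ep a) (br c k1 k2))"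
      by (intro sweedler_cong[OF ep_one(1)]) (rule sweedler_heap_counit_r[OF _ a br_lin2], auto intro: c)
    also have "\<dots> = sc (ep a) c" by (simp add: sweedler_sc heap_ep_one_right c)
    finally show "app (sweedler a (\<lambda>a1 a2. sweedler b (\<lambda>b1 b2. tau br a2 (br b1 b2 (\<theta> a1))))) c = app (sc (ep a * ep b) tn_unit) c"
      by (simp add: app_sc tn_unit_def app_end_of c sc_sc mult.commute)
  qed
qed

lemma hopf_algebra_TN: "hopf_algebra TN tn_mult tn_unit tn_coprod tn_counit tn_antip"
  unfolding hopf_algebra_def
proof (intro conjI ballI allI impI)
  show "bialgebra TN tn_mult tn_unit tn_coprod tn_counit" by (rule bialgebra_TN)
  show "lin TN tn_antip" by (rule lin_tn_antip)
  fix t assume t: "t \<in> TN"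
  show "tn_antip t \<in> TN" by (rule tn_antip_TN[OF t])
  fix ps assume ps: "trep TN TN (tn_coprod t) ps"
  have Q: "lin TN (\<lambda>t. sc (tn_counit t) tn_unit)" by (rule lin_sc_scalar[OF linf_tn_counit])
  show "sum_list (map (\<lambda>(x,y). tn_mult (tn_antip x) y) ps) = sc (tn_counit t) tn_unit"
  proof (rule rep_sum_eq_of_tau[OF _ Q _ t ps])
    show "bilinear TN TN (\<lambda>x y. tn_mult (tn_antip x) y)"
      by (intro bilinearI lin_compose[OF lin_tn_antip _ tn_mult_lin_l] tn_mult_lin_r) (auto intro: tn_antip_TN)
    fix a b :: "'a \<Rightarrow> 'k" assume a: "a \<in> FS" and b: "b \<in> FS"
    show "sweedler a (\<lambda>a1 a2. sweedler b (\<lambda>b1 b2. tn_mult (tn_antip (tau br a2 b1)) (tau br a1 b2))) = sc (tn_counit (tau br a b)) tn_unit"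
      by (simp add: tn_antip_tau_l[OF a b] tn_counit_tau a b)
  qed
  show "sum_list (map (\<lambda>(x,y). tn_mult x (tn_antip y)) ps) = sc (tn_counit t) tn_unit"
  proof (rule rep_sum_eq_of_tau[OF _ Q _ t ps])
    show "bilinear TN TN (\<lambda>x y. tn_mult x (tn_antip y))"
      by (intro bilinearI lin_compose[OF lin_tn_antip _ tn_mult_lin_r] tn_mult_lin_l) (auto intro: tn_antip_TN)
    fix a b :: "'a \<Rightarrow> 'k" assume a: "a \<in> FS" and b: "b \<in> FS"
    show "sweedler a (\<lambda>a1 a2. sweedler b (\<lambda>b1 b2. tn_mult (tau br a2 b1) (tn_antip (tau br a1 b2)))) = sc (tn_counit (tau br a b)) tn_unit"
      by (simp add: tn_antip_tau_r[OF a b] tn_counit_tau a b)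
  qed
qed

lemma tn_antipode_canonical: "tn_antipode br \<theta> tn_antip"
  unfolding tn_antipode_def using lin_tn_antip tn_antip_tau by blast

lemma hopf_algebra_of_tn_struct:
  "tn_struct br Dl ep DT eT \<Longrightarrow> hopf_algebra TN tn_mult tn_unit DT eT tn_antip"
  by (rule hopf_algebra_cong[OF hopf_algebra_TN]) (simp_all add: tn_struct_unique)

end

lemma tn_map_id: "tn_map br br (\<lambda>x. x) Phi \<Longrightarrow> t \<in> TN \<Longrightarrow> Phi t = t"
proof -
  assume P: "tn_map br br (\<lambda>x. x) Phi" and t: "t \<in> TN"
  have l: "lin TN Phi" and g: "\<And>a b. a \<in> FS \<Longrightarrow> b \<in> FS \<Longrightarrow> Phi (tau br a b) = tau br a b"
    using P unfolding tn_map_def by blast+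
  show ?thesis
  proof (rule lin_eq_span[of tau_gens Phi "\<lambda>x. x" t, folded TN_span, OF l lin_id _ t])
    fix x assume "x \<in> tau_gens"
    then show "Phi x = x" using g by blast
  qed
qed
end

section \<open>Functoriality\<close>

locale hheap_morph = C: hheap Dl ep br + D: hheap Dl' ep' br'
  for Dl :: "('a \<Rightarrow> 'k::field) \<Rightarrow> ('a \<times> 'a \<Rightarrow> 'k)" and ep and br
  and Dl' :: "('b \<Rightarrow> 'k) \<Rightarrow> ('b \<times> 'b \<Rightarrow> 'k)" and ep' and br' +
  fixes f :: "('a \<Rightarrow> 'k) \<Rightarrow> ('b \<Rightarrow> 'k)"
  assumes M: "heap_morph Dl ep br Dl' ep' br' f"
begin

lemma f_coalg_map: "coalg_map Dl ep Dl' ep' f" using M unfolding heap_morph_def by (rule conjunct1)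
lemma f_lin: "lin FS f" using f_coalg_map unfolding coalg_map_def by (rule conjunct1)
lemma f_FS: "a \<in> FS \<Longrightarrow> f a \<in> FS" using f_coalg_map unfolding coalg_map_def by blast
lemma f_ep: "a \<in> FS \<Longrightarrow> ep' (f a) = ep a" using f_coalg_map unfolding coalg_map_def by blast
lemma f_Dl: "a \<in> FS \<Longrightarrow> trep FS FS (Dl a) ps \<Longrightarrow> Dl' (f a) = sum_list (map (\<lambda>(u,w). tens (f u) (f w)) ps)"
  using f_coalg_map unfolding coalg_map_def by blast
lemma f_br: "a \<in> FS \<Longrightarrow> b \<in> FS \<Longrightarrow> c \<in> FS \<Longrightarrow> f (br a b c) = br' (f a) (f b) (f c)"
  using M unfolding heap_morph_def by blast

lemma f_rep: "a \<in> FS \<Longrightarrow> trep FS FS (Dl a) ps \<Longrightarrow> trep FS FS (Dl' (f a)) (map (\<lambda>(u,w). (f u, f w)) ps)"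
  unfolding trep_def
proof (intro conjI)
  assume a: "a \<in> FS" and ps: "set ps \<subseteq> FS \<times> FS \<and> Dl a = sum_list (map (\<lambda>(u,w). tens u w) ps)"
  show "set (map (\<lambda>(u,w). (f u, f w)) ps) \<subseteq> FS \<times> FS" using ps by (auto intro: f_FS)
  show "Dl' (f a) = sum_list (map (\<lambda>(u,w). tens u w) (map (\<lambda>(u,w). (f u, f w)) ps))"
    using f_Dl[OF a] ps by (simp add: trep_def case_prod_unfold o_def)
qed

lemma morph_counit_r: "a \<in> FS \<Longrightarrow> d \<in> FS \<Longrightarrow> C.sweedler a (\<lambda>u w. br' d (f u) (f w)) = sc (ep a) d"
proof -
  assume a: "a \<in> FS" and d: "d \<in> FS"
  have "sum_list (map (\<lambda>(c1,c2). br' d c1 c2) (map (\<lambda>(u,w). (f u, f w)) (C.sweedler_rep a))) = sc (ep' (f a)) d"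
    using D.hcounit_ax[OF d f_FS[OF a] f_rep[OF a C.sweedler_rep_trep[OF a]]] by blast
  then show ?thesis by (simp add: C.sweedler_def case_prod_unfold o_def f_ep a)
qed

lemma morph_ep_one: "d \<in> FS \<Longrightarrow> C.sweedler C.ep_one (\<lambda>u w. br' d (f u) (f w)) = d"
  using morph_counit_r[OF C.ep_one(1)] by (simp add: C.ep_one sc_one)

lemma morph_ep_one_first:
  "d \<in> FS \<Longrightarrow> x \<in> FS \<Longrightarrow> y \<in> FS \<Longrightarrow> br' d x y = C.sweedler C.ep_one (\<lambda>g1 g2. br' (br' d (f g1) (f g2)) x y)"
  using C.sweedler_map[OF D.subspace_FS D.br_lin1 C.ep_one(1), of x y "\<lambda>g1 g2. br' d (f g1) (f g2)"]
  by (simp add: morph_ep_one D.br_FS f_FS)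

definition tn_induced :: "(('a \<Rightarrow> 'k) \<times> 'a \<Rightarrow> 'k) \<Rightarrow> (('b \<Rightarrow> 'k) \<times> 'b \<Rightarrow> 'k)" where
  "tn_induced t = end_of (\<lambda>d. C.sweedler C.ep_one (\<lambda>g1 g2. br' d (f g1) (f (app t g2))))"

lemma lin_tn_induced: "lin C.TN tn_induced"
  unfolding tn_induced_def
proof (rule lin_end_of, rule C.lin_sweedler[OF _ C.ep_one(1)])
  fix d :: "'b \<Rightarrow> 'k" and g1 g2 :: "'a \<Rightarrow> 'k" assume d: "d \<in> FS" and g1: "g1 \<in> FS" and g2: "g2 \<in> FS"
  show "lin C.TN (\<lambda>t. br' d (f g1) (f (app t g2)))"
    by (rule lin_compose[OF lin_compose[OF lin_app _ f_lin] _ D.br_lin3[OF d f_FS[OF g1]]])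
      (auto intro: f_FS C.TN_app_FS g2)
qed

lemma tn_induced_tau: "a \<in> FS \<Longrightarrow> b \<in> FS \<Longrightarrow> tn_induced (tau br a b) = tau br' (f a) (f b)"
  unfolding tn_induced_def tau_def
proof (rule end_of_cong)
  fix d :: "'b \<Rightarrow> 'k" assume a: "a \<in> FS" and b: "b \<in> FS" and d: "d \<in> FS"
  show "C.sweedler C.ep_one (\<lambda>g1 g2. br' d (f g1) (f (app (end_of (\<lambda>c. br c a b)) g2))) = br' d (f a) (f b)"
    by (subst morph_ep_one_first[OF d f_FS[OF a] f_FS[OF b]], rule C.sweedler_cong[OF C.ep_one(1)])
      (simp add: app_end_of f_br a b D.br_assoc d f_FS)
qed

lemma tn_map_tn_induced: "tn_map br br' f tn_induced"
  unfolding tn_map_def using lin_tn_induced tn_induced_tau by blast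

lemma morph_grunspan:
  assumes G: "grunspan Dl ep br \<theta>" and G': "grunspan Dl' ep' br' \<theta>'"
    and a: "a \<in> FS" and b: "b \<in> FS" and d: "d \<in> FS"
  shows "br' d (f b) (f (\<theta> a)) = br' d (f b) (\<theta>' (f a))"
proof -
  have ta: "\<theta> a \<in> FS" by (rule C.grunspan_FS[OF G a])
  have fta: "\<theta>' (f a) \<in> FS" by (rule D.grunspan_FS[OF G' f_FS[OF a]])
  have R: "br' x (f b) (\<theta>' (f a)) = C.sweedler C.ep_one (\<lambda>k1 k2. br' x (f (br k1 a b)) (f k2))"
    if x: "x \<in> FS" for x
  proof -
    have "br' x (f b) (\<theta>' (f a)) = C.sweedler C.ep_one (\<lambda>k1 k2. br' (br' x (f b) (\<theta>' (f a))) (f k1) (f k2))"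
      by (rule morph_ep_one[symmetric]) (simp add: D.br_FS x f_FS b fta)
    also have "\<dots> = C.sweedler C.ep_one (\<lambda>k1 k2. br' x (f (br k1 a b)) (f k2))"
      by (rule C.sweedler_cong[OF C.ep_one(1)]) (simp add: D.grunspan_eq[OF G'] x f_FS a b f_br)
    finally show ?thesis .
  qed
  have summand: "br' (br' d (f g1) (f g2)) (f b) (f (\<theta> a)) = br' (br' d (f g1) (f g2)) (f b) (\<theta>' (f a))"
    if g1: "g1 \<in> FS" and g2: "g2 \<in> FS" for g1 g2
  proof -
    have lin_g: "lin FS (\<lambda>z. br' d (f g1) (f z))"
      by (rule lin_compose[OF f_lin f_FS D.br_lin3[OF d f_FS[OF g1]]])
    have "br' (br' d (f g1) (f g2)) (f b) (f (\<theta> a)) = br' d (f g1) (f (br g2 b (\<theta> a)))"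
      by (simp add: D.br_assoc d f_FS g1 g2 b ta f_br)
    also have "\<dots> = br' d (f g1) (f (C.sweedler C.ep_one (\<lambda>k1 k2. br g2 (br k1 a b) k2)))"
      by (simp add: C.grunspan_expand[OF G a b g2])
    also have "\<dots> = C.sweedler C.ep_one (\<lambda>k1 k2. br' d (f g1) (f (br g2 (br k1 a b) k2)))"
      by (rule C.sweedler_map[OF C.subspace_FS lin_g C.ep_one(1)]) (simp add: C.br_FS g2 a b)
    also have "\<dots> = C.sweedler C.ep_one (\<lambda>k1 k2. br' (br' d (f g1) (f g2)) (f (br k1 a b)) (f k2))"
      by (rule C.sweedler_cong[OF C.ep_one(1)]) (simp add: D.br_assoc D.br_FS d f_FS g1 g2 C.br_FS a b f_br)
    also have "\<dots> = br' (br' d (f g1) (f g2)) (f b) (\<theta>' (f a))"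
      by (rule R[symmetric]) (simp add: D.br_FS d f_FS g1 g2)
    finally show ?thesis .
  qed
  show ?thesis
    using morph_ep_one_first[OF d f_FS[OF b] f_FS[OF ta]] morph_ep_one_first[OF d f_FS[OF b] fta]
      C.sweedler_cong[OF C.ep_one(1) summand] by simp
qed

context fixes Phi assumes P: "tn_map br br' f Phi"
begin

lemma Phi_lin: "lin C.TN Phi" using P unfolding tn_map_def by blast
lemma Phi_tau: "a \<in> FS \<Longrightarrow> b \<in> FS \<Longrightarrow> Phi (tau br a b) = tau br' (f a) (f b)" using P unfolding tn_map_def by blast

lemma Phi_TN: "t \<in> C.TN \<Longrightarrow> Phi t \<in> D.TN"
proof -
  assume t: "t \<in> C.TN"
  show ?thesis
  proof (rule lin_image_span[of C.tau_gens Phi D.TN t, OF _ D.subspace_TN])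
    show "lin (span C.tau_gens) Phi" using Phi_lin C.TN_span by simp
    show "t \<in> span C.tau_gens" using t C.TN_span by simp
    fix x assume "x \<in> C.tau_gens"
    then obtain a b where x: "x = tau br a b" "a \<in> FS" "b \<in> FS" by blast
    then show "Phi x \<in> D.TN" by (simp add: Phi_tau D.tau_TN f_FS)
  qed
qed

lemma Phi_mult: "a \<in> C.TN \<Longrightarrow> b \<in> C.TN \<Longrightarrow> Phi (tn_mult a b) = tn_mult (Phi a) (Phi b)"
proof -
  assume a: "a \<in> C.TN" and b: "b \<in> C.TN"
  show ?thesis
  proof (rule bilinear_eq_span[of C.tau_gens "\<lambda>a b. Phi (tn_mult a b)" "\<lambda>a b. tn_mult (Phi a) (Phi b)",
        folded C.TN_span, OF _ _ _ _ _ a b])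
    fix b assume bb: "b \<in> C.TN"
    show "lin C.TN (\<lambda>a. Phi (tn_mult a b))" by (rule lin_compose[OF C.tn_mult_lin_l[OF bb] _ Phi_lin]) (rule C.tn_mult_TN[OF _ bb])
    show "lin C.TN (\<lambda>a. tn_mult (Phi a) (Phi b))"
      by (rule lin_compose[OF Phi_lin _ D.tn_mult_lin_l[OF Phi_TN[OF bb]]]) (rule Phi_TN)
  next
    fix a assume aa: "a \<in> C.TN"
    show "lin C.TN (\<lambda>b. Phi (tn_mult a b))" by (rule lin_compose[OF C.tn_mult_lin_r _ Phi_lin]) (rule C.tn_mult_TN[OF aa])
    show "lin C.TN (\<lambda>b. tn_mult (Phi a) (Phi b))"
      by (rule lin_compose[OF Phi_lin _ D.tn_mult_lin_r]) (rule Phi_TN)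
  next
    fix g h assume "g \<in> C.tau_gens" "h \<in> C.tau_gens"
    then obtain p q r s where gh: "g = tau br p q" "h = tau br r s" and
      p: "p \<in> FS" and q: "q \<in> FS" and r: "r \<in> FS" and s: "s \<in> FS" by blast
    show "Phi (tn_mult g h) = tn_mult (Phi g) (Phi h)"
      using gh p q r s by (simp add: C.tn_mult_tau D.tn_mult_tau Phi_tau f_FS C.br_FS f_br)
  qed
qed

lemma Phi_unit: "Phi tn_unit = tn_unit"
proof -
  have "Phi tn_unit = C.sweedler C.ep_one (\<lambda>k1 k2. Phi (tau br k1 k2))"
    unfolding C.tn_unit_sweedler by (rule C.sweedler_map[OF C.subspace_TN Phi_lin C.ep_one(1)]) (rule C.tau_TN)
  also have "\<dots> = C.sweedler C.ep_one (\<lambda>k1 k2. tau br' (f k1) (f k2))"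
    by (rule C.sweedler_cong[OF C.ep_one(1)]) (simp add: Phi_tau)
  also have "\<dots> = tn_unit"
  proof (rule D.TN_eqI[OF _ D.tn_unit_TN])
    show "C.sweedler C.ep_one (\<lambda>k1 k2. tau br' (f k1) (f k2)) \<in> D.TN"
      by (rule C.sweedler_mem[OF D.subspace_TN C.ep_one(1)]) (simp add: D.tau_TN f_FS)
    fix d :: "'b \<Rightarrow> 'k" assume d: "d \<in> FS"
    have "app (C.sweedler C.ep_one (\<lambda>k1 k2. tau br' (f k1) (f k2))) d = C.sweedler C.ep_one (\<lambda>k1 k2. br' d (f k1) (f k2))"
      unfolding C.app_sweedler by (rule C.sweedler_cong[OF C.ep_one(1)]) (simp add: D.tau_app d)
    also have "\<dots> = d" by (rule morph_ep_one[OF d])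
    finally show "app (C.sweedler C.ep_one (\<lambda>k1 k2. tau br' (f k1) (f k2))) d = app tn_unit d"
      by (simp add: tn_unit_def app_end_of d)
  qed
  finally show ?thesis .
qed

lemma Phi_counit: "a \<in> C.TN \<Longrightarrow> D.tn_counit (Phi a) = C.tn_counit a"
proof -
  assume a: "a \<in> C.TN"
  show ?thesis
  proof (rule linf_eq_span[of C.tau_gens "\<lambda>a. D.tn_counit (Phi a)" C.tn_counit, folded C.TN_span, OF _ C.linf_tn_counit _ a])
    show "linf C.TN (\<lambda>a. D.tn_counit (Phi a))" by (rule linf_compose[OF Phi_lin _ D.linf_tn_counit]) (rule Phi_TN)
    fix x assume "x \<in> C.tau_gens"
    then obtain p q where x: "x = tau br p q" "p \<in> FS" "q \<in> FS" by blast
    then show "D.tn_counit (Phi x) = C.tn_counit x" by (simp add: Phi_tau D.tn_counit_tau C.tn_counit_tau f_FS f_ep)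
  qed
qed

lemma Phi_coprod: "a \<in> C.TN \<Longrightarrow> trep C.TN C.TN (C.tn_coprod a) ps \<Longrightarrow>
   D.tn_coprod (Phi a) = sum_list (map (\<lambda>(x,y). tens (Phi x) (Phi y)) ps)"
proof -
  assume a: "a \<in> C.TN" and ps: "trep C.TN C.TN (C.tn_coprod a) ps"
  have "sum_list (map (\<lambda>(x,y). tens (Phi x) (Phi y)) ps) = D.tn_coprod (Phi a)"
  proof (rule C.rep_sum_eq_of_tau[OF _ _ _ a ps])
    show "bilinear C.TN C.TN (\<lambda>x y. tens (Phi x) (Phi y))" by (intro bilinearI lin_tens_l lin_tens_r Phi_lin)
    show "lin C.TN (\<lambda>a. D.tn_coprod (Phi a))" by (rule lin_compose[OF Phi_lin _ D.lin_tn_coprod]) (rule Phi_TN)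
    fix p q :: "'a \<Rightarrow> 'k" assume p: "p \<in> FS" and q: "q \<in> FS"
    have "D.tn_coprod (Phi (tau br p q)) = D.tn_coprod (tau br' (f p) (f q))" by (simp add: Phi_tau p q)
    also have "\<dots> = sum_list (map (\<lambda>(a1,a2). sum_list (map (\<lambda>(b1,b2).
              tens (tau br' a2 b1) (tau br' a1 b2)) (map (\<lambda>(u,w). (f u, f w)) (C.sweedler_rep q)))) (map (\<lambda>(u,w). (f u, f w)) (C.sweedler_rep p)))"
      by (rule D.tn_coprod_tau[OF f_FS[OF p] f_FS[OF q] f_rep[OF p C.sweedler_rep_trep[OF p]] f_rep[OF q C.sweedler_rep_trep[OF q]]])
    also have "\<dots> = C.sweedler p (\<lambda>a1 a2. C.sweedler q (\<lambda>b1 b2. tens (Phi (tau br a2 b1)) (Phi (tau br a1 b2))))"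
    proof -
      have "C.sweedler p (\<lambda>a1 a2. C.sweedler q (\<lambda>b1 b2. tens (Phi (tau br a2 b1)) (Phi (tau br a1 b2))))
         = C.sweedler p (\<lambda>a1 a2. C.sweedler q (\<lambda>b1 b2. tens (tau br' (f a2) (f b1)) (tau br' (f a1) (f b2))))"
        by (intro C.sweedler_cong[OF p] C.sweedler_cong[OF q]) (simp add: Phi_tau)
      then show ?thesis by (simp add: C.sweedler_def case_prod_unfold o_def)
    qed
    finally show "C.sweedler p (\<lambda>a1 a2. C.sweedler q (\<lambda>b1 b2. tens (Phi (tau br a2 b1)) (Phi (tau br a1 b2)))) = D.tn_coprod (Phi (tau br p q))" ..
  qed
  then show ?thesis by simp
qed

lemma Phi_bialg_map: "bialg_map C.TN tn_mult tn_unit C.tn_coprod C.tn_counit D.TN tn_mult tn_unit D.tn_coprod D.tn_counit Phi"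
  unfolding bialg_map_def
  using Phi_lin Phi_TN Phi_mult Phi_unit Phi_counit Phi_coprod by blast

lemma bialg_map_of_tn_struct:
  "tn_struct br Dl ep DT eT \<Longrightarrow> tn_struct br' Dl' ep' DT' eT' \<Longrightarrow>
    bialg_map C.TN tn_mult tn_unit DT eT D.TN tn_mult tn_unit DT' eT' Phi"
  by (rule bialg_map_cong[OF Phi_bialg_map]) (simp_all add: C.tn_struct_unique D.tn_struct_unique)


lemma Phi_antipode:
  assumes G: "grunspan Dl ep br \<theta>" and G': "grunspan Dl' ep' br' \<theta>'"
    and S: "tn_antipode br \<theta> S" and S': "tn_antipode br' \<theta>' S'" and t: "t \<in> C.TN"
  shows "Phi (S t) = S' (Phi t)"
proof -
  have Sl: "lin C.TN S" and St: "\<And>a b. a \<in> FS \<Longrightarrow> b \<in> FS \<Longrightarrow> S (tau br a b) = tau br b (\<theta> a)"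
    using S unfolding tn_antipode_def by blast+
  have S'l: "lin D.TN S'" and S't: "\<And>a b. a \<in> FS \<Longrightarrow> b \<in> FS \<Longrightarrow> S' (tau br' a b) = tau br' b (\<theta>' a)"
    using S' unfolding tn_antipode_def by blast+
  have SSc: "S x = C.tn_antip x" if "x \<in> C.TN" for x
  proof (rule lin_eq_span[of C.tau_gens S C.tn_antip x, folded C.TN_span, OF Sl C.lin_tn_antip _ that])
    fix y assume "y \<in> C.tau_gens"
    then obtain a b where "y = tau br a b" "a \<in> FS" "b \<in> FS" by blast
    then show "S y = C.tn_antip y" by (simp add: St C.tn_antip_tau[OF G])
  qed
  have S'Sc: "S' x = D.tn_antip x" if "x \<in> D.TN" for x
  proof (rule lin_eq_span[of D.tau_gens S' D.tn_antip x, folded D.TN_span, OF S'l D.lin_tn_antip _ that])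
    fix y assume "y \<in> D.tau_gens"
    then obtain a b where "y = tau br' a b" "a \<in> FS" "b \<in> FS" by blast
    then show "S' y = D.tn_antip y" by (simp add: S't D.tn_antip_tau[OF G'])
  qed
  have "Phi (C.tn_antip t) = D.tn_antip (Phi t)"
  proof (rule lin_eq_span[of C.tau_gens "\<lambda>t. Phi (C.tn_antip t)" "\<lambda>t. D.tn_antip (Phi t)" t, folded C.TN_span, OF _ _ _ t])
    show "lin C.TN (\<lambda>t. Phi (C.tn_antip t))" by (rule lin_compose[OF C.lin_tn_antip _ Phi_lin]) (rule C.tn_antip_TN[OF G])
    show "lin C.TN (\<lambda>t. D.tn_antip (Phi t))" by (rule lin_compose[OF Phi_lin _ D.lin_tn_antip]) (rule Phi_TN)
    fix y assume "y \<in> C.tau_gens"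
    then obtain a b where y: "y = tau br a b" "a \<in> FS" "b \<in> FS" by blast
    have "Phi (C.tn_antip y) = tau br' (f b) (f (\<theta> a))" using y by (simp add: C.tn_antip_tau[OF G] Phi_tau C.grunspan_FS[OF G])
    also have "\<dots> = tau br' (f b) (\<theta>' (f a))"
      unfolding tau_def by (rule end_of_cong) (rule morph_grunspan[OF G G' y(2,3)])
    also have "\<dots> = D.tn_antip (Phi y)" using y by (simp add: D.tn_antip_tau[OF G'] Phi_tau f_FS)
    finally show "Phi (C.tn_antip y) = D.tn_antip (Phi y)" .
  qed
  then show ?thesis using SSc[OF t] S'Sc[OF Phi_TN[OF t]] by simp
qed

end
end

lemma heap_morph_comp:
  fixes f :: "('a \<Rightarrow> 'k::field) \<Rightarrow> ('b \<Rightarrow> 'k)" and g :: "('b \<Rightarrow> 'k) \<Rightarrow> ('c \<Rightarrow> 'k)"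
  assumes H1: "hopf_heap Dl ep br" and H2: "hopf_heap Dl' ep' br'" and H3: "hopf_heap Dl'' ep'' br''"
    and f: "heap_morph Dl ep br Dl' ep' br' f" and g: "heap_morph Dl' ep' br' Dl'' ep'' br'' g"
  shows "heap_morph Dl ep br Dl'' ep'' br'' (g \<circ> f)"
proof -
  interpret F: hheap_morph Dl ep br Dl' ep' br' f using H1 H2 f by (simp add: hheap_morph_def hheap_def hheap_morph_axioms_def)
  interpret G: hheap_morph Dl' ep' br' Dl'' ep'' br'' g using H2 H3 g by (simp add: hheap_morph_def hheap_def hheap_morph_axioms_def)
  show ?thesis unfolding heap_morph_def coalg_map_def
  proof (intro conjI ballI allI impI)
    show "lin FS (g \<circ> f)" unfolding comp_def by (rule lin_compose[OF F.f_lin _ G.f_lin]) (rule F.f_FS)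
    show "(g \<circ> f) ` FS \<subseteq> FS" by (auto intro: F.f_FS G.f_FS)
    fix a :: "'a \<Rightarrow> 'k" assume a: "a \<in> FS"
    show "ep'' ((g \<circ> f) a) = ep a" by (simp add: G.f_ep F.f_FS F.f_ep a)
    { fix ps assume ps: "trep FS FS (Dl a) ps"
      show "Dl'' ((g \<circ> f) a) = sum_list (map (\<lambda>(u,w). tens ((g \<circ> f) u) ((g \<circ> f) w)) ps)"
        using G.f_Dl[OF F.f_FS[OF a] F.f_rep[OF a ps]] by (simp add: case_prod_unfold o_def) }
    fix b c :: "'a \<Rightarrow> 'k" assume b: "b \<in> FS" and c: "c \<in> FS"
    show "(g \<circ> f) (br a b c) = br'' ((g \<circ> f) a) ((g \<circ> f) b) ((g \<circ> f) c)"
      by (simp add: F.f_br G.f_br F.f_FS a b c)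
  qed
qed

lemma tn_map_comp:
  fixes f :: "('a \<Rightarrow> 'k::field) \<Rightarrow> ('b \<Rightarrow> 'k)" and g :: "('b \<Rightarrow> 'k) \<Rightarrow> ('c \<Rightarrow> 'k)"
  assumes H1: "hopf_heap Dl ep br" and H2: "hopf_heap Dl' ep' br'" and H3: "hopf_heap Dl'' ep'' br''"
    and f: "heap_morph Dl ep br Dl' ep' br' f" and g: "heap_morph Dl' ep' br' Dl'' ep'' br'' g"
    and Pf: "tn_map br br' f Pf" and Pg: "tn_map br' br'' g Pg" and Pgf: "tn_map br br'' (g \<circ> f) Pgf"
    and t: "t \<in> Tn br"
  shows "Pgf t = Pg (Pf t)"
proof -
  interpret F: hheap_morph Dl ep br Dl' ep' br' f using H1 H2 f by (simp add: hheap_morph_def hheap_def hheap_morph_axioms_def)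
  interpret G: hheap_morph Dl' ep' br' Dl'' ep'' br'' g using H2 H3 g by (simp add: hheap_morph_def hheap_def hheap_morph_axioms_def)
  show ?thesis
  proof (rule lin_eq_span[of F.C.tau_gens Pgf "\<lambda>t. Pg (Pf t)" t, folded F.C.TN_span, OF _ _ _ t])
    show "lin F.C.TN Pgf" using Pgf unfolding tn_map_def by blast
    show "lin F.C.TN (\<lambda>t. Pg (Pf t))"
      by (rule lin_compose[OF F.Phi_lin[OF Pf] _ G.Phi_lin[OF Pg]]) (rule F.Phi_TN[OF Pf])
    fix x assume "x \<in> F.C.tau_gens"
    then obtain a b where x: "x = tau br a b" "a \<in> FS" "b \<in> FS" by blast
    then show "Pgf x = Pg (Pf x)"
      using F.Phi_tau[OF Pf] G.Phi_tau[OF Pg] Pgf F.f_FS unfolding tn_map_def by simp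
  qed
qed

theorem mainTheorem3:
  fixes Dl :: "('a \<Rightarrow> 'k::field) \<Rightarrow> ('a \<times> 'a \<Rightarrow> 'k)"
    and ep :: "('a \<Rightarrow> 'k) \<Rightarrow> 'k"
    and br :: "('a \<Rightarrow> 'k) \<Rightarrow> ('a \<Rightarrow> 'k) \<Rightarrow> ('a \<Rightarrow> 'k) \<Rightarrow> ('a \<Rightarrow> 'k)"
  assumes heap: "hopf_heap Dl ep br"
  shows
   "(\<forall>a\<in>FS. \<forall>b\<in>FS. \<forall>c\<in>FS. \<forall>d\<in>FS. tn_mult (tau br a b) (tau br c d) = tau br a (br b c d))
    \<and> (\<exists>DT eT. tn_struct br Dl ep DT eT \<and> bialgebra (Tn br) tn_mult tn_unit DT eT)
    \<and> (\<forall>DT eT. tn_struct br Dl ep DT eT \<longrightarrow> bialgebra (Tn br) tn_mult tn_unit DT eT)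
    \<and> (\<forall>\<theta> DT eT. grunspan Dl ep br \<theta> \<longrightarrow> tn_struct br Dl ep DT eT \<longrightarrow>
         (\<exists>S. tn_antipode br \<theta> S \<and> hopf_algebra (Tn br) tn_mult tn_unit DT eT S))
    \<and> (\<forall>(Dl' :: ('b \<Rightarrow> 'k) \<Rightarrow> ('b \<times> 'b \<Rightarrow> 'k)) ep' br' f.
         hopf_heap Dl' ep' br' \<longrightarrow> heap_morph Dl ep br Dl' ep' br' f \<longrightarrow>
           (\<exists>\<Phi>. tn_map br br' f \<Phi>) \<and>
           (\<forall>\<Phi> DT eT DT' eT'. tn_map br br' f \<Phi> \<longrightarrow>
              tn_struct br Dl ep DT eT \<longrightarrow> tn_struct br' Dl' ep' DT' eT' \<longrightarrow>
                bialg_map (Tn br) tn_mult tn_unit DT eT (Tn br') tn_mult tn_unit DT' eT' \<Phi> \<and>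
                (\<forall>\<theta> \<theta>' S S'. grunspan Dl ep br \<theta> \<longrightarrow> grunspan Dl' ep' br' \<theta>' \<longrightarrow>
                   tn_antipode br \<theta> S \<longrightarrow> tn_antipode br' \<theta>' S' \<longrightarrow>
                   (\<forall>t\<in>Tn br. \<Phi> (S t) = S' (\<Phi> t)))))
    \<and> (\<forall>\<Phi>. tn_map br br (\<lambda>x. x) \<Phi> \<longrightarrow> (\<forall>t\<in>Tn br. \<Phi> t = t))
    \<and> (\<forall>(Dl' :: ('b \<Rightarrow> 'k) \<Rightarrow> ('b \<times> 'b \<Rightarrow> 'k)) ep' br' (Dl'' :: ('c \<Rightarrow> 'k) \<Rightarrow> ('c \<times> 'c \<Rightarrow> 'k)) ep'' br'' f g.
         hopf_heap Dl' ep' br' \<longrightarrow> hopf_heap Dl'' ep'' br'' \<longrightarrow>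
         heap_morph Dl ep br Dl' ep' br' f \<longrightarrow> heap_morph Dl' ep' br' Dl'' ep'' br'' g \<longrightarrow>
           heap_morph Dl ep br Dl'' ep'' br'' (g \<circ> f) \<and>
           (\<forall>\<Phi>f \<Phi>g \<Phi>gf. tn_map br br' f \<Phi>f \<longrightarrow> tn_map br' br'' g \<Phi>g \<longrightarrow> tn_map br br'' (g \<circ> f) \<Phi>gf \<longrightarrow>
              (\<forall>t\<in>Tn br. \<Phi>gf t = \<Phi>g (\<Phi>f t))))"
proof -
  interpret hheap Dl ep br by (rule hheap.intro[OF heap])
  have morph: "hheap_morph Dl ep br Dl' ep' br' f"
    if "hopf_heap Dl' ep' br'" "heap_morph Dl ep br Dl' ep' br' f"
    for Dl' :: "('b \<Rightarrow> 'k) \<Rightarrow> ('b \<times> 'b \<Rightarrow> 'k)" and ep' br' f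
    using heap that by (simp add: hheap_morph_def hheap_def hheap_morph_axioms_def)
  show ?thesis
  proof (intro conjI allI impI ballI exI)
    show "tn_mult (tau br a b) (tau br c d) = tau br a (br b c d)"
      if "a \<in> FS" "b \<in> FS" "c \<in> FS" "d \<in> FS" for a b c d
      using that by (rule tn_mult_tau)
  qed (auto intro: tn_struct_canonical bialgebra_TN bialgebra_of_tn_struct hopf_algebra_of_tn_struct
      tn_antipode_canonical tn_map_id heap_morph_comp[OF heap] tn_map_comp[OF heap]
      hheap_morph.tn_map_tn_induced[OF morph] hheap_morph.bialg_map_of_tn_struct[OF morph]
      hheap_morph.Phi_antipode[OF morph])
qed

end
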